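(* The categories $\mathcal{YD}\mathrm{PH}(\mathrm{Vec}_\Bbbk)$ and $\mathrm{MP}(\mathrm{Vec}_\Bbbk)$ are isomorphic. Explicitly: from a Yetter--Drinfeld post-Hopf algebra $(H,\cdot,1,\Delta,\epsilon,S,\rightharpoonup)$ one obtains the matched pair of actions $(H_\rightharpoonup,\rightharpoonup,\leftharpoonup)$ on its subadjacent Hopf algebra $H_\rightharpoonup=(H,\bullet_\rightharpoonup,1,\Delta,\epsilon,S_\rightharpoonup)$, with $\leftharpoonup$ as in (P6); conversely, from a matched pair of actions $(H,\rightharpoonup,\leftharpoonup)$ on a Hopf algebra $(H,\bullet,1,\Delta,\epsilon,T)$ one obtains the Yetter--Drinfeld post-Hopf algebra $(H,\cdot,1,\Delta,\epsilon,S,\rightharpoonup)$ with $a\cdot b:=a_1\bullet(T(a_2)\rightharpoonup b)$ and $S(a):=a_1\rightharpoonup T(a_2)$; these assignments (identity on underlying maps for morphisms) are mutually inverse.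
   Context: Conventions: $\Bbbk$ is a field; algebras are associative unital, coalgebras coassociative counital; Sweedler notation $\Delta(c)=c_1\otimes c_2$ (summation omitted), iterated as $c_1\otimes c_2\otimes c_3$ etc.; $H\otimes H$ carries the tensor product coalgebra structure. Definition (Yetter--Drinfeld post-Hopf algebra). A tuple $(H,\cdot,1,\Delta,\epsilon,S,\rightharpoonup)$ where $(H,\cdot,1)$ is an algebra, $(H,\Delta,\epsilon)$ is a coalgebra on the same vector space, $S:H\to H$ is linear with $x_1\cdot S(x_2)=S(x_1)\cdot x_2=\epsilon(x)1$ for all $x$, and $\rightharpoonup:H\otimes H\to H$ is a coalgebra morphism, such that for all $x,y,z\in H$: (P1) $x\rightharpoonup(y\cdot z)=(x_1\rightharpoonup y)\cdot(x_2\rightharpoonup z)$; (P2) $x\rightharpoonup(y\rightharpoonup z)=\big(x_1\cdot(x_2\rightharpoonup y)\big)\rightharpoonup z$; (P3) the map $\alpha_\rightharpoonup:H\to\mathrm{End}(H)$, $\alpha_\rightharpoonup(x)(y)=x\rightharpoonup y$, is convolution invertible, i.e. there is $\beta_\rightharpoonup:H\to\mathrm{End}(H)$ with $\alpha_\rightharpoonup(x_1)\circ\beta_\rightharpoonup(x_2)=\beta_\rightharpoonup(x_1)\circ\alpha_\rightharpoonup(x_2)=\epsilon(x)\mathrm{Id}_H$; (P4) $\epsilon(a\cdot b)=\epsilon(a)\epsilon(b)$, $\epsilon(1)=1_\Bbbk$, $\Delta(1)=1\otimes 1$; (P5) $\Delta(x\cdot y)=\Big(x_1\cdot\alpha_\rightharpoonup(x_2)\big(\beta_\rightharpoonup(x_4)(y_1)\big)\Big)\otimes(x_3\cdot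 y_2)$; (P6) setting $x\bullet_\rightharpoonup y:=x_1\cdot(x_2\rightharpoonup y)$, $S_\rightharpoonup(x):=\beta_\rightharpoonup(x_1)(S(x_2))$ and $x\leftharpoonup y:=\big(S_\rightharpoonup(x_1\rightharpoonup y_1)\bullet_\rightharpoonup x_2\big)\bullet_\rightharpoonup y_2$, one has $\Delta(S_\rightharpoonup(x))=S_\rightharpoonup(x_2)\otimes S_\rightharpoonup(x_1)$ and $(x_1\rightharpoonup y_1)\otimes(x_2\leftharpoonup y_2)=(x_2\rightharpoonup y_2)\otimes(x_1\leftharpoonup y_1)$. A morphism of Yetter--Drinfeld post-Hopf algebras $(H,\rightharpoonup)\to(H',\rightharpoonup')$ is an algebra and coalgebra morphism $g$ with $g(x\rightharpoonup y)=g(x)\rightharpoonup' g(y)$; these form the category $\mathcal{YD}\mathrm{PH}(\mathrm{Vec}_\Bbbk)$. Fact: $H_\rightharpoonup$ is a Hopf algebra. Definition (matched pair of actions). For a bialgebra $(H,\bullet,1,\Delta,\epsilon)$, a matched pair of actions $(H,\rightharpoonup,\leftharpoonup)$ is a left action $\rightharpoonup$ and a right action $\leftharpoonup$ of $(H,\bullet)$ on itself making $H$ a left and a right module coalgebra, such that for all $a,b,c$: $a\rightharpoonup1=\epsilon(a)1$; $1\leftharpoonup a=\epsilon(a)1$; $a\rightharpoonup(b\bullet c)=(a_1\rightharpoonup b_1)\bullet((a_2\leftharpoonup b_2)\rightharpoonup c)$; $(a\bullet b)\leftharpoonup c=(a\leftharpoonup(b_1\rightharpoonup c_1))\bullet(b_2\leftharpoonup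 c_2)$; $a\bullet b=(a_1\rightharpoonup b_1)\bullet(a_2\leftharpoonup b_2)$. Morphisms are bialgebra morphisms $f$ with $f(a\rightharpoonup b)=f(a)\rightharpoonup f(b)$ and $f(a\leftharpoonup b)=f(a)\leftharpoonup f(b)$. $\mathrm{MP}(\mathrm{Vec}_\Bbbk)$ denotes the category of matched pairs of actions on Hopf algebras. *)

theory Defs
  imports Main "HOL.Vector_Spaces"
begin

text \<open>
An element of H \<otimes> H is represented by a finite list of pairs [(a_i,b_i)]
standing for \<Sum> a_i \<otimes> b_i; two such lists denote the same tensor iff every bilinear
form H \<times> H \<rightarrow> k takes the same value on them (bilinear forms separate the points of
H \<otimes> H over a field).  Similarly for H \<otimes> H \<otimes> H with trilinear forms.  A comultiplication
is a map delta :: 'h \<Rightarrow> ('h \<times> 'h) list, and Sweedler sums x_1 \<otimes> x_2 (\<otimes> x_3 \<otimes> x_4)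
are sums over delta x (resp. its iterates sw3, sw4).  All Sweedler expressions below are
multilinear in the legs, hence independent of the chosen representatives.
\<close>

definition bilinH :: "('k::field \<Rightarrow> 'h::ab_group_add \<Rightarrow> 'h) \<Rightarrow> ('h \<Rightarrow> 'h \<Rightarrow> 'h) \<Rightarrow> bool" where
  "bilinH sc m \<longleftrightarrow> (\<forall>x. Vector_Spaces.linear sc sc (m x)) \<and> (\<forall>y. Vector_Spaces.linear sc sc (\<lambda>x. m x y))"

definition bilinK :: "('k::field \<Rightarrow> 'h::ab_group_add \<Rightarrow> 'h) \<Rightarrow> ('h \<Rightarrow> 'h \<Rightarrow> 'k) \<Rightarrow> bool" where
  "bilinK sc B \<longleftrightarrow> (\<forall>x. Vector_Spaces.linear sc ((*) :: 'k \<Rightarrow> 'k \<Rightarrow> 'k) (B x))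
                  \<and> (\<forall>y. Vector_Spaces.linear sc ((*) :: 'k \<Rightarrow> 'k \<Rightarrow> 'k) (\<lambda>x. B x y))"

definition trilinK :: "('k::field \<Rightarrow> 'h::ab_group_add \<Rightarrow> 'h) \<Rightarrow> ('h \<Rightarrow> 'h \<Rightarrow> 'h \<Rightarrow> 'k) \<Rightarrow> bool" where
  "trilinK sc F \<longleftrightarrow> (\<forall>y z. Vector_Spaces.linear sc ((*) :: 'k \<Rightarrow> 'k \<Rightarrow> 'k) (\<lambda>x. F x y z))
                   \<and> (\<forall>x z. Vector_Spaces.linear sc ((*) :: 'k \<Rightarrow> 'k \<Rightarrow> 'k) (\<lambda>y. F x y z))
                   \<and> (\<forall>x y. Vector_Spaces.linear sc ((*) :: 'k \<Rightarrow> 'k \<Rightarrow> 'k) (\<lambda>z. F x y z))"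

definition teq2 :: "('k::field \<Rightarrow> 'h::ab_group_add \<Rightarrow> 'h) \<Rightarrow> ('h \<times> 'h) list \<Rightarrow> ('h \<times> 'h) list \<Rightarrow> bool" where
  "teq2 sc xs ys \<longleftrightarrow> (\<forall>B. bilinK sc B \<longrightarrow>
      sum_list (map (\<lambda>(a,b). B a b) xs) = sum_list (map (\<lambda>(a,b). B a b) ys))"

definition teq3 :: "('k::field \<Rightarrow> 'h::ab_group_add \<Rightarrow> 'h) \<Rightarrow> ('h \<times> 'h \<times> 'h) list \<Rightarrow> ('h \<times> 'h \<times> 'h) list \<Rightarrow> bool" where
  "teq3 sc xs ys \<longleftrightarrow> (\<forall>F. trilinK sc F \<longrightarrow>
      sum_list (map (\<lambda>(a,b,c). F a b c) xs) = sum_list (map (\<lambda>(a,b,c). F a b c) ys))"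

definition sw3 :: "('h \<Rightarrow> ('h \<times> 'h) list) \<Rightarrow> 'h \<Rightarrow> ('h \<times> 'h \<times> 'h) list" where
  "sw3 delta x = concat (map (\<lambda>(a,b). map (\<lambda>(a1,a2). (a1,a2,b)) (delta a)) (delta x))"

definition sw4 :: "('h \<Rightarrow> ('h \<times> 'h) list) \<Rightarrow> 'h \<Rightarrow> ('h \<times> 'h \<times> 'h \<times> 'h) list" where
  "sw4 delta x = concat (map (\<lambda>(a,b). map (\<lambda>(a1,a2,a3). (a1,a2,a3,b)) (sw3 delta a)) (delta x))"

definition is_algebra :: "('k::field \<Rightarrow> 'h::ab_group_add \<Rightarrow> 'h) \<Rightarrow> ('h \<Rightarrow> 'h \<Rightarrow> 'h) \<Rightarrow> 'h \<Rightarrow> bool" where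
  "is_algebra sc m u \<longleftrightarrow> vector_space sc \<and> bilinH sc m
     \<and> (\<forall>x y z. m (m x y) z = m x (m y z)) \<and> (\<forall>x. m u x = x \<and> m x u = x)"

definition is_coalgebra :: "('k::field \<Rightarrow> 'h::ab_group_add \<Rightarrow> 'h) \<Rightarrow> ('h \<Rightarrow> ('h \<times> 'h) list) \<Rightarrow> ('h \<Rightarrow> 'k) \<Rightarrow> bool" where
  "is_coalgebra sc delta eps \<longleftrightarrow> vector_space sc
     \<and> (\<forall>c x y. teq2 sc (delta (sc c x + y)) (map (\<lambda>(a,b). (sc c a, b)) (delta x) @ delta y))
     \<and> Vector_Spaces.linear sc ((*) :: 'k \<Rightarrow> 'k \<Rightarrow> 'k) eps
     \<and> (\<forall>x. teq3 sc (sw3 delta x) (concat (map (\<lambda>(a,b). map (\<lambda>(b1,b2). (a,b1,b2)) (delta b)) (delta x))))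
     \<and> (\<forall>x. sum_list (map (\<lambda>(a,b). sc (eps a) b) (delta x)) = x)
     \<and> (\<forall>x. sum_list (map (\<lambda>(a,b). sc (eps b) a) (delta x)) = x)"

definition is_bialgebra :: "('k::field \<Rightarrow> 'h::ab_group_add \<Rightarrow> 'h) \<Rightarrow> ('h \<Rightarrow> 'h \<Rightarrow> 'h) \<Rightarrow> 'h
     \<Rightarrow> ('h \<Rightarrow> ('h \<times> 'h) list) \<Rightarrow> ('h \<Rightarrow> 'k) \<Rightarrow> bool" where
  "is_bialgebra sc m u delta eps \<longleftrightarrow> is_algebra sc m u \<and> is_coalgebra sc delta eps
     \<and> (\<forall>x y. teq2 sc (delta (m x y))
                 (concat (map (\<lambda>(a,b). map (\<lambda>(c,d). (m a c, m b d)) (delta y)) (delta x))))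
     \<and> teq2 sc (delta u) [(u,u)]
     \<and> (\<forall>x y. eps (m x y) = eps x * eps y) \<and> eps u = 1"

definition is_antipode :: "('k::field \<Rightarrow> 'h::ab_group_add \<Rightarrow> 'h) \<Rightarrow> ('h \<Rightarrow> 'h \<Rightarrow> 'h) \<Rightarrow> 'h
     \<Rightarrow> ('h \<Rightarrow> ('h \<times> 'h) list) \<Rightarrow> ('h \<Rightarrow> 'k) \<Rightarrow> ('h \<Rightarrow> 'h) \<Rightarrow> bool" where
  "is_antipode sc m u delta eps S \<longleftrightarrow> Vector_Spaces.linear sc sc S
     \<and> (\<forall>x. sum_list (map (\<lambda>(a,b). m a (S b)) (delta x)) = sc (eps x) u)
     \<and> (\<forall>x. sum_list (map (\<lambda>(a,b). m (S a) b) (delta x)) = sc (eps x) u)"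

definition is_hopf :: "('k::field \<Rightarrow> 'h::ab_group_add \<Rightarrow> 'h) \<Rightarrow> ('h \<Rightarrow> 'h \<Rightarrow> 'h) \<Rightarrow> 'h
     \<Rightarrow> ('h \<Rightarrow> ('h \<times> 'h) list) \<Rightarrow> ('h \<Rightarrow> 'k) \<Rightarrow> ('h \<Rightarrow> 'h) \<Rightarrow> bool" where
  "is_hopf sc m u delta eps S \<longleftrightarrow> is_bialgebra sc m u delta eps \<and> is_antipode sc m u delta eps S"

record ('k, 'h) ydph =
  ymul :: "'h \<Rightarrow> 'h \<Rightarrow> 'h"
  yone :: 'h
  ydelta :: "'h \<Rightarrow> ('h \<times> 'h) list"
  yeps :: "'h \<Rightarrow> 'k"
  yS :: "'h \<Rightarrow> 'h"
  yact :: "'h \<Rightarrow> 'h \<Rightarrow> 'h"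

text \<open>beta is a (linear) convolution inverse of alpha(x) = (x \<rightharpoonup> -) in Hom(H, End(H)).\<close>
definition is_conv_inv :: "('k::field \<Rightarrow> 'h::ab_group_add \<Rightarrow> 'h) \<Rightarrow> ('h \<Rightarrow> ('h \<times> 'h) list) \<Rightarrow> ('h \<Rightarrow> 'k)
     \<Rightarrow> ('h \<Rightarrow> 'h \<Rightarrow> 'h) \<Rightarrow> ('h \<Rightarrow> 'h \<Rightarrow> 'h) \<Rightarrow> bool" where
  "is_conv_inv sc delta eps act beta \<longleftrightarrow> bilinH sc beta
     \<and> (\<forall>x y. sum_list (map (\<lambda>(a,b). act a (beta b y)) (delta x)) = sc (eps x) y)
     \<and> (\<forall>x y. sum_list (map (\<lambda>(a,b). beta a (act b y)) (delta x)) = sc (eps x) y)"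

text \<open>The convolution inverse beta (unique when it exists).\<close>
definition betaOf :: "('k::field \<Rightarrow> 'h::ab_group_add \<Rightarrow> 'h) \<Rightarrow> ('k, 'h) ydph \<Rightarrow> ('h \<Rightarrow> 'h \<Rightarrow> 'h)" where
  "betaOf sc A = (SOME beta. is_conv_inv sc (ydelta A) (yeps A) (yact A) beta)"

definition bulletOf :: "('k, 'h::ab_group_add) ydph \<Rightarrow> 'h \<Rightarrow> 'h \<Rightarrow> 'h" where
  "bulletOf A x y = sum_list (map (\<lambda>(a,b). ymul A a (yact A b y)) (ydelta A x))"

definition SOf :: "('k::field \<Rightarrow> 'h::ab_group_add \<Rightarrow> 'h) \<Rightarrow> ('k, 'h) ydph \<Rightarrow> 'h \<Rightarrow> 'h" where
  "SOf sc A x = sum_list (map (\<lambda>(a,b). betaOf sc A a (yS A b)) (ydelta A x))"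

definition ractOf :: "('k::field \<Rightarrow> 'h::ab_group_add \<Rightarrow> 'h) \<Rightarrow> ('k, 'h) ydph \<Rightarrow> 'h \<Rightarrow> 'h \<Rightarrow> 'h" where
  "ractOf sc A x y = sum_list (concat (map (\<lambda>(x1,x2). map (\<lambda>(y1,y2).
       bulletOf A (bulletOf A (SOf sc A (yact A x1 y1)) x2) y2) (ydelta A y)) (ydelta A x)))"

definition is_YDPH :: "('k::field \<Rightarrow> 'h::ab_group_add \<Rightarrow> 'h) \<Rightarrow> ('k, 'h) ydph \<Rightarrow> bool" where
  "is_YDPH sc A \<longleftrightarrow>
     (let m = ymul A; u = yone A; delta = ydelta A; eps = yeps A; S = yS A; act = yact A;
          beta = betaOf sc A; bul = bulletOf A; SA = SOf sc A; ract = ractOf sc A in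
       is_algebra sc m u \<and> is_coalgebra sc delta eps
       \<and> is_antipode sc m u delta eps S
       \<comment> \<open>act : H \<otimes> H \<rightarrow> H is a coalgebra morphism\<close>
       \<and> bilinH sc act
       \<and> (\<forall>x y. teq2 sc (delta (act x y))
                 (concat (map (\<lambda>(x1,x2). map (\<lambda>(y1,y2). (act x1 y1, act x2 y2)) (delta y)) (delta x))))
       \<and> (\<forall>x y. eps (act x y) = eps x * eps y)
       \<comment> \<open>(P1)\<close>
       \<and> (\<forall>x y z. act x (m y z) = sum_list (map (\<lambda>(x1,x2). m (act x1 y) (act x2 z)) (delta x)))
       \<comment> \<open>(P2)\<close>
       \<and> (\<forall>x y z. act x (act y z) = act (bul x y) z)
       \<comment> \<open>(P3)\<close>
       \<and> (\<exists>b. is_conv_inv sc delta eps act b)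
       \<comment> \<open>(P4)\<close>
       \<and> (\<forall>a b. eps (m a b) = eps a * eps b) \<and> eps u = 1 \<and> teq2 sc (delta u) [(u,u)]
       \<comment> \<open>(P5)\<close>
       \<and> (\<forall>x y. teq2 sc (delta (m x y))
            (concat (map (\<lambda>(x1,x2,x3,x4). map (\<lambda>(y1,y2).
                 (m x1 (act x2 (beta x4 y1)), m x3 y2)) (delta y)) (sw4 delta x))))
       \<comment> \<open>(P6)\<close>
       \<and> (\<forall>x. teq2 sc (delta (SA x)) (map (\<lambda>(x1,x2). (SA x2, SA x1)) (delta x)))
       \<and> (\<forall>x y. teq2 sc
            (concat (map (\<lambda>(x1,x2). map (\<lambda>(y1,y2). (act x1 y1, ract x2 y2)) (delta y)) (delta x)))
            (concat (map (\<lambda>(x1,x2). map (\<lambda>(y1,y2). (act x2 y2, ract x1 y1)) (delta y)) (delta x)))))"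

definition is_YD_hom :: "('k::field \<Rightarrow> 'h::ab_group_add \<Rightarrow> 'h) \<Rightarrow> ('k \<Rightarrow> 'g::ab_group_add \<Rightarrow> 'g)
     \<Rightarrow> ('h \<Rightarrow> 'g) \<Rightarrow> ('k, 'h) ydph \<Rightarrow> ('k, 'g) ydph \<Rightarrow> bool" where
  "is_YD_hom sc sc' f A A' \<longleftrightarrow> Vector_Spaces.linear sc sc' f
     \<and> (\<forall>x y. f (ymul A x y) = ymul A' (f x) (f y)) \<and> f (yone A) = yone A'
     \<and> (\<forall>x. teq2 sc' (ydelta A' (f x)) (map (\<lambda>(a,b). (f a, f b)) (ydelta A x)))
     \<and> (\<forall>x. yeps A' (f x) = yeps A x)
     \<and> (\<forall>x y. f (yact A x y) = yact A' (f x) (f y))"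

record ('k, 'h) mpair =
  bmul :: "'h \<Rightarrow> 'h \<Rightarrow> 'h"
  bone :: 'h
  bdelta :: "'h \<Rightarrow> ('h \<times> 'h) list"
  beps :: "'h \<Rightarrow> 'k"
  bT :: "'h \<Rightarrow> 'h"
  lact :: "'h \<Rightarrow> 'h \<Rightarrow> 'h"
  ract :: "'h \<Rightarrow> 'h \<Rightarrow> 'h"

definition is_MP :: "('k::field \<Rightarrow> 'h::ab_group_add \<Rightarrow> 'h) \<Rightarrow> ('k, 'h) mpair \<Rightarrow> bool" where
  "is_MP sc M \<longleftrightarrow>
     (let m = bmul M; u = bone M; delta = bdelta M; eps = beps M; T = bT M;
          la = lact M; ra = ract M in
       is_hopf sc m u delta eps T
       \<comment> \<open>left action, left module coalgebra\<close>
       \<and> bilinH sc la \<and> (\<forall>b. la u b = b) \<and> (\<forall>a b c. la (m a b) c = la a (la b c))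
       \<and> (\<forall>a b. teq2 sc (delta (la a b))
                 (concat (map (\<lambda>(a1,a2). map (\<lambda>(b1,b2). (la a1 b1, la a2 b2)) (delta b)) (delta a))))
       \<and> (\<forall>a b. eps (la a b) = eps a * eps b)
       \<comment> \<open>right action, right module coalgebra\<close>
       \<and> bilinH sc ra \<and> (\<forall>a. ra a u = a) \<and> (\<forall>a b c. ra a (m b c) = ra (ra a b) c)
       \<and> (\<forall>a b. teq2 sc (delta (ra a b))
                 (concat (map (\<lambda>(a1,a2). map (\<lambda>(b1,b2). (ra a1 b1, ra a2 b2)) (delta b)) (delta a))))
       \<and> (\<forall>a b. eps (ra a b) = eps a * eps b)
       \<comment> \<open>matched pair conditions\<close>
       \<and> (\<forall>a. la a u = sc (eps a) u)
       \<and> (\<forall>a. ra u a = sc (eps a) u)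
       \<and> (\<forall>a b c. la a (m b c) = sum_list (concat (map (\<lambda>(a1,a2). map (\<lambda>(b1,b2).
                     m (la a1 b1) (la (ra a2 b2) c)) (delta b)) (delta a))))
       \<and> (\<forall>a b c. ra (m a b) c = sum_list (concat (map (\<lambda>(b1,b2). map (\<lambda>(c1,c2).
                     m (ra a (la b1 c1)) (ra b2 c2)) (delta c)) (delta b))))
       \<and> (\<forall>a b. m a b = sum_list (concat (map (\<lambda>(a1,a2). map (\<lambda>(b1,b2).
                     m (la a1 b1) (ra a2 b2)) (delta b)) (delta a)))))"

definition is_MP_hom :: "('k::field \<Rightarrow> 'h::ab_group_add \<Rightarrow> 'h) \<Rightarrow> ('k \<Rightarrow> 'g::ab_group_add \<Rightarrow> 'g)
     \<Rightarrow> ('h \<Rightarrow> 'g) \<Rightarrow> ('k, 'h) mpair \<Rightarrow> ('k, 'g) mpair \<Rightarrow> bool" where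
  "is_MP_hom sc sc' f M M' \<longleftrightarrow> Vector_Spaces.linear sc sc' f
     \<and> (\<forall>x y. f (bmul M x y) = bmul M' (f x) (f y)) \<and> f (bone M) = bone M'
     \<and> (\<forall>x. teq2 sc' (bdelta M' (f x)) (map (\<lambda>(a,b). (f a, f b)) (bdelta M x)))
     \<and> (\<forall>x. beps M' (f x) = beps M x)
     \<and> (\<forall>x y. f (lact M x y) = lact M' (f x) (f y))
     \<and> (\<forall>x y. f (ract M x y) = ract M' (f x) (f y))"

definition toMP :: "('k::field \<Rightarrow> 'h::ab_group_add \<Rightarrow> 'h) \<Rightarrow> ('k, 'h) ydph \<Rightarrow> ('k, 'h) mpair" where
  "toMP sc A = \<lparr> bmul = bulletOf A, bone = yone A, bdelta = ydelta A, beps = yeps A,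
                 bT = SOf sc A, lact = yact A, ract = ractOf sc A \<rparr>"

definition toYD :: "('k, 'h::ab_group_add) mpair \<Rightarrow> ('k, 'h) ydph" where
  "toYD M = \<lparr> ymul = (\<lambda>a b. sum_list (map (\<lambda>(a1,a2). bmul M a1 (lact M (bT M a2) b)) (bdelta M a))),
              yone = bone M, ydelta = bdelta M, yeps = beps M,
              yS = (\<lambda>a. sum_list (map (\<lambda>(a1,a2). lact M a1 (bT M a2)) (bdelta M a))),
              yact = lact M \<rparr>"

end

theory Submission
  imports Defs
begin

text \<open>
  Elements of \<open>H \<otimes> H\<close> and \<open>H \<otimes> H \<otimes> H\<close> are never formed: an identity between tensors is only
  ever used through its image under an arbitrary bilinear (trilinear) map into an arbitrary vector
  space, which is legitimate because linear functionals separate points. Every computation thus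
  becomes an identity between iterated Sweedler sums, proved by coassociativity, the counit laws
  and bilinearity.

  For a Yetter--Drinfeld post-Hopf algebra, \<open>(H, \<bullet>, 1, \<Delta>, \<epsilon>, S\<^sub>\<rightharpoonup>)\<close> is a Hopf algebra and the
  matched-pair axioms follow from (P1)--(P6), the central identity being
  \<open>a \<bullet> b = (a\<^sub>1 \<rightharpoonup> b\<^sub>1) \<bullet> (a\<^sub>2 \<leftharpoonup> b\<^sub>2)\<close>; the original product and antipode are
  recovered as \<open>a \<cdot> b = a\<^sub>1 \<bullet> (S\<^sub>\<rightharpoonup>(a\<^sub>2) \<rightharpoonup> b)\<close> and \<open>S(a) = a\<^sub>1 \<rightharpoonup> S\<^sub>\<rightharpoonup>(a\<^sub>2)\<close>.
  Conversely, for a matched pair the convolution inverse of \<open>\<rightharpoonup>\<close> is \<open>x \<mapsto> T(x) \<rightharpoonup> -\<close>, and the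
  right action is recovered as \<open>a \<leftharpoonup> b = T(a\<^sub>1 \<rightharpoonup> b\<^sub>1) \<bullet> a\<^sub>2 \<bullet> b\<^sub>2\<close>. Since a
  bialgebra map between Hopf algebras commutes with the antipodes, morphisms on both sides are
  the same maps.
\<close>

section \<open>Linear and multilinear maps\<close>

lemma vs_add_right: "vector_space s \<Longrightarrow> s a (x + y) = s a x + s a y" by (simp add: vector_space_def)
lemma vs_add_left: "vector_space s \<Longrightarrow> s (a + b) x = s a x + s b x" by (simp add: vector_space_def)
lemma vs_scale_scale: "vector_space s \<Longrightarrow> s a (s b x) = s (a * b) x" by (simp add: vector_space_def)
lemma vs_one: "vector_space s \<Longrightarrow> s 1 x = x" by (simp add: vector_space_def)
lemma vs_zero_right: "vector_space s \<Longrightarrow> s a 0 = 0" using module.scale_zero_right module_iff_vector_space by metis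

lemma vector_space_field: "vector_space ((*) :: 'k::field \<Rightarrow> 'k \<Rightarrow> 'k)"
  unfolding vector_space_def by (simp add: algebra_simps)

lemma linear_ident: "vector_space s \<Longrightarrow> Vector_Spaces.linear s s (\<lambda>v. v)"
  unfolding linear_iff by simp
lemma linear_scaleD: "Vector_Spaces.linear s1 s2 f \<Longrightarrow> f (s1 c x) = s2 c (f x)"
  unfolding linear_iff by blast
lemma linear_compose_fun:
  "Vector_Spaces.linear s1 s2 f \<Longrightarrow> Vector_Spaces.linear s2 s3 g \<Longrightarrow> Vector_Spaces.linear s1 s3 (\<lambda>x. g (f x))"
  unfolding linear_iff by auto
lemma linear_scale_const: "Vector_Spaces.linear sc s f \<Longrightarrow> Vector_Spaces.linear sc s (\<lambda>v. s c (f v))"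
  unfolding linear_iff by (simp add: vs_add_right vs_scale_scale mult.commute)
lemma linear_scale_by_functional:
  "Vector_Spaces.linear sc ((*)) \<phi> \<Longrightarrow> Vector_Spaces.linear sc sc f \<Longrightarrow> vector_space s
    \<Longrightarrow> Vector_Spaces.linear sc s (\<lambda>v. s (\<phi> (f v)) c)"
  unfolding linear_iff by (simp add: vs_add_left vs_scale_scale)
lemma linear_mult_const_right: "Vector_Spaces.linear sc ((*)) f \<Longrightarrow> Vector_Spaces.linear sc ((*)) (\<lambda>v. f v * c)"
  unfolding linear_iff by (simp add: algebra_simps)
lemma linear_mult_const_left: "Vector_Spaces.linear sc ((*)) f \<Longrightarrow> Vector_Spaces.linear sc ((*)) (\<lambda>v. c * f v)"
  unfolding linear_iff by (simp add: algebra_simps)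

lemma linear_sum_list:
  assumes "Vector_Spaces.linear s1 s2 f"
  shows "f (sum_list xs) = sum_list (map f xs)"
proof -
  have add: "\<And>x y. f (x + y) = f x + f y"
    using assms unfolding linear_iff by blast
  then have "f 0 = 0" using add[of 0 0] by simp
  with add show ?thesis by (induction xs) simp_all
qed

lemma linear_sum_list_fun:
  assumes "vector_space s1" "vector_space s2" "\<And>i. i \<in> set xs \<Longrightarrow> Vector_Spaces.linear s1 s2 (F i)"
  shows "Vector_Spaces.linear s1 s2 (\<lambda>v. sum_list (map (\<lambda>i. F i v) xs))"
  using assms(3)
proof (induction xs)
  case Nil then show ?case using assms(1,2) unfolding linear_iff
    by (simp add: vs_zero_right)
next
  case (Cons a xs)
  then have "Vector_Spaces.linear s1 s2 (F a)" "Vector_Spaces.linear s1 s2 (\<lambda>v. sum_list (map (\<lambda>i. F i v) xs))" by auto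
  then show ?case unfolding linear_iff
    by (simp add: algebra_simps vs_add_right[OF assms(2)])
qed

lemma linear_functionals_separate:
  fixes s :: "'k::field \<Rightarrow> 'v::ab_group_add \<Rightarrow> 'v"
  assumes vs: "vector_space s"
    and h: "\<And>\<phi>. Vector_Spaces.linear s ((*) :: 'k \<Rightarrow> 'k \<Rightarrow> 'k) \<phi> \<Longrightarrow> \<phi> v = \<phi> w"
  shows "v = w"
proof (rule ccontr)
  assume ne: "v \<noteq> w"
  interpret V: vector_space s by fact
  obtain B where B: "V.independent B" "UNIV \<subseteq> V.span B"
    using V.basis_exists[of UNIV] by metis
  have sp: "\<And>x. x \<in> V.span B" using B by blast
  have "V.representation B v \<noteq> V.representation B w"
  proof
    assume eq: "V.representation B v = V.representation B w"
    have "v = (\<Sum>b | V.representation B v b \<noteq> 0. s (V.representation B v b) b)"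
      using V.sum_nonzero_representation_eq[OF B(1) sp] by metis
    also have "\<dots> = w" unfolding eq using V.sum_nonzero_representation_eq[OF B(1) sp] by metis
    finally show False using ne by simp
  qed
  then obtain b where b: "V.representation B v b \<noteq> V.representation B w b" by blast
  have "Vector_Spaces.linear s ((*) :: 'k \<Rightarrow> 'k \<Rightarrow> 'k) (\<lambda>x. V.representation B x b)"
    unfolding linear_iff using vs vector_space_field
    by (simp add: V.representation_add[OF B(1) sp sp] V.representation_scale[OF B(1) sp])
  from h[OF this] b show False by simp
qed

definition bilin :: "('k::field \<Rightarrow> 'h::ab_group_add \<Rightarrow> 'h) \<Rightarrow> ('k \<Rightarrow> 'v::ab_group_add \<Rightarrow> 'v) \<Rightarrow> ('h \<Rightarrow> 'h \<Rightarrow> 'v) \<Rightarrow> bool" where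
  "bilin sc s F \<longleftrightarrow> (\<forall>a. Vector_Spaces.linear sc s (F a)) \<and> (\<forall>b. Vector_Spaces.linear sc s (\<lambda>a. F a b))"

definition trilin :: "('k::field \<Rightarrow> 'h::ab_group_add \<Rightarrow> 'h) \<Rightarrow> ('k \<Rightarrow> 'v::ab_group_add \<Rightarrow> 'v) \<Rightarrow> ('h \<Rightarrow> 'h \<Rightarrow> 'h \<Rightarrow> 'v) \<Rightarrow> bool" where
  "trilin sc s F \<longleftrightarrow> (\<forall>b c. Vector_Spaces.linear sc s (\<lambda>a. F a b c)) \<and> (\<forall>a c. Vector_Spaces.linear sc s (\<lambda>b. F a b c))
     \<and> (\<forall>a b. Vector_Spaces.linear sc s (\<lambda>c. F a b c))"

definition multilin4 :: "('k::field \<Rightarrow> 'h::ab_group_add \<Rightarrow> 'h) \<Rightarrow> ('k \<Rightarrow> 'v::ab_group_add \<Rightarrow> 'v) \<Rightarrow> ('h \<Rightarrow> 'h \<Rightarrow> 'h \<Rightarrow> 'h \<Rightarrow> 'v) \<Rightarrow> bool" where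
  "multilin4 sc s G \<longleftrightarrow> (\<forall>b c e. Vector_Spaces.linear sc s (\<lambda>a. G a b c e)) \<and> (\<forall>a c e. Vector_Spaces.linear sc s (\<lambda>b. G a b c e))
     \<and> (\<forall>a b e. Vector_Spaces.linear sc s (\<lambda>c. G a b c e)) \<and> (\<forall>a b c. Vector_Spaces.linear sc s (\<lambda>e. G a b c e))"

definition multilin5 :: "('k::field \<Rightarrow> 'h::ab_group_add \<Rightarrow> 'h) \<Rightarrow> ('k \<Rightarrow> 'v::ab_group_add \<Rightarrow> 'v) \<Rightarrow> ('h \<Rightarrow> 'h \<Rightarrow> 'h \<Rightarrow> 'h \<Rightarrow> 'h \<Rightarrow> 'v) \<Rightarrow> bool" where
  "multilin5 sc s G \<longleftrightarrow> (\<forall>b c e f. Vector_Spaces.linear sc s (\<lambda>a. G a b c e f)) \<and> (\<forall>a c e f. Vector_Spaces.linear sc s (\<lambda>b. G a b c e f))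
     \<and> (\<forall>a b e f. Vector_Spaces.linear sc s (\<lambda>c. G a b c e f)) \<and> (\<forall>a b c f. Vector_Spaces.linear sc s (\<lambda>e. G a b c e f))
     \<and> (\<forall>a b c e. Vector_Spaces.linear sc s (\<lambda>f. G a b c e f))"

definition multilin6 :: "('k::field \<Rightarrow> 'h::ab_group_add \<Rightarrow> 'h) \<Rightarrow> ('k \<Rightarrow> 'v::ab_group_add \<Rightarrow> 'v) \<Rightarrow> ('h \<Rightarrow> 'h \<Rightarrow> 'h \<Rightarrow> 'h \<Rightarrow> 'h \<Rightarrow> 'h \<Rightarrow> 'v) \<Rightarrow> bool" where
  "multilin6 sc s G \<longleftrightarrow> (\<forall>b c e f g. Vector_Spaces.linear sc s (\<lambda>a. G a b c e f g)) \<and> (\<forall>a c e f g. Vector_Spaces.linear sc s (\<lambda>b. G a b c e f g))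
     \<and> (\<forall>a b e f g. Vector_Spaces.linear sc s (\<lambda>c. G a b c e f g)) \<and> (\<forall>a b c f g. Vector_Spaces.linear sc s (\<lambda>e. G a b c e f g))
     \<and> (\<forall>a b c e g. Vector_Spaces.linear sc s (\<lambda>f. G a b c e f g)) \<and> (\<forall>a b c e f. Vector_Spaces.linear sc s (\<lambda>g. G a b c e f g))"

definition multilin8 :: "('k::field \<Rightarrow> 'h::ab_group_add \<Rightarrow> 'h) \<Rightarrow> ('k \<Rightarrow> 'v::ab_group_add \<Rightarrow> 'v) \<Rightarrow> ('h \<Rightarrow> 'h \<Rightarrow> 'h \<Rightarrow> 'h \<Rightarrow> 'h \<Rightarrow> 'h \<Rightarrow> 'h \<Rightarrow> 'h \<Rightarrow> 'v) \<Rightarrow> bool" where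
  "multilin8 sc s G \<longleftrightarrow> (\<forall>b c e f g h i. Vector_Spaces.linear sc s (\<lambda>a. G a b c e f g h i)) \<and> (\<forall>a c e f g h i. Vector_Spaces.linear sc s (\<lambda>b. G a b c e f g h i))
     \<and> (\<forall>a b e f g h i. Vector_Spaces.linear sc s (\<lambda>c. G a b c e f g h i)) \<and> (\<forall>a b c f g h i. Vector_Spaces.linear sc s (\<lambda>e. G a b c e f g h i))
     \<and> (\<forall>a b c e g h i. Vector_Spaces.linear sc s (\<lambda>f. G a b c e f g h i)) \<and> (\<forall>a b c e f h i. Vector_Spaces.linear sc s (\<lambda>g. G a b c e f g h i))
     \<and> (\<forall>a b c e f g i. Vector_Spaces.linear sc s (\<lambda>h. G a b c e f g h i)) \<and> (\<forall>a b c e f g h. Vector_Spaces.linear sc s (\<lambda>i. G a b c e f g h i))"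

lemmas multilin_defs = bilin_def trilin_def multilin4_def multilin5_def multilin6_def multilin8_def

lemma bilin_scale_left: "bilin sc s F \<Longrightarrow> F (sc c a) b = s c (F a b)"
  unfolding bilin_def using linear_scaleD[of sc s "\<lambda>a. F a b"] by blast
lemma bilin_scale_right: "bilin sc s F \<Longrightarrow> F a (sc c b) = s c (F a b)"
  unfolding bilin_def using linear_scaleD[of sc s "F a"] by blast
lemma linear_bilin_left: "bilin sc' s p \<Longrightarrow> Vector_Spaces.linear sc sc' f \<Longrightarrow> Vector_Spaces.linear sc s (\<lambda>v. p (f v) c)"
  unfolding bilin_def using linear_compose_fun[of sc sc' f s "\<lambda>a. p a c"] by blast
lemma linear_bilin_right: "bilin sc' s p \<Longrightarrow> Vector_Spaces.linear sc sc' f \<Longrightarrow> Vector_Spaces.linear sc s (\<lambda>v. p c (f v))"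
  unfolding bilin_def using linear_compose_fun[of sc sc' f s "p c"] by blast

lemma bilin_compose: "bilin sc s F \<Longrightarrow> Vector_Spaces.linear s s2 \<phi> \<Longrightarrow> bilin sc s2 (\<lambda>a b. \<phi> (F a b))"
  unfolding bilin_def
proof (elim conjE, intro conjI allI)
  fix a b assume "\<forall>a. Vector_Spaces.linear sc s (F a)" "\<forall>b. Vector_Spaces.linear sc s (\<lambda>a. F a b)" "Vector_Spaces.linear s s2 \<phi>"
  then show "Vector_Spaces.linear sc s2 (\<lambda>b. \<phi> (F a b))" "Vector_Spaces.linear sc s2 (\<lambda>a. \<phi> (F a b))"
    using linear_compose_fun by blast+
qed

lemma trilin_compose: "trilin sc s F \<Longrightarrow> Vector_Spaces.linear s s2 \<phi> \<Longrightarrow> trilin sc s2 (\<lambda>a b c. \<phi> (F a b c))"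
  unfolding trilin_def
proof (elim conjE, intro conjI allI)
  fix a b c assume "\<forall>b c. Vector_Spaces.linear sc s (\<lambda>a. F a b c)" "\<forall>a c. Vector_Spaces.linear sc s (\<lambda>b. F a b c)"
     "\<forall>a b. Vector_Spaces.linear sc s (\<lambda>c. F a b c)" "Vector_Spaces.linear s s2 \<phi>"
  then show "Vector_Spaces.linear sc s2 (\<lambda>a. \<phi> (F a b c))" "Vector_Spaces.linear sc s2 (\<lambda>b. \<phi> (F a b c))"
     "Vector_Spaces.linear sc s2 (\<lambda>c. \<phi> (F a b c))"
    using linear_compose_fun by blast+
qed

lemma bilinK_eq_bilin: "bilinK sc B = bilin sc (*) B"
  unfolding bilinK_def bilin_def by simp
lemma trilinK_eq_trilin: "trilinK sc B = trilin sc (*) B"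
  unfolding trilinK_def trilin_def by simp

lemma teq2_bilin_sums:
  fixes sc :: "'k::field \<Rightarrow> 'h::ab_group_add \<Rightarrow> 'h" and s :: "'k \<Rightarrow> 'v::ab_group_add \<Rightarrow> 'v"
  assumes "teq2 sc xs ys" "vector_space s" "bilin sc s F"
  shows "sum_list (map (\<lambda>(a,b). F a b) xs) = sum_list (map (\<lambda>(a,b). F a b) ys)"
proof (rule linear_functionals_separate[OF assms(2)])
  fix \<phi> :: "_ \<Rightarrow> 'k" assume \<phi>: "Vector_Spaces.linear s (*) \<phi>"
  have "bilinK sc (\<lambda>a b. \<phi> (F a b))"
    using bilin_compose[OF assms(3) \<phi>] unfolding bilinK_eq_bilin .
  then have "sum_list (map (\<lambda>(a,b). \<phi> (F a b)) xs) = sum_list (map (\<lambda>(a,b). \<phi> (F a b)) ys)"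
    using assms(1) unfolding teq2_def by blast
  then show "\<phi> (sum_list (map (\<lambda>(a,b). F a b) xs)) = \<phi> (sum_list (map (\<lambda>(a,b). F a b) ys))"
    by (simp add: linear_sum_list[OF \<phi>] o_def case_prod_beta')
qed

lemma bilinH_eq_bilin: "bilinH sc m = bilin sc sc m"
  unfolding bilinH_def bilin_def by simp

lemma teq3_trilin_sums:
  fixes sc :: "'k::field \<Rightarrow> 'h::ab_group_add \<Rightarrow> 'h" and s :: "'k \<Rightarrow> 'v::ab_group_add \<Rightarrow> 'v"
  assumes "teq3 sc xs ys" "vector_space s" "trilin sc s F"
  shows "sum_list (map (\<lambda>(a,b,c). F a b c) xs) = sum_list (map (\<lambda>(a,b,c). F a b c) ys)"
proof (rule linear_functionals_separate[OF assms(2)])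
  fix \<phi> :: "_ \<Rightarrow> 'k" assume \<phi>: "Vector_Spaces.linear s (*) \<phi>"
  have "trilinK sc (\<lambda>a b c. \<phi> (F a b c))"
    using trilin_compose[OF assms(3) \<phi>] unfolding trilinK_eq_trilin .
  then have "sum_list (map (\<lambda>(a,b,c). \<phi> (F a b c)) xs) = sum_list (map (\<lambda>(a,b,c). \<phi> (F a b c)) ys)"
    using assms(1) unfolding teq3_def by blast
  then show "\<phi> (sum_list (map (\<lambda>(a,b,c). F a b c) xs)) = \<phi> (sum_list (map (\<lambda>(a,b,c). F a b c) ys))"
    by (simp add: linear_sum_list[OF \<phi>] o_def case_prod_beta')
qed

lemma teq2I:
  assumes "\<And>B. bilin sc (*) B \<Longrightarrow> sum_list (map (\<lambda>(a,b). B a b) xs) = sum_list (map (\<lambda>(a,b). B a b) ys)"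
  shows "teq2 sc xs ys"
  using assms unfolding teq2_def bilinK_eq_bilin by blast

section \<open>Sweedler sums\<close>

definition Sw :: "('h \<Rightarrow> ('h \<times> 'h) list) \<Rightarrow> 'h \<Rightarrow> ('h \<Rightarrow> 'h \<Rightarrow> 'v::ab_group_add) \<Rightarrow> 'v" where
  "Sw d x F = sum_list (map (\<lambda>(a,b). F a b) (d x))"

definition Sw3 where "Sw3 d x G = Sw d x (\<lambda>a b. Sw d a (\<lambda>a1 a2. G a1 a2 b))"
definition Sw4 where "Sw4 d x G = Sw d x (\<lambda>a b. Sw3 d a (\<lambda>a1 a2 a3. G a1 a2 a3 b))"
definition Sw5 where "Sw5 d x G = Sw d x (\<lambda>a b. Sw4 d a (\<lambda>a1 a2 a3 a4. G a1 a2 a3 a4 b))"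
definition Sw6 where "Sw6 d x G = Sw d x (\<lambda>a b. Sw5 d a (\<lambda>a1 a2 a3 a4 a5. G a1 a2 a3 a4 a5 b))"

lemmas Sw_defs = Sw3_def Sw4_def Sw5_def Sw6_def

lemma Sw_cong: "(\<And>a b. F a b = G a b) \<Longrightarrow> Sw d x F = Sw d x G"
  by (simp add: Sw_def)

lemma sum_list_concat: "sum_list (concat xss) = sum_list (map sum_list xss)"
  by (induction xss) auto
lemma sum_list_map_swap: fixes F :: "'a \<Rightarrow> 'b \<Rightarrow> 'c::comm_monoid_add" shows "sum_list (map (\<lambda>a. sum_list (map (\<lambda>b. F a b) ys)) xs) = sum_list (map (\<lambda>b. sum_list (map (\<lambda>a. F a b) xs)) ys)"
proof (induction xs)
  case Nil then show ?case by (induction ys) auto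
next
  case (Cons x xs)
  then show ?case by (simp add: sum_list_addf[of "\<lambda>b. F x b"])
qed
lemma linear_Sw: "Vector_Spaces.linear s1 s2 L \<Longrightarrow> L (Sw d x F) = Sw d x (\<lambda>a b. L (F a b))"
  unfolding Sw_def by (simp add: linear_sum_list o_def case_prod_beta')
lemma Sw_linear: "Vector_Spaces.linear s1 s L \<Longrightarrow> Sw d x (\<lambda>a b. L (F a b)) = L (Sw d x F)"
  using linear_Sw[of s1 s L d x F] by simp
lemma Sw_bilin_left: "bilin sc s p \<Longrightarrow> Sw d x (\<lambda>a b. p (F a b) c) = p (Sw d x F) c"
  unfolding bilin_def using linear_Sw[of sc s "\<lambda>z. p z c" d x F] by simp
lemma Sw_bilin_right: "bilin sc s p \<Longrightarrow> Sw d x (\<lambda>a b. p c (F a b)) = p c (Sw d x F)"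
  unfolding bilin_def using linear_Sw[of sc s "p c" d x F] by simp
lemma Sw_scale: "vector_space s \<Longrightarrow> Sw d x (\<lambda>a b. s c (F a b)) = s c (Sw d x F)"
  using linear_Sw[OF linear_scale_const[OF linear_ident], of s c d x F] by simp
lemma Sw_mult_right: "Sw d x (\<lambda>a b. F a b * (c::'a::ring)) = Sw d x F * c"
  unfolding Sw_def using sum_list_mult_const[of "\<lambda>(a,b). F a b" c] by (simp add: case_prod_beta')
lemma Sw_mult_left: "Sw d x (\<lambda>a b. (c::'a::ring) * F a b) = c * Sw d x F"
  unfolding Sw_def using sum_list_const_mult[of c "\<lambda>(a,b). F a b"] by (simp add: case_prod_beta')

lemma Sw_swap: "Sw d x (\<lambda>a b. Sw d' y (\<lambda>c e. F a b c e)) = Sw d' y (\<lambda>c e. Sw d x (\<lambda>a b. F a b c e))"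
  unfolding Sw_def using sum_list_map_swap[of "\<lambda>p q. (case p of (a,b) \<Rightarrow> case q of (c,e) \<Rightarrow> F a b c e)" "d' y" "d x"]
  by (simp add: case_prod_beta')
lemma Sw3_swap: "Sw3 d a (\<lambda>a1 a2 a3. Sw d' b (\<lambda>p q. F a1 a2 a3 p q)) = Sw d' b (\<lambda>p q. Sw3 d a (\<lambda>a1 a2 a3. F a1 a2 a3 p q))"
  unfolding Sw3_def
  by (subst Sw_swap[symmetric], rule Sw_cong, subst Sw_swap[symmetric], rule refl)
lemma Sw4_swap: "Sw4 d a (\<lambda>a1 a2 a3 a4. Sw d' b (\<lambda>p q. F a1 a2 a3 a4 p q)) = Sw d' b (\<lambda>p q. Sw4 d a (\<lambda>a1 a2 a3 a4. F a1 a2 a3 a4 p q))"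
  unfolding Sw4_def
  by (subst Sw_swap[symmetric], rule Sw_cong, subst Sw3_swap, rule refl)
lemma Sw5_swap: "Sw5 d a (\<lambda>a1 a2 a3 a4 a5. Sw d' b (\<lambda>p q. F a1 a2 a3 a4 a5 p q)) = Sw d' b (\<lambda>p q. Sw5 d a (\<lambda>a1 a2 a3 a4 a5. F a1 a2 a3 a4 a5 p q))"
  unfolding Sw5_def
  by (subst Sw_swap[symmetric], rule Sw_cong, subst Sw4_swap, rule refl)
lemma Sw6_swap: "Sw6 d a (\<lambda>a1 a2 a3 a4 a5 a6. Sw d' b (\<lambda>p q. F a1 a2 a3 a4 a5 a6 p q)) = Sw d' b (\<lambda>p q. Sw6 d a (\<lambda>a1 a2 a3 a4 a5 a6. F a1 a2 a3 a4 a5 a6 p q))"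
  unfolding Sw6_def
  by (subst Sw_swap[symmetric], rule Sw_cong, subst Sw5_swap, rule refl)

lemma Sw3_unfold1: "Sw3 d x G = Sw d x (\<lambda>a b. Sw d a (\<lambda>p q. G p q b))"
  by (simp add: Sw3_def)
lemma Sw4_unfold1: "Sw4 d x G = Sw3 d x (\<lambda>a1 a2 a3. Sw d a1 (\<lambda>p q. G p q a2 a3))"
  by (simp add: Sw_defs)
lemma Sw5_unfold1: "Sw5 d x G = Sw4 d x (\<lambda>a1 a2 a3 a4. Sw d a1 (\<lambda>p q. G p q a2 a3 a4))"
  by (simp add: Sw_defs)

lemma Sw_concat: "sum_list (concat (map (\<lambda>(a1,a2). map (\<lambda>(b1,b2). K a1 a2 b1 b2) (d b)) (d a))) = Sw d a (\<lambda>a1 a2. Sw d b (\<lambda>b1 b2. K a1 a2 b1 b2))"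
  unfolding Sw_def by (simp add: sum_list_concat o_def case_prod_beta')

lemma Sw_teq2_concat:
  assumes "teq2 sc (d z) (concat (map (\<lambda>(x1,x2). map (\<lambda>(y1,y2). (P x1 y1, Q x2 y2)) (d y)) (d x)))"
    and "vector_space s" "bilin sc s F"
  shows "Sw d z F = Sw d x (\<lambda>x1 x2. Sw d y (\<lambda>y1 y2. F (P x1 y1) (Q x2 y2)))"
  using teq2_bilin_sums[OF assms] unfolding Sw_def by (simp add: sum_list_concat map_concat o_def case_prod_beta')

lemma teq2_concatI:
  assumes "\<And>B. bilin sc (*) B \<Longrightarrow> Sw d z B = Sw d x (\<lambda>x1 x2. Sw d y (\<lambda>y1 y2. B (P x1 y1) (Q x2 y2)))"
  shows "teq2 sc (d z) (concat (map (\<lambda>(x1,x2). map (\<lambda>(y1,y2). (P x1 y1, Q x2 y2)) (d y)) (d x)))"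
  using assms unfolding teq2_def bilinK_eq_bilin Sw_def by (simp add: sum_list_concat map_concat o_def case_prod_beta')

lemma linear_Sw_body:
  assumes "vector_space sc" "vector_space s" "\<And>a b. Vector_Spaces.linear sc s (\<lambda>v. F v a b)"
  shows "Vector_Spaces.linear sc s (\<lambda>v. Sw d c (F v))"
proof -
  have "(\<lambda>v. Sw d c (F v)) = (\<lambda>v. sum_list (map (\<lambda>p. (\<lambda>p v. case p of (a,b) \<Rightarrow> F v a b) p v) (d c)))"
    unfolding Sw_def by simp
  moreover have "Vector_Spaces.linear sc s (\<lambda>v. sum_list (map (\<lambda>p. (\<lambda>p v. case p of (a,b) \<Rightarrow> F v a b) p v) (d c)))"
    by (rule linear_sum_list_fun) (use assms in \<open>auto simp: case_prod_beta'\<close>)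
  ultimately show ?thesis by simp
qed

section \<open>Coalgebras\<close>

locale coalgebra =
  fixes sc :: "'k::field \<Rightarrow> 'h::ab_group_add \<Rightarrow> 'h" and d :: "'h \<Rightarrow> ('h \<times> 'h) list" and e :: "'h \<Rightarrow> 'k"
  assumes coalgebra: "is_coalgebra sc d e"
begin

lemma vs: "vector_space sc" using coalgebra unfolding is_coalgebra_def by blast
lemma linear_e: "Vector_Spaces.linear sc (*) e" using coalgebra unfolding is_coalgebra_def by blast

lemma Sw_zero: "vector_space s \<Longrightarrow> bilin sc s F \<Longrightarrow> Sw d 0 F = 0"
proof -
  assume s: "vector_space s" "bilin sc s F"
  have "teq2 sc (d (sc 1 0 + 0)) (map (\<lambda>(a,b). (sc 1 a, b)) (d 0) @ d 0)"
    using coalgebra unfolding is_coalgebra_def by blast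
  from teq2_bilin_sums[OF this s] have "Sw d 0 F = Sw d 0 F + Sw d 0 F"
    using vs unfolding Sw_def by (simp add: vs_one o_def case_prod_beta')
  then show ?thesis by simp
qed

lemma linear_Sw_arg: assumes "vector_space s" "bilin sc s F" shows "Vector_Spaces.linear sc s (\<lambda>x. Sw d x F)"
proof -
  have 1: "Sw d (sc c x + y) F = s c (Sw d x F) + Sw d y F" for c x y
  proof -
    have "teq2 sc (d (sc c x + y)) (map (\<lambda>(a,b). (sc c a, b)) (d x) @ d y)"
      using coalgebra unfolding is_coalgebra_def by blast
    from teq2_bilin_sums[OF this assms] have "Sw d (sc c x + y) F = sum_list (map (\<lambda>(a,b). F (sc c a) b) (d x)) + Sw d y F"
      unfolding Sw_def by (simp add: o_def case_prod_beta')
    also have "sum_list (map (\<lambda>(a,b). F (sc c a) b) (d x)) = sum_list (map (\<lambda>(a,b). s c (F a b)) (d x))"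
      using assms(2) by (simp add: bilin_scale_left)
    also have "\<dots> = s c (Sw d x F)"
      using linear_sum_list[OF linear_scale_const[OF linear_ident[OF assms(1)]], of c] unfolding Sw_def by (simp add: o_def case_prod_beta')
    finally show ?thesis .
  qed
  have 0: "Sw d 0 F = 0" using Sw_zero assms by blast
  show ?thesis unfolding linear_iff using vs assms(1)
    using 1[of 1] 1[where y=0] by (simp add: vs_one 0)
qed

lemma Sw_coassoc: assumes "vector_space s" "trilin sc s G"
  shows "Sw d x (\<lambda>a b. Sw d a (\<lambda>a1 a2. G a1 a2 b)) = Sw d x (\<lambda>a b. Sw d b (\<lambda>b1 b2. G a b1 b2))"
proof -
  have "teq3 sc (sw3 d x) (concat (map (\<lambda>(a,b). map (\<lambda>(b1,b2). (a,b1,b2)) (d b)) (d x)))"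
    using coalgebra unfolding is_coalgebra_def by blast
  from teq3_trilin_sums[OF this assms] show ?thesis
    unfolding Sw_def sw3_def by (simp add: sum_list_concat map_concat o_def case_prod_beta')
qed

lemma Sw_counit_right: assumes "Vector_Spaces.linear sc s G" shows "Sw d x (\<lambda>a b. s (e b) (G a)) = G x"
proof -
  have "sum_list (map (\<lambda>(a,b). sc (e b) a) (d x)) = x" using coalgebra unfolding is_coalgebra_def by blast
  then have "G x = G (Sw d x (\<lambda>a b. sc (e b) a))" unfolding Sw_def by simp
  also have "\<dots> = Sw d x (\<lambda>a b. s (e b) (G a))" by (simp add: linear_Sw[OF assms] linear_scaleD[OF assms])
  finally show ?thesis by simp
qed

lemma Sw_counit_left: assumes "Vector_Spaces.linear sc s G" shows "Sw d x (\<lambda>a b. s (e a) (G b)) = G x"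
proof -
  have "sum_list (map (\<lambda>(a,b). sc (e a) b) (d x)) = x" using coalgebra unfolding is_coalgebra_def by blast
  then have "G x = G (Sw d x (\<lambda>a b. sc (e a) b))" unfolding Sw_def by simp
  also have "\<dots> = Sw d x (\<lambda>a b. s (e a) (G b))" by (simp add: linear_Sw[OF assms] linear_scaleD[OF assms])
  finally show ?thesis by simp
qed

lemma Sw_counit_mult: "Sw d x (\<lambda>a b. e a * e b) = e x"
  using Sw_counit_left[OF linear_e, of x] by simp

lemma linear_Sw_arg_comp: "Vector_Spaces.linear sc sc f \<Longrightarrow> bilin sc s F \<Longrightarrow> vector_space s \<Longrightarrow> Vector_Spaces.linear sc s (\<lambda>v. Sw d (f v) F)"
  using linear_compose_fun linear_Sw_arg by blast

lemmas Sw_linear_intros = linear_Sw_body linear_Sw_arg_comp linear_ident vs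

text \<open>\<open>Swn_unfoldi\<close> rewrites an \<open>n\<close>-fold Sweedler sum as an \<open>(n-1)\<close>-fold one whose \<open>i\<close>-th leg is
  split once more; the versions with \<open>i > 1\<close> are instances of coassociativity.\<close>

lemma Sw3_unfold2: "vector_space s \<Longrightarrow> trilin sc s G \<Longrightarrow> Sw3 d x G = Sw d x (\<lambda>a b. Sw d b (\<lambda>p q. G a p q))"
  unfolding Sw3_def by (rule Sw_coassoc)

lemma Sw4_unfold2: "vector_space s \<Longrightarrow> multilin4 sc s G \<Longrightarrow> Sw4 d x G = Sw3 d x (\<lambda>a1 a2 a3. Sw d a2 (\<lambda>p q. G a1 p q a3))"
  unfolding Sw4_def Sw3_def[of d x]
  by (rule Sw_cong, rule Sw3_unfold2[where s=s]) (auto simp: multilin_defs)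
lemma Sw4_unfold3: assumes "vector_space s" "multilin4 sc s G" shows "Sw4 d x G = Sw3 d x (\<lambda>a1 a2 a3. Sw d a3 (\<lambda>p q. G a1 a2 p q))"
proof -
  have "Sw3 d x (\<lambda>a1 a2 a3. Sw d a3 (\<lambda>p q. G a1 a2 p q)) = Sw d x (\<lambda>a b. Sw d a (\<lambda>a1 a2. Sw d b (\<lambda>p q. G a1 a2 p q)))"
    by (simp add: Sw3_def)
  also have "\<dots> = Sw d x (\<lambda>a b. Sw d b (\<lambda>p q. Sw d a (\<lambda>a1 a2. G a1 a2 p q)))"
    by (rule Sw_cong, rule Sw_swap)
  also have "\<dots> = Sw d x (\<lambda>a b. Sw d a (\<lambda>c q. Sw d c (\<lambda>a1 a2. G a1 a2 q b)))"
    by (rule Sw_coassoc[symmetric, where s=s]) (use assms in \<open>auto simp: multilin_defs intro!: Sw_linear_intros\<close>)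
  finally show ?thesis by (simp add: Sw_defs)
qed

lemma Sw5_unfold2: "vector_space s \<Longrightarrow> multilin5 sc s G \<Longrightarrow> Sw5 d x G = Sw4 d x (\<lambda>a1 a2 a3 a4. Sw d a2 (\<lambda>p q. G a1 p q a3 a4))"
  unfolding Sw5_def Sw4_def[of d x]
  by (rule Sw_cong, rule Sw4_unfold2[where s=s]) (auto simp: multilin_defs)
lemma Sw5_unfold3: "vector_space s \<Longrightarrow> multilin5 sc s G \<Longrightarrow> Sw5 d x G = Sw4 d x (\<lambda>a1 a2 a3 a4. Sw d a3 (\<lambda>p q. G a1 a2 p q a4))"
  unfolding Sw5_def Sw4_def[of d x]
  by (rule Sw_cong, rule Sw4_unfold3[where s=s]) (auto simp: multilin_defs)
lemma Sw5_unfold4: assumes "vector_space s" "multilin5 sc s G" shows "Sw5 d x G = Sw4 d x (\<lambda>a1 a2 a3 a4. Sw d a4 (\<lambda>p q. G a1 a2 a3 p q))"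
proof -
  have "Sw4 d x (\<lambda>a1 a2 a3 a4. Sw d a4 (\<lambda>p q. G a1 a2 a3 p q)) = Sw d x (\<lambda>a b. Sw3 d a (\<lambda>a1 a2 a3. Sw d b (\<lambda>p q. G a1 a2 a3 p q)))"
    by (simp add: Sw4_def)
  also have "\<dots> = Sw d x (\<lambda>a b. Sw d b (\<lambda>p q. Sw3 d a (\<lambda>a1 a2 a3. G a1 a2 a3 p q)))"
    by (rule Sw_cong, rule Sw3_swap)
  also have "\<dots> = Sw d x (\<lambda>a b. Sw d a (\<lambda>c q. Sw3 d c (\<lambda>a1 a2 a3. G a1 a2 a3 q b)))"
    by (rule Sw_coassoc[symmetric, where s=s]) (use assms in \<open>auto simp: multilin_defs Sw_defs intro!: Sw_linear_intros\<close>)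
  finally show ?thesis by (simp add: Sw_defs)
qed

lemma Sw6_unfold4: "vector_space s \<Longrightarrow> multilin6 sc s G \<Longrightarrow> Sw6 d x G = Sw5 d x (\<lambda>a1 a2 a3 a4 a5. Sw d a4 (\<lambda>p q. G a1 a2 a3 p q a5))"
  unfolding Sw6_def Sw5_def[of d x]
  by (rule Sw_cong, rule Sw5_unfold4[where s=s]) (auto simp: multilin_defs)
lemma Sw6_unfold5: assumes "vector_space s" "multilin6 sc s G" shows "Sw6 d x G = Sw5 d x (\<lambda>a1 a2 a3 a4 a5. Sw d a5 (\<lambda>p q. G a1 a2 a3 a4 p q))"
proof -
  have "Sw5 d x (\<lambda>a1 a2 a3 a4 a5. Sw d a5 (\<lambda>p q. G a1 a2 a3 a4 p q)) = Sw d x (\<lambda>a b. Sw4 d a (\<lambda>a1 a2 a3 a4. Sw d b (\<lambda>p q. G a1 a2 a3 a4 p q)))"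
    by (simp add: Sw5_def)
  also have "\<dots> = Sw d x (\<lambda>a b. Sw d b (\<lambda>p q. Sw4 d a (\<lambda>a1 a2 a3 a4. G a1 a2 a3 a4 p q)))"
    by (rule Sw_cong, rule Sw4_swap)
  also have "\<dots> = Sw d x (\<lambda>a b. Sw d a (\<lambda>c q. Sw4 d c (\<lambda>a1 a2 a3 a4. G a1 a2 a3 a4 q b)))"
    by (rule Sw_coassoc[symmetric, where s=s]) (use assms in \<open>auto simp: multilin_defs Sw_defs intro!: Sw_linear_intros\<close>)
  finally show ?thesis by (simp add: Sw_defs)
qed

lemma Sw4_unfold_tail: assumes "vector_space s" "multilin4 sc s G" shows "Sw4 d x G = Sw d x (\<lambda>a b. Sw3 d b (\<lambda>p q r. G a p q r))"
proof -
  have "Sw d x (\<lambda>a b. Sw3 d b (\<lambda>p q r. G a p q r)) = Sw d x (\<lambda>a b. Sw d b (\<lambda>c r. Sw d c (\<lambda>p q. G a p q r)))"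
    by (simp add: Sw3_unfold1)
  also have "\<dots> = Sw3 d x (\<lambda>a c r. Sw d c (\<lambda>p q. G a p q r))"
    by (rule Sw3_unfold2[symmetric, OF assms(1)]) (use assms in \<open>auto simp: multilin_defs intro!: Sw_linear_intros\<close>)
  also have "\<dots> = Sw4 d x G" by (rule Sw4_unfold2[symmetric, OF assms])
  finally show ?thesis by simp
qed

lemma Sw5_unfold_tail: assumes "vector_space s" "multilin5 sc s G" shows "Sw5 d x G = Sw d x (\<lambda>a b. Sw4 d b (\<lambda>p q r t. G a p q r t))"
proof -
  have "Sw d x (\<lambda>a b. Sw4 d b (\<lambda>p q r t. G a p q r t)) = Sw d x (\<lambda>a b. Sw3 d b (\<lambda>c r t. Sw d c (\<lambda>p q. G a p q r t)))"
    by (simp add: Sw4_unfold1)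
  also have "\<dots> = Sw4 d x (\<lambda>a c r t. Sw d c (\<lambda>p q. G a p q r t))"
    by (rule Sw4_unfold_tail[symmetric, OF assms(1)]) (use assms in \<open>auto simp: multilin_defs intro!: Sw_linear_intros\<close>)
  also have "\<dots> = Sw5 d x G" by (rule Sw5_unfold2[symmetric, OF assms])
  finally show ?thesis by simp
qed

lemma Sw2_coassoc: assumes s: "vector_space s" and K: "multilin6 sc s K"
  shows "Sw d a (\<lambda>a1 a2. Sw d b (\<lambda>b1 b2. Sw d a2 (\<lambda>p q. Sw d b2 (\<lambda>r t. K a1 p q b1 r t))))
       = Sw d a (\<lambda>a' q. Sw d b (\<lambda>b' t. Sw d a' (\<lambda>a1 p. Sw d b' (\<lambda>b1 r. K a1 p q b1 r t))))"
proof -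
  note lin = Sw_linear_intros s
  have "Sw d a (\<lambda>a1 a2. Sw d b (\<lambda>b1 b2. Sw d a2 (\<lambda>p q. Sw d b2 (\<lambda>r t. K a1 p q b1 r t))))
      = Sw d a (\<lambda>a1 a2. Sw d a2 (\<lambda>p q. Sw d b (\<lambda>b1 b2. Sw d b2 (\<lambda>r t. K a1 p q b1 r t))))"
    by (rule Sw_cong, rule Sw_swap)
  also have "\<dots> = Sw3 d a (\<lambda>a1 p q. Sw d b (\<lambda>b1 b2. Sw d b2 (\<lambda>r t. K a1 p q b1 r t)))"
    by (rule Sw3_unfold2[symmetric, OF s]) (use K in \<open>auto simp: multilin_defs intro!: lin\<close>)
  also have "\<dots> = Sw3 d a (\<lambda>a1 p q. Sw3 d b (\<lambda>b1 r t. K a1 p q b1 r t))"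
    by (intro arg_cong[where f="Sw3 d a"] ext Sw3_unfold2[symmetric, OF s]) (use K in \<open>auto simp: multilin_defs intro!: lin\<close>)
  also have "\<dots> = Sw d a (\<lambda>a' q. Sw d a' (\<lambda>a1 p. Sw d b (\<lambda>b' t. Sw d b' (\<lambda>b1 r. K a1 p q b1 r t))))"
    by (simp add: Sw3_unfold1)
  also have "\<dots> = Sw d a (\<lambda>a' q. Sw d b (\<lambda>b' t. Sw d a' (\<lambda>a1 p. Sw d b' (\<lambda>b1 r. K a1 p q b1 r t))))"
    by (rule Sw_cong, rule Sw_swap)
  finally show ?thesis .
qed

lemma Sw2_coassoc_left: assumes s: "vector_space s" and K: "multilin6 sc s K"
  shows "Sw d a (\<lambda>a1 a2. Sw d b (\<lambda>b1 b2. Sw d a1 (\<lambda>p q. Sw d b1 (\<lambda>r t. K p q a2 r t b2))))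
       = Sw d a (\<lambda>p w. Sw d b (\<lambda>r v. Sw d w (\<lambda>q a2. Sw d v (\<lambda>t b2. K p q a2 r t b2))))"
proof -
  note lin = Sw_linear_intros s
  have "Sw d a (\<lambda>a1 a2. Sw d b (\<lambda>b1 b2. Sw d a1 (\<lambda>p q. Sw d b1 (\<lambda>r t. K p q a2 r t b2))))
      = Sw d a (\<lambda>a1 a2. Sw d a1 (\<lambda>p q. Sw d b (\<lambda>b1 b2. Sw d b1 (\<lambda>r t. K p q a2 r t b2))))"
    by (rule Sw_cong, rule Sw_swap)
  also have "\<dots> = Sw3 d a (\<lambda>p q a2. Sw d b (\<lambda>b1 b2. Sw d b1 (\<lambda>r t. K p q a2 r t b2)))"
    by (simp add: Sw3_unfold1)
  also have "\<dots> = Sw3 d a (\<lambda>p q a2. Sw3 d b (\<lambda>r t b2. K p q a2 r t b2))"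
    by (simp add: Sw3_unfold1)
  also have "\<dots> = Sw d a (\<lambda>p w. Sw d w (\<lambda>q a2. Sw3 d b (\<lambda>r t b2. K p q a2 r t b2)))"
    by (rule Sw3_unfold2[OF s]) (use K in \<open>auto simp: multilin_defs Sw_defs intro!: lin\<close>)
  also have "\<dots> = Sw d a (\<lambda>p w. Sw d w (\<lambda>q a2. Sw d b (\<lambda>r v. Sw d v (\<lambda>t b2. K p q a2 r t b2))))"
    by (intro Sw_cong Sw3_unfold2[OF s]) (use K in \<open>auto simp: multilin_defs Sw_defs intro!: lin\<close>)
  also have "\<dots> = Sw d a (\<lambda>p w. Sw d b (\<lambda>r v. Sw d w (\<lambda>q a2. Sw d v (\<lambda>t b2. K p q a2 r t b2))))"
    by (rule Sw_cong, rule Sw_swap)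
  finally show ?thesis .
qed

lemma Sw_coassoc4: assumes s: "vector_space s" and P: "multilin4 sc s P"
  shows "Sw d a (\<lambda>x1 x2. Sw d x1 (\<lambda>g h. Sw d x2 (\<lambda>r t. P g h r t))) = Sw d a (\<lambda>z t. Sw d z (\<lambda>g w. Sw d w (\<lambda>h r. P g h r t)))"
proof -
  have "Sw d a (\<lambda>x1 x2. Sw d x1 (\<lambda>g h. Sw d x2 (\<lambda>r t. P g h r t))) = Sw3 d a (\<lambda>g h x2. Sw d x2 (\<lambda>r t. P g h r t))"
    by (simp add: Sw3_unfold1)
  also have "\<dots> = Sw4 d a P" by (rule Sw4_unfold3[symmetric, OF s P])
  also have "\<dots> = Sw3 d a (\<lambda>g w t. Sw d w (\<lambda>h r. P g h r t))" by (rule Sw4_unfold2[OF s P])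
  finally show ?thesis by (simp add: Sw3_unfold1)
qed

lemma Sw2_coassoc4: assumes s: "vector_space s" and K: "multilin8 sc s K"
  shows "Sw d a (\<lambda>x1 x2. Sw d b (\<lambda>y1 y2. Sw d x1 (\<lambda>g h. Sw d y1 (\<lambda>g' h'. Sw d x2 (\<lambda>r t. Sw d y2 (\<lambda>p q. K g h r t g' h' p q))))))
       = Sw d a (\<lambda>z t. Sw d b (\<lambda>z' q. Sw d z (\<lambda>g w. Sw d z' (\<lambda>g' v. Sw d w (\<lambda>h r. Sw d v (\<lambda>h' p. K g h r t g' h' p q))))))"
proof -
  note lin = Sw_linear_intros s
  have "Sw d a (\<lambda>x1 x2. Sw d b (\<lambda>y1 y2. Sw d x1 (\<lambda>g h. Sw d y1 (\<lambda>g' h'. Sw d x2 (\<lambda>r t. Sw d y2 (\<lambda>p q. K g h r t g' h' p q))))))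
      = Sw d a (\<lambda>x1 x2. Sw d x1 (\<lambda>g h. Sw d b (\<lambda>y1 y2. Sw d y1 (\<lambda>g' h'. Sw d x2 (\<lambda>r t. Sw d y2 (\<lambda>p q. K g h r t g' h' p q))))))"
    by (rule Sw_cong, rule Sw_swap)
  also have "\<dots> = Sw d a (\<lambda>x1 x2. Sw d x1 (\<lambda>g h. Sw d b (\<lambda>y1 y2. Sw d x2 (\<lambda>r t. Sw d y1 (\<lambda>g' h'. Sw d y2 (\<lambda>p q. K g h r t g' h' p q))))))"
    by (intro Sw_cong, rule Sw_swap)
  also have "\<dots> = Sw d a (\<lambda>x1 x2. Sw d x1 (\<lambda>g h. Sw d x2 (\<lambda>r t. Sw d b (\<lambda>y1 y2. Sw d y1 (\<lambda>g' h'. Sw d y2 (\<lambda>p q. K g h r t g' h' p q))))))"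
    by (intro Sw_cong, rule Sw_swap)
  also have "\<dots> = Sw d a (\<lambda>x1 x2. Sw d x1 (\<lambda>g h. Sw d x2 (\<lambda>r t. Sw d b (\<lambda>z' q. Sw d z' (\<lambda>g' v. Sw d v (\<lambda>h' p. K g h r t g' h' p q))))))"
    by (intro Sw_cong Sw_coassoc4[OF s]) (use K in \<open>auto simp: multilin_defs intro!: lin\<close>)
  also have "\<dots> = Sw d a (\<lambda>z t. Sw d z (\<lambda>g w. Sw d w (\<lambda>h r. Sw d b (\<lambda>z' q. Sw d z' (\<lambda>g' v. Sw d v (\<lambda>h' p. K g h r t g' h' p q))))))"
    by (rule Sw_coassoc4[OF s]) (use K in \<open>auto simp: multilin_defs intro!: lin\<close>)
  also have "\<dots> = Sw d a (\<lambda>z t. Sw d z (\<lambda>g w. Sw d b (\<lambda>z' q. Sw d w (\<lambda>h r. Sw d z' (\<lambda>g' v. Sw d v (\<lambda>h' p. K g h r t g' h' p q))))))"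
    by (intro Sw_cong, rule Sw_swap)
  also have "\<dots> = Sw d a (\<lambda>z t. Sw d b (\<lambda>z' q. Sw d z (\<lambda>g w. Sw d w (\<lambda>h r. Sw d z' (\<lambda>g' v. Sw d v (\<lambda>h' p. K g h r t g' h' p q))))))"
    by (intro Sw_cong, rule Sw_swap)
  also have "\<dots> = Sw d a (\<lambda>z t. Sw d b (\<lambda>z' q. Sw d z (\<lambda>g w. Sw d z' (\<lambda>g' v. Sw d w (\<lambda>h r. Sw d v (\<lambda>h' p. K g h r t g' h' p q))))))"
    by (intro Sw_cong, rule Sw_swap)
  finally show ?thesis .
qed

lemma conv_inv_unique:
  assumes A: "bilin sc sc act" and b1: "is_conv_inv sc d e act b1" and b2: "is_conv_inv sc d e act b2"
  shows "b1 = b2"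
proof (intro ext)
  fix x y
  have B1: "bilin sc sc b1" and B2: "bilin sc sc b2" using b1 b2 unfolding is_conv_inv_def bilinH_def bilin_def by blast+
  have i1: "Sw d z (\<lambda>a b. b1 a (act b w)) = sc (e z) w" for z w using b1 unfolding is_conv_inv_def Sw_def by blast
  have i2: "Sw d z (\<lambda>a b. act a (b2 b w)) = sc (e z) w" for z w using b2 unfolding is_conv_inv_def Sw_def by blast
  note lin = Sw_linear_intros linear_bilin_left[OF A] linear_bilin_right[OF A] linear_bilin_left[OF B1] linear_bilin_right[OF B1] linear_bilin_left[OF B2] linear_bilin_right[OF B2] linear_scale_by_functional[OF linear_e]
  have "b1 x y = Sw d x (\<lambda>a c. sc (e c) (b1 a y))"
    by (rule Sw_counit_right[symmetric]) (auto intro!: lin)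
  also have "\<dots> = Sw d x (\<lambda>a c. Sw d c (\<lambda>p q. b1 a (act p (b2 q y))))"
    by (simp add: Sw_bilin_right[OF B1] i2 bilin_scale_right[OF B1])
  also have "\<dots> = Sw3 d x (\<lambda>a p q. b1 a (act p (b2 q y)))"
    by (rule Sw3_unfold2[symmetric, OF vs]) (auto simp: multilin_defs intro!: lin)
  also have "\<dots> = Sw d x (\<lambda>w q. sc (e w) (b2 q y))"
    by (simp add: Sw3_unfold1 Sw_bilin_left[OF B1] i1)
  also have "\<dots> = b2 x y" by (rule Sw_counit_left) (auto intro!: lin)
  finally show "b1 x y = b2 x y" .
qed

end

section \<open>Hopf algebras\<close>

locale hopf_alg = coalgebra sc d e
  for sc :: "'k::field \<Rightarrow> 'h::ab_group_add \<Rightarrow> 'h" and d e +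
  fixes mul one T
  assumes hopf: "is_hopf sc mul one d e T"
begin

lemma bilin_mul: "bilin sc sc mul" using hopf unfolding is_hopf_def is_bialgebra_def is_algebra_def bilinH_eq_bilin by blast
lemma mul_assoc: "mul (mul x y) z = mul x (mul y z)" using hopf unfolding is_hopf_def is_bialgebra_def is_algebra_def by blast
lemma mul_one_left[simp]: "mul one x = x" using hopf unfolding is_hopf_def is_bialgebra_def is_algebra_def by blast
lemma mul_one_right[simp]: "mul x one = x" using hopf unfolding is_hopf_def is_bialgebra_def is_algebra_def by blast
lemma linear_T: "Vector_Spaces.linear sc sc T" using hopf unfolding is_hopf_def is_antipode_def by blast
lemma antipode_right: "Sw d x (\<lambda>a b. mul a (T b)) = sc (e x) one" using hopf unfolding is_hopf_def is_antipode_def Sw_def by blast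
lemma antipode_left: "Sw d x (\<lambda>a b. mul (T a) b) = sc (e x) one" using hopf unfolding is_hopf_def is_antipode_def Sw_def by blast
lemma counit_mul: "e (mul x y) = e x * e y" using hopf unfolding is_hopf_def is_bialgebra_def by blast
lemma counit_one[simp]: "e one = 1" using hopf unfolding is_hopf_def is_bialgebra_def by blast
lemma Sw_one: "vector_space s \<Longrightarrow> bilin sc s F \<Longrightarrow> Sw d one F = F one one"
  using teq2_bilin_sums[of sc "d one" "[(one,one)]"] hopf unfolding is_hopf_def is_bialgebra_def Sw_def by simp
lemma comult_mul: "vector_space s \<Longrightarrow> bilin sc s F \<Longrightarrow>
    Sw d (mul x y) F = Sw d x (\<lambda>x1 x2. Sw d y (\<lambda>y1 y2. F (mul x1 y1) (mul x2 y2)))"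
  by (rule Sw_teq2_concat) (use hopf in \<open>auto simp: is_hopf_def is_bialgebra_def\<close>)

lemmas hopf_linear = Sw_linear_intros vector_space_field linear_bilin_left[OF bilin_mul] linear_bilin_right[OF bilin_mul] linear_compose_fun[OF _ linear_T]
  linear_scale_by_functional[OF linear_e] linear_scale_const linear_compose_fun[OF _ linear_e] linear_mult_const_right linear_mult_const_left
lemmas hopf_scale = bilin_scale_left[OF bilin_mul] bilin_scale_right[OF bilin_mul] linear_scaleD[OF linear_T] linear_scaleD[OF linear_e]
lemmas hopf_Sw_pull = Sw_bilin_left[OF bilin_mul] Sw_bilin_right[OF bilin_mul] Sw_linear[OF linear_T] Sw_linear[OF linear_e]

lemma counit_T: "e (T x) = e x"
proof -
  have "e (T x) = Sw d x (\<lambda>a b. e a * e (T b))"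
    using Sw_counit_left[of "(*)" "\<lambda>b. e (T b)" x] by (simp add: linear_compose_fun[OF linear_T linear_e])
  also have "\<dots> = e (Sw d x (\<lambda>a b. mul a (T b)))" by (simp add: linear_Sw[OF linear_e] counit_mul)
  also have "\<dots> = e x" by (simp add: antipode_right linear_scaleD[OF linear_e])
  finally show ?thesis .
qed

lemma antipode_one: "T one = one"
  using antipode_right[of one] Sw_one[where s=sc and F="\<lambda>a b. mul a (T b)"]
  by (simp add: vs_one[OF vs] bilin_def hopf_linear)

lemma Sw_mul_antipode_mul: "Sw d a (\<lambda>p q. Sw d b (\<lambda>r t. mul (mul p r) (T (mul q t)))) = sc (e a * e b) one"
proof -
  have "Sw d a (\<lambda>p q. Sw d b (\<lambda>r t. mul (mul p r) (T (mul q t)))) = Sw d (mul a b) (\<lambda>p q. mul p (T q))"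
    by (rule comult_mul[symmetric, OF vs]) (auto intro!: hopf_linear simp: bilin_def)
  then show ?thesis by (simp add: antipode_right counit_mul)
qed

text \<open>The classical argument: write \<open>T(y) T(x) = T(y\<^sub>1) T(x\<^sub>1) (x\<^sub>2 y\<^sub>2)\<^sub>1 T((x\<^sub>2 y\<^sub>2)\<^sub>2)\<close> and cancel
  \<open>T(x\<^sub>1) x\<^sub>2\<close> and \<open>T(y\<^sub>1) y\<^sub>2\<close>.\<close>

lemma antipode_anti_mult: "T (mul x y) = mul (T y) (T x)"
proof -
  have "mul (T y) (T x) = Sw d x (\<lambda>x1 x2. sc (e x2) (mul (T y) (T x1)))"
    by (rule Sw_counit_right[symmetric]) (auto intro!: hopf_linear)
  also have "\<dots> = Sw d x (\<lambda>x1 x2. Sw d y (\<lambda>y1 y2. mul (mul (T y1) (T x1)) (sc (e x2 * e y2) one)))"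
  proof (rule Sw_cong)
    fix x1 x2
    have "Sw d y (\<lambda>y1 y2. mul (mul (T y1) (T x1)) (sc (e x2 * e y2) one)) = sc (e x2) (Sw d y (\<lambda>y1 y2. sc (e y2) (mul (T y1) (T x1))))"
      by (simp add: Sw_scale[OF vs, symmetric] vs_scale_scale[OF vs] hopf_scale mult.commute)
    also have "Sw d y (\<lambda>y1 y2. sc (e y2) (mul (T y1) (T x1))) = mul (T y) (T x1)"
      by (rule Sw_counit_right) (auto intro!: hopf_linear)
    finally show "sc (e x2) (mul (T y) (T x1)) = Sw d y (\<lambda>y1 y2. mul (mul (T y1) (T x1)) (sc (e x2 * e y2) one))" by simp
  qed
  also have "\<dots> = Sw d x (\<lambda>x1 x2. Sw d y (\<lambda>y1 y2. Sw d x2 (\<lambda>p q. Sw d y2 (\<lambda>r t. mul (T y1) (mul (mul (mul (T x1) p) r) (T (mul q t)))))))"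
    by (simp add: Sw_mul_antipode_mul[symmetric] hopf_Sw_pull mul_assoc)
  also have "\<dots> = Sw d x (\<lambda>x1 x2. Sw d x2 (\<lambda>p q. Sw d y (\<lambda>y1 y2. Sw d y2 (\<lambda>r t. mul (T y1) (mul (mul (mul (T x1) p) r) (T (mul q t)))))))"
    by (rule Sw_cong, rule Sw_swap)
  also have "\<dots> = Sw3 d x (\<lambda>x1 p q. Sw3 d y (\<lambda>y1 r t. mul (T y1) (mul (mul (mul (T x1) p) r) (T (mul q t)))))"
    apply (subst Sw3_unfold2[OF vs]) apply (auto simp: multilin_defs Sw_defs intro!: hopf_linear)[1]
    apply (rule Sw_cong, rule Sw_cong)
    apply (subst Sw3_unfold2[OF vs]) apply (auto simp: multilin_defs Sw_defs intro!: hopf_linear)[1]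
    by (rule refl)
  also have "\<dots> = Sw d x (\<lambda>w q. Sw3 d y (\<lambda>y1 r t. Sw d w (\<lambda>x1 p. mul (T y1) (mul (mul (mul (T x1) p) r) (T (mul q t))))))"
    by (simp only: Sw3_unfold1[of d x]) (rule Sw_cong, rule Sw3_swap[symmetric])
  also have "\<dots> = Sw d x (\<lambda>w q. sc (e w) (Sw3 d y (\<lambda>y1 r t. mul (T y1) (mul r (T (mul q t))))))"
    by (simp add: hopf_Sw_pull antipode_left hopf_scale Sw_defs Sw_scale[OF vs])
  also have "\<dots> = Sw3 d y (\<lambda>y1 r t. mul (T y1) (mul r (T (mul x t))))"
    by (rule Sw_counit_left) (auto intro!: hopf_linear simp: Sw_defs)
  also have "\<dots> = Sw d y (\<lambda>w t. Sw d w (\<lambda>y1 r. mul (mul (T y1) r) (T (mul x t))))"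
    by (simp add: Sw3_unfold1 mul_assoc)
  also have "\<dots> = Sw d y (\<lambda>w t. sc (e w) (T (mul x t)))"
    by (simp add: hopf_Sw_pull antipode_left hopf_scale)
  also have "\<dots> = T (mul x y)" by (rule Sw_counit_left) (auto intro!: hopf_linear)
  finally show ?thesis by simp
qed

lemma Sw4_antipode_cancel: assumes s: "vector_space s" and F: "bilin sc s F"
  shows "Sw4 d b (\<lambda>b1 b2 b3 b4. F (mul A1 (mul b1 (T b4))) (mul A2 (mul b2 (T b3)))) = s (e b) (F A1 A2)"
proof -
  note lin = hopf_linear linear_bilin_left[OF F] linear_bilin_right[OF F] s
  have "Sw4 d b (\<lambda>b1 b2 b3 b4. F (mul A1 (mul b1 (T b4))) (mul A2 (mul b2 (T b3))))
     = Sw3 d b (\<lambda>b1 c b4. Sw d c (\<lambda>b2 b3. F (mul A1 (mul b1 (T b4))) (mul A2 (mul b2 (T b3)))))"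
    by (rule Sw4_unfold2[OF s]) (auto simp: multilin_defs intro!: lin)
  also have "\<dots> = Sw3 d b (\<lambda>b1 c b4. s (e c) (F (mul A1 (mul b1 (T b4))) A2))"
    by (simp add: hopf_Sw_pull Sw_bilin_right[OF F] antipode_right hopf_scale bilin_scale_right[OF F])
  also have "\<dots> = Sw d b (\<lambda>b1 w. Sw d w (\<lambda>c b4. s (e c) (F (mul A1 (mul b1 (T b4))) A2)))"
    by (rule Sw3_unfold2[OF s]) (auto simp: multilin_defs intro!: lin)
  also have "\<dots> = Sw d b (\<lambda>b1 w. F (mul A1 (mul b1 (T w))) A2)"
    by (intro Sw_cong Sw_counit_left) (auto intro!: lin)
  also have "\<dots> = s (e b) (F A1 A2)"
    by (simp add: hopf_Sw_pull Sw_bilin_left[OF F] antipode_right hopf_scale bilin_scale_left[OF F])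
  finally show ?thesis .
qed

lemma Sw_antipode_mul_comult:
  assumes "vector_space s" "bilin sc s G"
  shows "Sw d w (\<lambda>a c. Sw d (mul (T a) c) G) = s (e w) (G one one)"
proof -
  have "Sw d w (\<lambda>a c. Sw d (mul (T a) c) G) = Sw d (Sw d w (\<lambda>a c. mul (T a) c)) G"
    by (rule Sw_linear[OF linear_Sw_arg[OF assms]])
  then show ?thesis by (simp add: antipode_left linear_scaleD[OF linear_Sw_arg[OF assms]] Sw_one[OF assms])
qed

lemma antipode_anti_comult: assumes s: "vector_space s" and F: "bilin sc s F"
  shows "Sw d (T x) F = Sw d x (\<lambda>a b. F (T b) (T a))"
proof -
  note lin = hopf_linear linear_bilin_left[OF F] linear_bilin_right[OF F] s
  have linTF: "Vector_Spaces.linear sc s (\<lambda>a. Sw d (T a) F)"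
    by (rule linear_compose_fun[OF linear_T linear_Sw_arg[OF s F]])
  have "Sw d (T x) F = Sw d x (\<lambda>a b. s (e b) (Sw d (T a) F))"
    by (rule Sw_counit_right[symmetric, OF linTF])
  also have "\<dots> = Sw d x (\<lambda>a b. Sw d (T a) (\<lambda>A1 A2. Sw4 d b (\<lambda>b1 b2 b3 b4. F (mul A1 (mul b1 (T b4))) (mul A2 (mul b2 (T b3))))))"
    by (simp add: Sw4_antipode_cancel[OF s F] Sw_scale[OF s])
  also have "\<dots> = Sw d x (\<lambda>a b. Sw4 d b (\<lambda>b1 b2 b3 b4. Sw d (T a) (\<lambda>A1 A2. F (mul A1 (mul b1 (T b4))) (mul A2 (mul b2 (T b3))))))"
    by (rule Sw_cong, rule Sw4_swap[symmetric])
  also have "\<dots> = Sw5 d x (\<lambda>a b1 b2 b3 b4. Sw d (T a) (\<lambda>A1 A2. F (mul A1 (mul b1 (T b4))) (mul A2 (mul b2 (T b3)))))"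
    by (rule Sw5_unfold_tail[symmetric, OF s]) (auto simp: multilin_defs intro!: lin)
  also have "\<dots> = Sw4 d x (\<lambda>a c b3 b4. Sw d c (\<lambda>b1 b2. Sw d (T a) (\<lambda>A1 A2. F (mul A1 (mul b1 (T b4))) (mul A2 (mul b2 (T b3))))))"
    by (rule Sw5_unfold2[OF s]) (auto simp: multilin_defs intro!: lin)
  also have "\<dots> = Sw4 d x (\<lambda>a c b3 b4. Sw d (mul (T a) c) (\<lambda>X Y. F (mul X (T b4)) (mul Y (T b3))))"
  proof (intro arg_cong[where f="Sw4 d x"] ext)
    fix a c b3 b4
    have "Sw d c (\<lambda>b1 b2. Sw d (T a) (\<lambda>A1 A2. F (mul A1 (mul b1 (T b4))) (mul A2 (mul b2 (T b3)))))
        = Sw d (T a) (\<lambda>A1 A2. Sw d c (\<lambda>b1 b2. F (mul (mul A1 b1) (T b4)) (mul (mul A2 b2) (T b3))))"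
      by (simp add: Sw_swap[of d c] mul_assoc)
    also have "\<dots> = Sw d (mul (T a) c) (\<lambda>X Y. F (mul X (T b4)) (mul Y (T b3)))"
      by (rule comult_mul[symmetric, OF s]) (auto intro!: lin simp: bilin_def)
    finally show "Sw d c (\<lambda>b1 b2. Sw d (T a) (\<lambda>A1 A2. F (mul A1 (mul b1 (T b4))) (mul A2 (mul b2 (T b3))))) = Sw d (mul (T a) c) (\<lambda>X Y. F (mul X (T b4)) (mul Y (T b3)))" .
  qed
  also have "\<dots> = Sw3 d x (\<lambda>w b3 b4. Sw d w (\<lambda>a c. Sw d (mul (T a) c) (\<lambda>X Y. F (mul X (T b4)) (mul Y (T b3)))))"
    by (rule Sw4_unfold1)
  also have "\<dots> = Sw3 d x (\<lambda>w b3 b4. s (e w) (F (T b4) (T b3)))"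
    by (intro arg_cong[where f="Sw3 d x"] ext trans[OF Sw_antipode_mul_comult[OF s]])
      (auto intro!: lin simp: bilin_def)
  also have "\<dots> = Sw d x (\<lambda>a b. F (T b) (T a))"
    unfolding Sw3_unfold1 by (intro Sw_cong Sw_counit_left) (auto intro!: lin)
  finally show ?thesis .
qed

end

section \<open>From Yetter--Drinfeld post-Hopf algebras to matched pairs\<close>

text \<open>The assumptions are the axioms (P1)--(P6); the operations \<open>\<bullet>\<close>, \<open>S\<^sub>\<rightharpoonup>\<close> and \<open>\<leftharpoonup>\<close> of (P6)
  are parameters pinned down by their defining equations.\<close>

locale yd_post_hopf = coalgebra sc d e
  for sc :: "'k::field \<Rightarrow> 'h::ab_group_add \<Rightarrow> 'h" and d e +
  fixes m u S act beta bul SA ra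
  assumes algebra_m: "is_algebra sc m u"
    and antipode_S: "is_antipode sc m u d e S"
    and bilinH_act: "bilinH sc act"
    and comult_act_teq: "\<forall>x y. teq2 sc (d (act x y))
                 (concat (map (\<lambda>(x1,x2). map (\<lambda>(y1,y2). (act x1 y1, act x2 y2)) (d y)) (d x)))"
    and counit_act_all: "\<forall>x y. e (act x y) = e x * e y"
    and P1: "\<forall>x y z. act x (m y z) = sum_list (map (\<lambda>(x1,x2). m (act x1 y) (act x2 z)) (d x))"
    and P2: "\<forall>x y z. act x (act y z) = act (bul x y) z"
    and P3: "is_conv_inv sc d e act beta"
    and P4: "(\<forall>a b. e (m a b) = e a * e b)" "e u = 1" "teq2 sc (d u) [(u,u)]"
    and P5: "\<forall>x y. teq2 sc (d (m x y))
            (concat (map (\<lambda>(x1,x2,x3,x4). map (\<lambda>(y1,y2).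
                 (m x1 (act x2 (beta x4 y1)), m x3 y2)) (d y)) (sw4 d x)))"
    and P6a: "\<forall>x. teq2 sc (d (SA x)) (map (\<lambda>(x1,x2). (SA x2, SA x1)) (d x))"
    and P6b: "\<forall>x y. teq2 sc
            (concat (map (\<lambda>(x1,x2). map (\<lambda>(y1,y2). (act x1 y1, ra x2 y2)) (d y)) (d x)))
            (concat (map (\<lambda>(x1,x2). map (\<lambda>(y1,y2). (act x2 y2, ra x1 y1)) (d y)) (d x)))"
    and bul_def: "bul = (\<lambda>x y. Sw d x (\<lambda>a b. m a (act b y)))"
    and SA_def: "SA = (\<lambda>x. Sw d x (\<lambda>a b. beta a (S b)))"
    and ra_def: "ra = (\<lambda>x y. Sw d x (\<lambda>x1 x2. Sw d y (\<lambda>y1 y2. bul (bul (SA (act x1 y1)) x2) y2)))"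
begin

lemma bilin_m: "bilin sc sc m" using algebra_m unfolding is_algebra_def bilinH_eq_bilin by blast
lemma m_assoc: "m (m x y) z = m x (m y z)" using algebra_m unfolding is_algebra_def by blast
lemma m_one_left[simp]: "m u x = x" using algebra_m unfolding is_algebra_def by blast
lemma m_one_right[simp]: "m x u = x" using algebra_m unfolding is_algebra_def by blast
lemma bilin_act: "bilin sc sc act" using bilinH_act unfolding bilinH_eq_bilin .
lemma linear_S: "Vector_Spaces.linear sc sc S" using antipode_S unfolding is_antipode_def by blast
lemma antipode_S_right: "Sw d x (\<lambda>a b. m a (S b)) = sc (e x) u" using antipode_S unfolding is_antipode_def Sw_def by blast
lemma antipode_S_left: "Sw d x (\<lambda>a b. m (S a) b) = sc (e x) u" using antipode_S unfolding is_antipode_def Sw_def by blast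
lemma bilin_beta: "bilin sc sc beta" using P3 unfolding is_conv_inv_def bilinH_eq_bilin by blast
lemma act_beta_inverse: "Sw d x (\<lambda>a b. act a (beta b y)) = sc (e x) y" using P3 unfolding is_conv_inv_def Sw_def by blast
lemma beta_act_inverse: "Sw d x (\<lambda>a b. beta a (act b y)) = sc (e x) y" using P3 unfolding is_conv_inv_def Sw_def by blast
lemma act_m: "act x (m y z) = Sw d x (\<lambda>x1 x2. m (act x1 y) (act x2 z))" using P1 unfolding Sw_def by blast
lemma counit_act: "e (act x y) = e x * e y" using counit_act_all by blast
lemma counit_m: "e (m x y) = e x * e y" using P4 by blast
lemma counit_u[simp]: "e u = 1" using P4 by blast

lemmas yd_linear_core = Sw_linear_intros vector_space_field linear_bilin_left[OF bilin_m] linear_bilin_right[OF bilin_m] linear_bilin_left[OF bilin_act] linear_bilin_right[OF bilin_act]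
  linear_bilin_left[OF bilin_beta] linear_bilin_right[OF bilin_beta] linear_compose_fun[OF _ linear_S] linear_scale_by_functional[OF linear_e] linear_scale_const linear_compose_fun[OF _ linear_e]
  linear_mult_const_right linear_mult_const_left

lemma bilin_bul: "bilin sc sc bul"
  unfolding bilin_def bul_def by (auto intro!: yd_linear_core linear_Sw_arg simp: bilin_def)
lemma linear_SA: "Vector_Spaces.linear sc sc SA"
  unfolding SA_def by (rule linear_Sw_arg[OF vs]) (auto intro!: yd_linear_core simp: bilin_def)
lemma bilin_ra: "bilin sc sc ra"
  unfolding bilin_def ra_def by (auto intro!: yd_linear_core linear_bilin_left[OF bilin_bul] linear_bilin_right[OF bilin_bul] linear_compose_fun[OF _ linear_SA] linear_Sw_arg simp: bilin_def)

lemmas yd_linear = yd_linear_core linear_bilin_left[OF bilin_bul] linear_bilin_right[OF bilin_bul]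
  linear_compose_fun[OF _ linear_SA] linear_bilin_left[OF bilin_ra] linear_bilin_right[OF bilin_ra]
lemmas yd_scale = bilin_scale_left[OF bilin_m] bilin_scale_right[OF bilin_m] bilin_scale_left[OF bilin_act] bilin_scale_right[OF bilin_act]
  bilin_scale_left[OF bilin_beta] bilin_scale_right[OF bilin_beta] linear_scaleD[OF linear_S] linear_scaleD[OF linear_e]
  bilin_scale_left[OF bilin_bul] bilin_scale_right[OF bilin_bul] linear_scaleD[OF linear_SA]
lemmas yd_Sw_pull = Sw_bilin_left[OF bilin_m] Sw_bilin_right[OF bilin_m] Sw_bilin_left[OF bilin_act] Sw_bilin_right[OF bilin_act]
  Sw_bilin_left[OF bilin_beta] Sw_bilin_right[OF bilin_beta] Sw_linear[OF linear_S] Sw_linear[OF linear_e]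
  Sw_bilin_left[OF bilin_bul] Sw_bilin_right[OF bilin_bul] Sw_linear[OF linear_SA]
  Sw_bilin_left[OF bilin_ra] Sw_bilin_right[OF bilin_ra]

lemma Sw_unit: "vector_space s \<Longrightarrow> bilin sc s F \<Longrightarrow> Sw d u F = F u u"
  using teq2_bilin_sums[OF P4(3)] unfolding Sw_def by simp

lemma comult_act: "vector_space s \<Longrightarrow> bilin sc s F \<Longrightarrow> Sw d (act x y) F = Sw d x (\<lambda>x1 x2. Sw d y (\<lambda>y1 y2. F (act x1 y1) (act x2 y2)))"
  by (rule Sw_teq2_concat[where d=d, OF comult_act_teq[rule_format]])

lemma act_unit_right: "act x u = sc (e x) u"
proof -
  have key: "sc (e x) z = m (act x u) z" for z
  proof -
    have "sc (e x) z = Sw d x (\<lambda>a b. act a (beta b z))" by (simp add: act_beta_inverse)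
    also have "\<dots> = Sw d x (\<lambda>a b. Sw d a (\<lambda>a1 a2. m (act a1 u) (act a2 (beta b z))))"
      by (rule Sw_cong) (simp add: act_m[symmetric])
    also have "\<dots> = Sw d x (\<lambda>a1 c. Sw d c (\<lambda>a2 b. m (act a1 u) (act a2 (beta b z))))"
      by (rule Sw_coassoc[where s=sc]) (auto simp: multilin_defs intro!: yd_linear)
    also have "\<dots> = Sw d x (\<lambda>a1 c. m (act a1 u) (Sw d c (\<lambda>a2 b. act a2 (beta b z))))"
      by (rule Sw_cong) (simp add: linear_Sw[OF linear_bilin_right[OF bilin_m linear_ident[OF vs]]])
    also have "\<dots> = Sw d x (\<lambda>a1 c. sc (e c) (m (act a1 u) z))"
      by (simp add: act_beta_inverse bilin_scale_right[OF bilin_m])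
    also have "\<dots> = m (act x u) z"
      by (rule Sw_counit_right) (auto intro!: yd_linear)
    finally show ?thesis .
  qed
  show ?thesis using key[of u] by simp
qed

lemma beta_unit_right: "beta x u = sc (e x) u"
proof -
  have "beta x u = Sw d x (\<lambda>a b. sc (e b) (beta a u))"
    by (rule Sw_counit_right[symmetric]) (auto intro!: yd_linear)
  also have "\<dots> = Sw d x (\<lambda>a b. beta a (sc (e b) u))" by (simp add: yd_scale)
  also have "\<dots> = Sw d x (\<lambda>a b. beta a (act b u))" by (simp add: act_unit_right)
  finally show ?thesis by (simp add: beta_act_inverse)
qed

lemma act_unit_left[simp]: "act u y = y"
proof -
  have uu: "act u u = u" by (simp add: act_unit_right vs_one[OF vs])
  have "bul u u = u" unfolding bul_def
    by (subst Sw_unit[where s=sc]) (auto simp: uu intro!: yd_linear simp: bilin_def)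
  then have gg: "act u (act u z) = act u z" for z using P2 by simp
  have abu: "act u (beta u y) = y" using act_beta_inverse[of u y] Sw_unit[where s=sc and F="\<lambda>a b. act a (beta b y)"]
    by (simp add: bilin_def vs_one[OF vs] yd_linear)
  show ?thesis using gg[of "beta u y"] abu by simp
qed

lemma bul_unit_left: "bul u y = y"
  unfolding bul_def by (subst Sw_unit[where s=sc]) (auto simp: act_unit_left intro!: yd_linear simp: bilin_def)
lemma bul_unit_right: "bul x u = x"
  unfolding bul_def by (simp add: act_unit_right yd_scale Sw_counit_right[OF linear_ident[OF vs]])

lemma comult_m: assumes "vector_space s" "bilin sc s F"
  shows "Sw d (m x y) F = Sw4 d x (\<lambda>x1 x2 x3 x4. Sw d y (\<lambda>y1 y2. F (m x1 (act x2 (beta x4 y1))) (m x3 y2)))"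
  using teq2_bilin_sums[OF P5[rule_format] assms]
  unfolding Sw_def Sw_defs sw4_def sw3_def by (simp add: sum_list_concat map_concat o_def case_prod_beta')

lemma Sw6_beta_act_cancel:
  assumes s: "vector_space s" and F: "bilin sc s F"
  shows "Sw6 d x (\<lambda>a1 a2 a3 a4 b1 b2. F (m a1 (act a2 (beta a4 (act b1 y1)))) (m a3 (act b2 y2)))
       = Sw d x (\<lambda>x1 x2. F (bul x1 y1) (bul x2 y2))"
proof -
  note lin = yd_linear linear_bilin_left[OF F] linear_bilin_right[OF F] s
  have "Sw6 d x (\<lambda>a1 a2 a3 a4 b1 b2. F (m a1 (act a2 (beta a4 (act b1 y1)))) (m a3 (act b2 y2)))
     = Sw5 d x (\<lambda>a1 a2 a3 c a5. Sw d c (\<lambda>p q. F (m a1 (act a2 (beta p (act q y1)))) (m a3 (act a5 y2))))"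
    by (rule Sw6_unfold4[OF s]) (auto simp: multilin_defs intro!: lin)
  also have "\<dots> = Sw5 d x (\<lambda>a1 a2 a3 c a5. s (e c) (F (m a1 (act a2 y1)) (m a3 (act a5 y2))))"
    by (simp add: yd_Sw_pull Sw_bilin_left[OF F] beta_act_inverse yd_scale bilin_scale_left[OF F])
  also have "\<dots> = Sw4 d x (\<lambda>a1 a2 a3 a4. Sw d a4 (\<lambda>p q. s (e p) (F (m a1 (act a2 y1)) (m a3 (act q y2)))))"
    by (rule Sw5_unfold4[OF s]) (auto simp: multilin_defs intro!: lin)
  also have "\<dots> = Sw4 d x (\<lambda>a1 a2 a3 a4. F (m a1 (act a2 y1)) (m a3 (act a4 y2)))"
    by (intro arg_cong[where f="Sw4 d x"] ext Sw_counit_left) (auto intro!: lin)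
  also have "\<dots> = Sw3 d x (\<lambda>c a3 a4. Sw d c (\<lambda>a1 a2. F (m a1 (act a2 y1)) (m a3 (act a4 y2))))"
    by (rule Sw4_unfold1)
  also have "\<dots> = Sw3 d x (\<lambda>c a3 a4. F (bul c y1) (m a3 (act a4 y2)))"
    by (simp add: Sw_bilin_left[OF F] bul_def)
  also have "\<dots> = Sw d x (\<lambda>c w. Sw d w (\<lambda>a3 a4. F (bul c y1) (m a3 (act a4 y2))))"
    by (rule Sw3_unfold2[OF s]) (auto simp: multilin_defs intro!: lin linear_bilin_left[OF bilin_bul])
  also have "\<dots> = Sw d x (\<lambda>x1 x2. F (bul x1 y1) (bul x2 y2))"
    by (simp add: Sw_bilin_right[OF F] bul_def)
  finally show ?thesis .
qed

lemma comult_bul: assumes s: "vector_space s" and F: "bilin sc s F"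
  shows "Sw d (bul x y) F = Sw d x (\<lambda>x1 x2. Sw d y (\<lambda>y1 y2. F (bul x1 y1) (bul x2 y2)))"
proof -
  note lin = yd_linear linear_bilin_left[OF F] linear_bilin_right[OF F] s
  have "Sw d (bul x y) F = Sw d x (\<lambda>a b. Sw d (m a (act b y)) F)"
    by (simp add: bul_def linear_Sw[OF linear_Sw_arg[OF s F]])
  also have "\<dots> = Sw d x (\<lambda>a b. Sw4 d a (\<lambda>a1 a2 a3 a4. Sw d (act b y) (\<lambda>p q. F (m a1 (act a2 (beta a4 p))) (m a3 q))))"
    by (rule Sw_cong) (rule comult_m[OF s F])
  also have "\<dots> = Sw d x (\<lambda>a b. Sw4 d a (\<lambda>a1 a2 a3 a4. Sw d b (\<lambda>b1 b2. Sw d y (\<lambda>y1 y2. F (m a1 (act a2 (beta a4 (act b1 y1)))) (m a3 (act b2 y2))))))"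
    by (intro Sw_cong arg_cong[where f="Sw4 d _"] ext comult_act[OF s]) (auto intro!: lin simp: bilin_def)
  also have "\<dots> = Sw5 d x (\<lambda>a1 a2 a3 a4 b. Sw d b (\<lambda>b1 b2. Sw d y (\<lambda>y1 y2. F (m a1 (act a2 (beta a4 (act b1 y1)))) (m a3 (act b2 y2)))))"
    by (simp add: Sw5_def)
  also have "\<dots> = Sw6 d x (\<lambda>a1 a2 a3 a4 b1 b2. Sw d y (\<lambda>y1 y2. F (m a1 (act a2 (beta a4 (act b1 y1)))) (m a3 (act b2 y2))))"
    by (rule Sw6_unfold5[symmetric, OF s]) (auto simp: multilin_defs intro!: lin)
  also have "\<dots> = Sw d y (\<lambda>y1 y2. Sw6 d x (\<lambda>a1 a2 a3 a4 b1 b2. F (m a1 (act a2 (beta a4 (act b1 y1)))) (m a3 (act b2 y2))))"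
    by (rule Sw6_swap)
  also have "\<dots> = Sw d y (\<lambda>y1 y2. Sw d x (\<lambda>x1 x2. F (bul x1 y1) (bul x2 y2)))"
    by (rule Sw_cong, rule Sw6_beta_act_cancel[OF s F])
  also have "\<dots> = Sw d x (\<lambda>x1 x2. Sw d y (\<lambda>y1 y2. F (bul x1 y1) (bul x2 y2)))"
    by (rule Sw_swap)
  finally show ?thesis .
qed

lemma bul_assoc: "bul (bul x y) z = bul x (bul y z)"
proof -
  have "bul (bul x y) z = Sw d x (\<lambda>x1 x2. Sw d y (\<lambda>y1 y2. m (bul x1 y1) (act (bul x2 y2) z)))"
    by (subst bul_def, rule comult_bul[OF vs]) (auto intro!: yd_linear simp: bilin_def)
  also have "\<dots> = Sw d x (\<lambda>x1 x2. Sw d y (\<lambda>y1 y2. Sw d x1 (\<lambda>p q. m (m p (act q y1)) (act x2 (act y2 z)))))"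
    by (simp add: yd_Sw_pull bul_def P2)
  also have "\<dots> = Sw d x (\<lambda>x1 x2. Sw d x1 (\<lambda>p q. Sw d y (\<lambda>y1 y2. m (m p (act q y1)) (act x2 (act y2 z)))))"
    by (rule Sw_cong, rule Sw_swap[symmetric])
  also have "\<dots> = Sw3 d x (\<lambda>p q x2. Sw d y (\<lambda>y1 y2. m (m p (act q y1)) (act x2 (act y2 z))))"
    by (simp add: Sw3_unfold1)
  also have "\<dots> = Sw d x (\<lambda>p w. Sw d w (\<lambda>q x2. Sw d y (\<lambda>y1 y2. m (m p (act q y1)) (act x2 (act y2 z)))))"
    by (rule Sw3_unfold2[OF vs]) (auto simp: multilin_defs intro!: yd_linear)
  also have "\<dots> = Sw d x (\<lambda>p w. m p (act w (bul y z)))"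
  proof (rule Sw_cong)
    fix p w
    have "Sw d w (\<lambda>q x2. Sw d y (\<lambda>y1 y2. m (m p (act q y1)) (act x2 (act y2 z))))
        = m p (Sw d w (\<lambda>q x2. Sw d y (\<lambda>y1 y2. m (act q y1) (act x2 (act y2 z)))))"
      by (simp add: m_assoc yd_Sw_pull)
    also have "\<dots> = m p (Sw d y (\<lambda>y1 y2. Sw d w (\<lambda>q x2. m (act q y1) (act x2 (act y2 z)))))"
      by (simp add: Sw_swap[of d w])
    also have "\<dots> = m p (act w (bul y z))"
      by (simp add: act_m[symmetric] bul_def yd_Sw_pull)
    finally show "Sw d w (\<lambda>q x2. Sw d y (\<lambda>y1 y2. m (m p (act q y1)) (act x2 (act y2 z)))) = m p (act w (bul y z))" .
  qed
  also have "\<dots> = bul x (bul y z)" by (simp add: bul_def)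
  finally show ?thesis .
qed

lemma counit_bul: "e (bul x y) = e x * e y"
proof -
  have "e (bul x y) = Sw d x (\<lambda>a b. e a * e b) * e y"
    by (simp add: bul_def linear_Sw[OF linear_e] counit_m counit_act Sw_mult_right[symmetric] mult.assoc)
  also have "Sw d x (\<lambda>a b. e a * e b) = e x"
    using Sw_counit_left[OF linear_e, of x] by simp
  finally show ?thesis .
qed

lemma Sw_act_SA: "Sw d w (\<lambda>q b. act q (SA b)) = S w"
proof -
  have "Sw d w (\<lambda>q b. act q (SA b)) = Sw d w (\<lambda>q b. Sw d b (\<lambda>r t. act q (beta r (S t))))"
    by (simp add: SA_def yd_Sw_pull)
  also have "\<dots> = Sw3 d w (\<lambda>q r t. act q (beta r (S t)))"
    by (rule Sw3_unfold2[symmetric, OF vs]) (auto simp: multilin_defs intro!: yd_linear)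
  also have "\<dots> = Sw d w (\<lambda>c t. sc (e c) (S t))"
    by (simp add: Sw3_unfold1 yd_Sw_pull act_beta_inverse)
  also have "\<dots> = S w" by (rule Sw_counit_left[OF linear_S])
  finally show ?thesis .
qed

lemma antipode_SA_right: "Sw d x (\<lambda>a b. bul a (SA b)) = sc (e x) u"
proof -
  have "Sw d x (\<lambda>a b. bul a (SA b)) = Sw3 d x (\<lambda>p q b. m p (act q (SA b)))"
    by (simp add: Sw3_unfold1 bul_def)
  also have "\<dots> = Sw d x (\<lambda>p w. Sw d w (\<lambda>q b. m p (act q (SA b))))"
    by (rule Sw3_unfold2[OF vs]) (auto simp: multilin_defs intro!: yd_linear)
  also have "\<dots> = Sw d x (\<lambda>p w. m p (S w))" by (simp add: yd_Sw_pull Sw_act_SA)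
  finally show ?thesis by (simp add: antipode_S_right)
qed

lemma act_scaled_unit: "act (sc c u) y = sc c y" by (simp add: yd_scale act_unit_left)

lemma beta_eq_act_SA: "beta x y = act (SA x) y"
proof -
  have "beta x y = Sw d x (\<lambda>a b. sc (e b) (beta a y))"
    by (rule Sw_counit_right[symmetric]) (auto intro!: yd_linear)
  also have "\<dots> = Sw d x (\<lambda>a b. Sw d b (\<lambda>p q. beta a (act p (act (SA q) y))))"
    by (simp add: yd_Sw_pull P2 antipode_SA_right act_scaled_unit yd_scale)
  also have "\<dots> = Sw3 d x (\<lambda>a p q. beta a (act p (act (SA q) y)))"
    by (rule Sw3_unfold2[symmetric, OF vs]) (auto simp: multilin_defs intro!: yd_linear)
  also have "\<dots> = Sw d x (\<lambda>c q. sc (e c) (act (SA q) y))"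
    by (simp add: Sw3_unfold1 yd_Sw_pull beta_act_inverse)
  also have "\<dots> = act (SA x) y" by (rule Sw_counit_left) (auto intro!: yd_linear)
  finally show ?thesis .
qed

lemma beta_anti_mult: "beta x (m y z) = Sw d x (\<lambda>x1 x2. m (beta x2 y) (beta x1 z))"
proof -
  define R where "R = (\<lambda>b. Sw d b (\<lambda>p q. m (beta q y) (beta p z)))"
  have claim: "Sw d x (\<lambda>a b. act a (R b)) = sc (e x) (m y z)" for x
  proof -
    have "Sw d x (\<lambda>a b. act a (R b)) = Sw d x (\<lambda>a b. Sw d b (\<lambda>p q. act a (m (beta q y) (beta p z))))"
      by (simp add: R_def yd_Sw_pull)
    also have "\<dots> = Sw3 d x (\<lambda>a p q. act a (m (beta q y) (beta p z)))"
      by (rule Sw3_unfold2[symmetric, OF vs]) (auto simp: multilin_defs intro!: yd_linear)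
    also have "\<dots> = Sw4 d x (\<lambda>a1 a2 p q. m (act a1 (beta q y)) (act a2 (beta p z)))"
      by (simp add: Sw4_unfold1 act_m)
    also have "\<dots> = Sw3 d x (\<lambda>a1 c q. Sw d c (\<lambda>a2 p. m (act a1 (beta q y)) (act a2 (beta p z))))"
      by (rule Sw4_unfold2[OF vs]) (auto simp: multilin_defs intro!: yd_linear)
    also have "\<dots> = Sw3 d x (\<lambda>a1 c q. sc (e c) (m (act a1 (beta q y)) z))"
      by (simp add: yd_Sw_pull act_beta_inverse yd_scale)
    also have "\<dots> = Sw d x (\<lambda>a1 w. Sw d w (\<lambda>c q. sc (e c) (m (act a1 (beta q y)) z)))"
      by (rule Sw3_unfold2[OF vs]) (auto simp: multilin_defs intro!: yd_linear)
    also have "\<dots> = Sw d x (\<lambda>a1 w. m (act a1 (beta w y)) z)"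
      by (intro Sw_cong Sw_counit_left) (auto intro!: yd_linear)
    also have "\<dots> = sc (e x) (m y z)" by (simp add: yd_Sw_pull act_beta_inverse yd_scale)
    finally show ?thesis .
  qed
  have "beta x (m y z) = Sw d x (\<lambda>a b. beta a (sc (e b) (m y z)))"
    using Sw_counit_right[of sc "\<lambda>a. beta a (m y z)" x] by (simp add: yd_scale yd_linear)
  also have "\<dots> = Sw d x (\<lambda>a b. Sw d b (\<lambda>c f. beta a (act c (R f))))"
    by (simp add: claim yd_Sw_pull)
  also have "\<dots> = Sw3 d x (\<lambda>a c f. beta a (act c (R f)))"
    by (rule Sw3_unfold2[symmetric, OF vs]) (auto simp: multilin_defs R_def bilin_def intro!: yd_linear)
  also have "\<dots> = Sw d x (\<lambda>w f. sc (e w) (R f))"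
    by (simp add: Sw3_unfold1 yd_Sw_pull beta_act_inverse)
  also have "\<dots> = R x" by (rule Sw_counit_left) (auto simp: R_def bilin_def intro!: yd_linear)
  finally show ?thesis by (simp add: R_def)
qed

lemma comult_SA: "vector_space s \<Longrightarrow> bilin sc s F \<Longrightarrow> Sw d (SA x) F = Sw d x (\<lambda>x1 x2. F (SA x2) (SA x1))"
  using teq2_bilin_sums[OF P6a[rule_format]] unfolding Sw_def by (simp add: o_def case_prod_beta')

lemma antipode_SA_left: "Sw d x (\<lambda>a b. bul (SA a) b) = sc (e x) u"
proof -
  have "Sw d x (\<lambda>a b. bul (SA a) b) = Sw d x (\<lambda>a b. Sw d a (\<lambda>a1 a2. m (SA a2) (beta a1 b)))"
    by (intro Sw_cong, subst bul_def, subst comult_SA[OF vs]) (auto simp: beta_eq_act_SA bilin_def intro!: yd_linear)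
  also have "\<dots> = Sw3 d x (\<lambda>a1 a2 b. Sw d a2 (\<lambda>r t. m (beta r (S t)) (beta a1 b)))"
    by (simp add: Sw3_unfold1 SA_def yd_Sw_pull)
  also have "\<dots> = Sw4 d x (\<lambda>a1 r t b. m (beta r (S t)) (beta a1 b))"
    by (rule Sw4_unfold2[symmetric, OF vs]) (auto simp: multilin_defs intro!: yd_linear)
  also have "\<dots> = Sw3 d x (\<lambda>w t b. beta w (m (S t) b))"
    by (simp add: Sw4_unfold1 beta_anti_mult)
  also have "\<dots> = Sw d x (\<lambda>w c. Sw d c (\<lambda>t b. beta w (m (S t) b)))"
    by (rule Sw3_unfold2[OF vs]) (auto simp: multilin_defs intro!: yd_linear)
  also have "\<dots> = Sw d x (\<lambda>w c. sc (e c) (beta w u))"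
    by (simp add: yd_Sw_pull antipode_S_left yd_scale)
  also have "\<dots> = beta x u" by (rule Sw_counit_right) (auto intro!: yd_linear)
  finally show ?thesis by (simp add: beta_unit_right)
qed

lemma counit_SA: "e (SA x) = e x"
proof -
  have "e (SA x) = Sw d x (\<lambda>a b. e a * e (SA b))"
    using Sw_counit_left[of "(*)" "\<lambda>b. e (SA b)" x] by (simp add: linear_compose_fun[OF linear_SA linear_e])
  also have "\<dots> = e (Sw d x (\<lambda>a b. bul a (SA b)))" by (simp add: linear_Sw[OF linear_e] counit_bul)
  also have "\<dots> = e x" by (simp add: antipode_SA_right linear_scaleD[OF linear_e])
  finally show ?thesis .
qed

lemma SA_unit: "SA u = u"
  using antipode_SA_right[of u] Sw_unit[where s=sc and F="\<lambda>a b. bul a (SA b)"]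
  by (simp add: bul_unit_left vs_one[OF vs] bilin_def yd_linear)

lemma m_via_bul: "m x z = Sw d x (\<lambda>a b. bul a (act (SA b) z))"
proof -
  have "Sw d x (\<lambda>a b. bul a (act (SA b) z)) = Sw3 d x (\<lambda>p q b. m p (act q (act (SA b) z)))"
    by (simp add: Sw3_unfold1 bul_def)
  also have "\<dots> = Sw d x (\<lambda>p w. Sw d w (\<lambda>q b. m p (act q (act (SA b) z))))"
    by (rule Sw3_unfold2[OF vs]) (auto simp: multilin_defs intro!: yd_linear)
  also have "\<dots> = Sw d x (\<lambda>p w. sc (e w) (m p z))"
    by (simp add: yd_Sw_pull P2 antipode_SA_right act_scaled_unit yd_scale)
  also have "\<dots> = m x z" by (rule Sw_counit_right) (auto intro!: yd_linear)
  finally show ?thesis by simp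
qed

lemma hopf_bul: "is_hopf sc bul u d e SA"
  unfolding is_hopf_def is_bialgebra_def is_antipode_def is_algebra_def
proof (intro conjI allI)
  show "vector_space sc" by (rule vs)
  show "bilinH sc bul" using bilin_bul unfolding bilinH_eq_bilin .
  show "is_coalgebra sc d e" by (rule coalgebra)
  show "teq2 sc (d u) [(u, u)]" using P4 by blast
  show "e u = 1" by simp
  show "Vector_Spaces.linear sc sc SA" by (rule linear_SA)
  fix x y z
  show "bul (bul x y) z = bul x (bul y z)" by (rule bul_assoc)
  show "bul u x = x" by (simp add: bul_unit_left)
  show "bul x u = x" by (simp add: bul_unit_right)
  show "e (bul x y) = e x * e y" by (rule counit_bul)
  show "sum_list (map (\<lambda>(a, b). bul a (SA b)) (d x)) = sc (e x) u" using antipode_SA_right unfolding Sw_def .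
  show "sum_list (map (\<lambda>(a, b). bul (SA a) b) (d x)) = sc (e x) u" using antipode_SA_left unfolding Sw_def .
  show "teq2 sc (d (bul x y)) (concat (map (\<lambda>(a, b). map (\<lambda>(c, d). (bul a c, bul b d)) (d y)) (d x)))"
    by (rule teq2_concatI, rule comult_bul[OF vector_space_field])
qed

end

sublocale yd_post_hopf \<subseteq> H: hopf_alg sc d e bul u SA
  by unfold_locales (rule hopf_bul)

context yd_post_hopf begin

lemma bul_scaled_unit: "bul (sc c u) y = sc c y" by (simp add: yd_scale bul_unit_left)
lemma Sw_act_antipode_act: "Sw d w (\<lambda>a1 p. Sw d v (\<lambda>b1 r. bul (act a1 b1) (SA (act p r)))) = sc (e w * e v) u"
proof -
  have "Sw d w (\<lambda>a1 p. Sw d v (\<lambda>b1 r. bul (act a1 b1) (SA (act p r)))) = Sw d (act w v) (\<lambda>X Y. bul X (SA Y))"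
    by (rule comult_act[symmetric, OF vs]) (auto intro!: yd_linear simp: bilin_def)
  then show ?thesis by (simp add: antipode_SA_right counit_act)
qed

lemma ra_unfold: "ra x y = Sw d x (\<lambda>x1 x2. Sw d y (\<lambda>y1 y2. bul (bul (SA (act x1 y1)) x2) y2))"
  by (simp add: ra_def)

lemma act_bul: "act a (bul b c) = Sw d a (\<lambda>a1 a2. Sw d b (\<lambda>b1 b2. bul (act a1 b1) (act (ra a2 b2) c)))"
proof -
  have "Sw d a (\<lambda>a1 a2. Sw d b (\<lambda>b1 b2. bul (act a1 b1) (act (ra a2 b2) c)))
      = Sw d a (\<lambda>a1 a2. Sw d b (\<lambda>b1 b2. Sw d a2 (\<lambda>p q. Sw d b2 (\<lambda>r t. bul (act a1 b1) (act (bul (bul (SA (act p r)) q) t) c)))))"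
    by (simp add: ra_def yd_Sw_pull)
  also have "\<dots> = Sw d a (\<lambda>a1 a2. Sw d b (\<lambda>b1 b2. Sw d a2 (\<lambda>p q. Sw d b2 (\<lambda>r t. bul (act a1 b1) (act (SA (act p r)) (act q (act t c)))))))"
    by (simp add: P2 bul_assoc)
  also have "\<dots> = Sw d a (\<lambda>a' q. Sw d b (\<lambda>b' t. Sw d a' (\<lambda>a1 p. Sw d b' (\<lambda>b1 r. bul (act a1 b1) (act (SA (act p r)) (act q (act t c)))))))"
    by (rule Sw2_coassoc[OF vs]) (auto simp: multilin_defs intro!: yd_linear)
  also have "\<dots> = Sw d a (\<lambda>a' q. Sw d b (\<lambda>b' t. m (act a' b') (act q (act t c))))"
  proof (intro Sw_cong)
    fix a' q b' t
    show "Sw d a' (\<lambda>a1 p. Sw d b' (\<lambda>b1 r. bul (act a1 b1) (act (SA (act p r)) (act q (act t c))))) = m (act a' b') (act q (act t c))"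
      by (subst m_via_bul, rule comult_act[symmetric, OF vs]) (auto intro!: yd_linear simp: bilin_def)
  qed
  also have "\<dots> = Sw d b (\<lambda>b' t. Sw d a (\<lambda>a' q. m (act a' b') (act q (act t c))))"
    by (rule Sw_swap)
  also have "\<dots> = act a (bul b c)"
    by (simp add: act_m[symmetric] bul_def yd_Sw_pull)
  finally show ?thesis by simp
qed

lemma bul_via_actions: "bul a b = Sw d a (\<lambda>a1 a2. Sw d b (\<lambda>b1 b2. bul (act a1 b1) (ra a2 b2)))"
proof -
  have "Sw d a (\<lambda>a1 a2. Sw d b (\<lambda>b1 b2. bul (act a1 b1) (ra a2 b2)))
      = Sw d a (\<lambda>a1 a2. Sw d b (\<lambda>b1 b2. Sw d a2 (\<lambda>p q. Sw d b2 (\<lambda>r t. bul (act a1 b1) (bul (bul (SA (act p r)) q) t)))))"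
    by (simp add: ra_def yd_Sw_pull)
  also have "\<dots> = Sw d a (\<lambda>a1 a2. Sw d b (\<lambda>b1 b2. Sw d a2 (\<lambda>p q. Sw d b2 (\<lambda>r t. bul (bul (act a1 b1) (SA (act p r))) (bul q t)))))"
    by (simp add: bul_assoc)
  also have "\<dots> = Sw d a (\<lambda>a' q. Sw d b (\<lambda>b' t. Sw d a' (\<lambda>a1 p. Sw d b' (\<lambda>b1 r. bul (bul (act a1 b1) (SA (act p r))) (bul q t)))))"
    by (rule Sw2_coassoc[OF vs]) (auto simp: multilin_defs intro!: yd_linear)
  also have "\<dots> = Sw d a (\<lambda>a' q. Sw d b (\<lambda>b' t. sc (e a') (sc (e b') (bul q t))))"
    by (simp add: Sw_bilin_left[OF bilin_bul] Sw_act_antipode_act bul_scaled_unit vs_scale_scale[OF vs])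
  also have "\<dots> = Sw d a (\<lambda>a' q. sc (e a') (bul q b))"
    by (simp add: Sw_scale[OF vs] Sw_counit_left yd_linear)
  also have "\<dots> = bul a b" by (rule Sw_counit_left) (auto intro!: yd_linear)
  finally show ?thesis by simp
qed

lemma Sw_ra_bul_SA: "Sw d Z (\<lambda>X Y. bul (ra a X) (bul (SA Y) W)) = Sw d a (\<lambda>a1 a2. bul (bul (SA (act a1 Z)) a2) W)"
proof -
  have "Sw d Z (\<lambda>X Y. bul (ra a X) (bul (SA Y) W))
      = Sw d Z (\<lambda>X Y. Sw d a (\<lambda>a1 a2. Sw d X (\<lambda>X1 X2. bul (bul (bul (SA (act a1 X1)) a2) X2) (bul (SA Y) W))))"
    by (simp add: ra_def yd_Sw_pull)
  also have "\<dots> = Sw d Z (\<lambda>X Y. Sw d X (\<lambda>X1 X2. Sw d a (\<lambda>a1 a2. bul (bul (bul (SA (act a1 X1)) a2) X2) (bul (SA Y) W))))"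
    by (rule Sw_cong, rule Sw_swap)
  also have "\<dots> = Sw3 d Z (\<lambda>X1 X2 Y. Sw d a (\<lambda>a1 a2. bul (bul (bul (SA (act a1 X1)) a2) X2) (bul (SA Y) W)))"
    by (simp add: Sw3_unfold1)
  also have "\<dots> = Sw d Z (\<lambda>X1 w. Sw d w (\<lambda>X2 Y. Sw d a (\<lambda>a1 a2. bul (bul (bul (SA (act a1 X1)) a2) X2) (bul (SA Y) W))))"
    by (rule Sw3_unfold2[OF vs]) (auto simp: multilin_defs intro!: yd_linear)
  also have "\<dots> = Sw d Z (\<lambda>X1 w. sc (e w) (Sw d a (\<lambda>a1 a2. bul (bul (SA (act a1 X1)) a2) W)))"
  proof (rule Sw_cong)
    fix X1 w
    have "Sw d w (\<lambda>X2 Y. Sw d a (\<lambda>a1 a2. bul (bul (bul (SA (act a1 X1)) a2) X2) (bul (SA Y) W)))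
        = Sw d a (\<lambda>a1 a2. Sw d w (\<lambda>X2 Y. bul (bul (SA (act a1 X1)) a2) (bul (bul X2 (SA Y)) W)))"
      by (subst Sw_swap, simp add: bul_assoc)
    also have "\<dots> = Sw d a (\<lambda>a1 a2. bul (bul (SA (act a1 X1)) a2) (bul (sc (e w) u) W))"
      by (simp add: yd_Sw_pull antipode_SA_right)
    also have "\<dots> = sc (e w) (Sw d a (\<lambda>a1 a2. bul (bul (SA (act a1 X1)) a2) W))"
      by (simp add: bul_scaled_unit yd_scale Sw_scale[OF vs])
    finally show "Sw d w (\<lambda>X2 Y. Sw d a (\<lambda>a1 a2. bul (bul (bul (SA (act a1 X1)) a2) X2) (bul (SA Y) W))) = sc (e w) (Sw d a (\<lambda>a1 a2. bul (bul (SA (act a1 X1)) a2) W))" .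
  qed
  also have "\<dots> = Sw d a (\<lambda>a1 a2. bul (bul (SA (act a1 Z)) a2) W)"
    by (rule Sw_counit_right) (auto intro!: yd_linear)
  finally show ?thesis .
qed

lemma ra_bul: "ra (bul a b) c = Sw d b (\<lambda>b1 b2. Sw d c (\<lambda>c1 c2. bul (ra a (act b1 c1)) (ra b2 c2)))"
proof -
  have "Sw d b (\<lambda>b1 b2. Sw d c (\<lambda>c1 c2. bul (ra a (act b1 c1)) (ra b2 c2)))
     = Sw d b (\<lambda>b1 b2. Sw d c (\<lambda>c1 c2. Sw d b2 (\<lambda>p q. Sw d c2 (\<lambda>r t. bul (ra a (act b1 c1)) (bul (bul (SA (act p r)) q) t)))))"
    by (intro Sw_cong, subst (2) ra_unfold, simp add: yd_Sw_pull)
  also have "\<dots> = Sw d b (\<lambda>b' q. Sw d c (\<lambda>c' t. Sw d b' (\<lambda>b1 p. Sw d c' (\<lambda>c1 r. bul (ra a (act b1 c1)) (bul (bul (SA (act p r)) q) t)))))"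
    by (rule Sw2_coassoc[OF vs]) (auto simp: multilin_defs intro!: yd_linear)
  also have "\<dots> = Sw d b (\<lambda>b' q. Sw d c (\<lambda>c' t. Sw d a (\<lambda>a1 a2. bul (bul (SA (act a1 (act b' c'))) a2) (bul q t))))"
  proof (intro Sw_cong)
    fix b' q c' t
    have "Sw d b' (\<lambda>b1 p. Sw d c' (\<lambda>c1 r. bul (ra a (act b1 c1)) (bul (bul (SA (act p r)) q) t)))
        = Sw d b' (\<lambda>b1 p. Sw d c' (\<lambda>c1 r. bul (ra a (act b1 c1)) (bul (SA (act p r)) (bul q t))))"
      by (simp add: bul_assoc)
    also have "\<dots> = Sw d (act b' c') (\<lambda>X Y. bul (ra a X) (bul (SA Y) (bul q t)))"
      by (rule comult_act[symmetric, OF vs]) (auto intro!: yd_linear simp: bilin_def)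
    also have "\<dots> = Sw d a (\<lambda>a1 a2. bul (bul (SA (act a1 (act b' c'))) a2) (bul q t))"
      by (rule Sw_ra_bul_SA)
    finally show "Sw d b' (\<lambda>b1 p. Sw d c' (\<lambda>c1 r. bul (ra a (act b1 c1)) (bul (bul (SA (act p r)) q) t))) = Sw d a (\<lambda>a1 a2. bul (bul (SA (act a1 (act b' c'))) a2) (bul q t))" .
  qed
  also have "\<dots> = Sw d a (\<lambda>a1 a2. Sw d b (\<lambda>b' q. Sw d c (\<lambda>c' t. bul (bul (SA (act a1 (act b' c'))) a2) (bul q t))))"
    by (subst Sw_swap, rule Sw_cong, subst Sw_swap, rule refl)
  also have "\<dots> = Sw d a (\<lambda>a1 a2. Sw d b (\<lambda>b' q. Sw d c (\<lambda>c' t. bul (bul (SA (act (bul a1 b') c')) (bul a2 q)) t)))"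
    by (simp add: P2 bul_assoc)
  also have "\<dots> = ra (bul a b) c"
    by (subst ra_unfold, rule comult_bul[symmetric, OF vs]) (auto intro!: yd_linear simp: bilin_def)
  finally show ?thesis by simp
qed

lemma ra_unit_right: "ra x u = x"
proof -
  have h: "\<And>x1 x2. Sw d u (\<lambda>y1 y2. bul (bul (SA (act x1 y1)) x2) y2) = bul (bul (SA (act x1 u)) x2) u"
    by (rule Sw_unit[OF vs]) (auto intro!: yd_linear simp: bilin_def)
  have "ra x u = Sw d x (\<lambda>x1 x2. bul (bul (SA (act x1 u)) x2) u)"
    by (simp add: ra_unfold h)
  also have "\<dots> = Sw d x (\<lambda>x1 x2. sc (e x1) x2)" by (simp add: act_unit_right yd_scale SA_unit bul_unit_left bul_unit_right)
  also have "\<dots> = x" by (rule Sw_counit_left[OF linear_ident[OF vs]])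
  finally show ?thesis .
qed

lemma ra_unit_left: "ra u y = sc (e y) u"
proof -
  have "ra u y = Sw d u (\<lambda>x1 x2. Sw d y (\<lambda>y1 y2. bul (bul (SA (act x1 y1)) x2) y2))"
    by (simp add: ra_unfold)
  also have "\<dots> = Sw d y (\<lambda>y1 y2. bul (bul (SA (act u y1)) u) y2)"
    by (rule Sw_unit[OF vs]) (auto intro!: yd_linear simp: bilin_def)
  also have "\<dots> = sc (e y) u" by (simp add: bul_unit_right antipode_SA_left)
  finally show ?thesis .
qed

lemma counit_ra: "e (ra a b) = e a * e b"
proof -
  have "e (ra a b) = Sw d a (\<lambda>x1 x2. Sw d b (\<lambda>y1 y2. (e x1 * e x2) * (e y1 * e y2)))"
    by (simp add: ra_unfold linear_Sw[OF linear_e] counit_bul counit_SA counit_act mult_ac)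
  also have "\<dots> = e a * e b"
    by (simp add: Sw_mult_left Sw_counit_mult Sw_mult_right)
  finally show ?thesis .
qed

lemma Sw_act_ra_swap: assumes "vector_space s" "bilin sc s G"
  shows "Sw d x (\<lambda>x1 x2. Sw d y (\<lambda>y1 y2. G (act x1 y1) (ra x2 y2))) = Sw d x (\<lambda>x1 x2. Sw d y (\<lambda>y1 y2. G (act x2 y2) (ra x1 y1)))"
  using teq2_bilin_sums[OF P6b[rule_format] assms] unfolding Sw_def
  by (simp add: sum_list_concat map_concat o_def case_prod_beta')

lemma comult_ra_summand: assumes s: "vector_space s" and F: "bilin sc s F"
  shows "Sw d (bul (bul (SA X) x2) y2) F = Sw d X (\<lambda>X1 X2. Sw d x2 (\<lambda>r t. Sw d y2 (\<lambda>p q. F (bul (bul (SA X2) r) p) (bul (bul (SA X1) t) q))))"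
proof -
  note lin = yd_linear linear_bilin_left[OF F] linear_bilin_right[OF F] s
  have "Sw d (bul (bul (SA X) x2) y2) F = Sw d (bul (SA X) x2) (\<lambda>P Q. Sw d y2 (\<lambda>p q. F (bul P p) (bul Q q)))"
    by (rule comult_bul[OF s F])
  also have "\<dots> = Sw d (SA X) (\<lambda>P1 P2. Sw d x2 (\<lambda>r t. Sw d y2 (\<lambda>p q. F (bul (bul P1 r) p) (bul (bul P2 t) q))))"
    by (rule comult_bul[OF s]) (auto intro!: lin simp: bilin_def)
  also have "\<dots> = Sw d X (\<lambda>X1 X2. Sw d x2 (\<lambda>r t. Sw d y2 (\<lambda>p q. F (bul (bul (SA X2) r) p) (bul (bul (SA X1) t) q))))"
    by (rule comult_SA[OF s]) (auto intro!: lin simp: bilin_def)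
  finally show ?thesis .
qed

lemma comult_ra: assumes s: "vector_space s" and F: "bilin sc s F"
  shows "Sw d (ra a b) F = Sw d a (\<lambda>a1 a2. Sw d b (\<lambda>b1 b2. F (ra a1 b1) (ra a2 b2)))"
proof -
  note lin = yd_linear linear_bilin_left[OF F] linear_bilin_right[OF F] s
  have linF: "Vector_Spaces.linear sc s (\<lambda>z. Sw d z F)" by (rule linear_Sw_arg[OF s F])
  have "Sw d (ra a b) F = Sw d a (\<lambda>x1 x2. Sw d b (\<lambda>y1 y2. Sw d (bul (bul (SA (act x1 y1)) x2) y2) F))"
    by (simp add: ra_unfold linear_Sw[OF linF])
  also have "\<dots> = Sw d a (\<lambda>x1 x2. Sw d b (\<lambda>y1 y2. Sw d x1 (\<lambda>g h. Sw d y1 (\<lambda>g' h'. Sw d x2 (\<lambda>r t. Sw d y2 (\<lambda>p q.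
        F (bul (bul (SA (act h h')) r) p) (bul (bul (SA (act g g')) t) q)))))))"
    by (intro Sw_cong, subst comult_ra_summand[OF s F], rule comult_act[OF s]) (auto intro!: lin simp: bilin_def)
  also have "\<dots> = Sw d a (\<lambda>z t. Sw d b (\<lambda>z' q. Sw d z (\<lambda>g w. Sw d z' (\<lambda>g' v. Sw d w (\<lambda>h r. Sw d v (\<lambda>h' p.
        F (bul (bul (SA (act h h')) r) p) (bul (bul (SA (act g g')) t) q)))))))"
    by (rule Sw2_coassoc4[OF s]) (auto simp: multilin_defs intro!: lin)
  also have "\<dots> = Sw d a (\<lambda>z t. Sw d b (\<lambda>z' q. Sw d z (\<lambda>g w. Sw d z' (\<lambda>g' v. F (ra w v) (bul (bul (SA (act g g')) t) q)))))"
    by (simp add: ra_def Sw_bilin_left[OF F])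
  also have "\<dots> = Sw d a (\<lambda>z t. Sw d b (\<lambda>z' q. Sw d z (\<lambda>g w. Sw d z' (\<lambda>g' v. F (ra g g') (bul (bul (SA (act w v)) t) q)))))"
    by (intro Sw_cong Sw_act_ra_swap[OF s]) (auto intro!: lin simp: bilin_def)
  also have "\<dots> = Sw d a (\<lambda>a1 a2. Sw d b (\<lambda>b1 b2. Sw d a2 (\<lambda>w t. Sw d b2 (\<lambda>v q. F (ra a1 b1) (bul (bul (SA (act w v)) t) q)))))"
    by (rule Sw2_coassoc[symmetric, OF s]) (auto simp: multilin_defs intro!: lin)
  also have "\<dots> = Sw d a (\<lambda>a1 a2. Sw d b (\<lambda>b1 b2. F (ra a1 b1) (ra a2 b2)))"
    by (simp add: ra_def Sw_bilin_right[OF F])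
  finally show ?thesis .
qed

lemma ra_bul_assoc: "ra a (bul b c) = ra (ra a b) c"
proof -
  have "ra a (bul b c) = Sw d a (\<lambda>a1 a2. Sw d b (\<lambda>b1 b2. Sw d c (\<lambda>c1 c2. bul (bul (SA (act a1 (bul b1 c1))) a2) (bul b2 c2))))"
    by (subst ra_unfold, intro Sw_cong, rule comult_bul[OF vs]) (auto intro!: yd_linear simp: bilin_def)
  also have "\<dots> = Sw d a (\<lambda>a1 a2. Sw d b (\<lambda>b1 b2. Sw d c (\<lambda>c1 c2. Sw d a1 (\<lambda>p q. Sw d b1 (\<lambda>r t.
       bul (bul (bul (SA (act (ra q t) c1)) (SA (act p r))) a2) (bul b2 c2))))))"
    by (simp add: act_bul yd_Sw_pull H.antipode_anti_mult[symmetric])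
  also have "\<dots> = Sw d a (\<lambda>a1 a2. Sw d b (\<lambda>b1 b2. Sw d c (\<lambda>c1 c2. Sw d a1 (\<lambda>p q. Sw d b1 (\<lambda>r t.
       bul (bul (bul (SA (act (ra p r) c1)) (SA (act q t))) a2) (bul b2 c2))))))"
  proof (rule Sw_cong, rule Sw_cong, rule Sw_cong)
    fix a1 a2 b1 b2 c1 c2
    show "Sw d a1 (\<lambda>p q. Sw d b1 (\<lambda>r t. bul (bul (bul (SA (act (ra q t) c1)) (SA (act p r))) a2) (bul b2 c2)))
        = Sw d a1 (\<lambda>p q. Sw d b1 (\<lambda>r t. bul (bul (bul (SA (act (ra p r) c1)) (SA (act q t))) a2) (bul b2 c2)))"
      by (rule Sw_act_ra_swap[OF vs, of "\<lambda>X Y. bul (bul (bul (SA (act Y c1)) (SA X)) a2) (bul b2 c2)", simplified])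
        (auto intro!: yd_linear simp: bilin_def)
  qed
  also have "\<dots> = Sw d a (\<lambda>a1 a2. Sw d c (\<lambda>c1 c2. Sw d b (\<lambda>b1 b2. Sw d a1 (\<lambda>p q. Sw d b1 (\<lambda>r t.
       bul (bul (bul (SA (act (ra p r) c1)) (SA (act q t))) a2) (bul b2 c2))))))"
    by (rule Sw_cong, rule Sw_swap)
  also have "\<dots> = Sw d c (\<lambda>c1 c2. Sw d a (\<lambda>a1 a2. Sw d b (\<lambda>b1 b2. Sw d a1 (\<lambda>p q. Sw d b1 (\<lambda>r t.
       bul (bul (bul (SA (act (ra p r) c1)) (SA (act q t))) a2) (bul b2 c2))))))"
    by (rule Sw_swap)
  also have "\<dots> = Sw d c (\<lambda>c1 c2. Sw d a (\<lambda>p w. Sw d b (\<lambda>r v. Sw d w (\<lambda>q a2. Sw d v (\<lambda>t b2.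
       bul (bul (bul (SA (act (ra p r) c1)) (SA (act q t))) a2) (bul b2 c2))))))"
    by (rule Sw_cong, rule Sw2_coassoc_left[OF vs]) (auto simp: multilin_defs intro!: yd_linear)
  also have "\<dots> = Sw d c (\<lambda>c1 c2. Sw d a (\<lambda>p w. Sw d b (\<lambda>r v. Sw d w (\<lambda>q a2. Sw d v (\<lambda>t b2.
       bul (bul (SA (act (ra p r) c1)) (bul (bul (SA (act q t)) a2) b2)) c2)))))"
    by (simp add: bul_assoc)
  also have "\<dots> = Sw d c (\<lambda>c1 c2. Sw d a (\<lambda>p w. Sw d b (\<lambda>r v. bul (bul (SA (act (ra p r) c1)) (ra w v)) c2)))"
    by (simp add: ra_def yd_Sw_pull)
  also have "\<dots> = Sw d a (\<lambda>p w. Sw d c (\<lambda>c1 c2. Sw d b (\<lambda>r v. bul (bul (SA (act (ra p r) c1)) (ra w v)) c2)))"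
    by (rule Sw_swap)
  also have "\<dots> = Sw d a (\<lambda>p w. Sw d b (\<lambda>r v. Sw d c (\<lambda>c1 c2. bul (bul (SA (act (ra p r) c1)) (ra w v)) c2)))"
    by (rule Sw_cong, rule Sw_swap)
  also have "\<dots> = ra (ra a b) c"
    by (subst (2) ra_unfold, rule comult_ra[symmetric, OF vs]) (auto intro!: yd_linear simp: bilin_def)
  finally show ?thesis .
qed

lemma is_MP_toMP: "is_MP sc \<lparr>bmul = bul, bone = u, bdelta = d, beps = e, bT = SA, lact = act, ract = ra\<rparr>"
  unfolding is_MP_def Let_def mpair.simps
proof (intro conjI allI)
  show "is_hopf sc bul u d e SA" by (rule hopf_bul)
  show "bilinH sc act" by (rule bilinH_act)
  show "bilinH sc ra" using bilin_ra unfolding bilinH_eq_bilin .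
  fix a b c
  show "act u b = b" by simp
  show "act (bul a b) c = act a (act b c)" by (simp add: P2)
  show "teq2 sc (d (act a b)) (concat (map (\<lambda>(a1, a2). map (\<lambda>(b1, b2). (act a1 b1, act a2 b2)) (d b)) (d a)))"
    using comult_act_teq by blast
  show "e (act a b) = e a * e b" by (rule counit_act)
  show "ra a u = a" by (rule ra_unit_right)
  show "ra a (bul b c) = ra (ra a b) c" by (rule ra_bul_assoc)
  show "teq2 sc (d (ra a b)) (concat (map (\<lambda>(a1, a2). map (\<lambda>(b1, b2). (ra a1 b1, ra a2 b2)) (d b)) (d a)))"
    by (rule teq2_concatI, rule comult_ra[OF vector_space_field])
  show "e (ra a b) = e a * e b" by (rule counit_ra)
  show "act a u = sc (e a) u" by (rule act_unit_right)
  show "ra u a = sc (e a) u" by (rule ra_unit_left)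
  show "act a (bul b c) = sum_list (concat (map (\<lambda>(a1, a2). map (\<lambda>(b1, b2). bul (act a1 b1) (act (ra a2 b2) c)) (d b)) (d a)))"
    by (simp add: Sw_concat[where d=d] act_bul)
  show "ra (bul a b) c = sum_list (concat (map (\<lambda>(b1, b2). map (\<lambda>(c1, c2). bul (ra a (act b1 c1)) (ra b2 c2)) (d c)) (d b)))"
    by (simp add: Sw_concat[where d=d] ra_bul)
  show "bul a b = sum_list (concat (map (\<lambda>(a1, a2). map (\<lambda>(b1, b2). bul (act a1 b1) (ra a2 b2)) (d b)) (d a)))"
    by (simp add: Sw_concat[where d=d] bul_via_actions[symmetric])
qed

end

lemma yd_post_hopf_of_YDPH:
  assumes "is_YDPH sc A"
  shows "yd_post_hopf sc (ydelta A) (yeps A) (ymul A) (yone A) (yS A) (yact A) (betaOf sc A) (bulletOf A) (SOf sc A) (ractOf sc A)"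
proof -
  have ex: "\<exists>b. is_conv_inv sc (ydelta A) (yeps A) (yact A) b" using assms unfolding is_YDPH_def Let_def by blast
  have ci: "is_conv_inv sc (ydelta A) (yeps A) (yact A) (betaOf sc A)"
    unfolding betaOf_def by (rule someI_ex[OF ex])
  have be: "bulletOf A = (\<lambda>x y. Sw (ydelta A) x (\<lambda>a b. ymul A a (yact A b y)))"
    by (simp add: bulletOf_def Sw_def fun_eq_iff)
  have se: "SOf sc A = (\<lambda>x. Sw (ydelta A) x (\<lambda>a b. betaOf sc A a (yS A b)))"
    by (simp add: SOf_def Sw_def fun_eq_iff)
  have re: "ractOf sc A = (\<lambda>x y. Sw (ydelta A) x (\<lambda>x1 x2. Sw (ydelta A) y (\<lambda>y1 y2. bulletOf A (bulletOf A (SOf sc A (yact A x1 y1)) x2) y2)))"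
    unfolding ractOf_def fun_eq_iff Sw_def by (simp add: sum_list_concat o_def case_prod_beta')
  have Y: "is_algebra sc (ymul A) (yone A) \<and> is_coalgebra sc (ydelta A) (yeps A)
       \<and> is_antipode sc (ymul A) (yone A) (ydelta A) (yeps A) (yS A) \<and> bilinH sc (yact A)" 
    using assms unfolding is_YDPH_def Let_def by blast
  show ?thesis
    apply (unfold_locales)
    using assms ci be se re Y unfolding is_YDPH_def Let_def by blast+
qed

theorem toMP_correct:
  assumes "is_YDPH sc A"
  shows "is_MP sc (toMP sc A) \<and> toYD (toMP sc A) = A"
proof -
  interpret Y: yd_post_hopf sc "ydelta A" "yeps A" "ymul A" "yone A" "yS A" "yact A" "betaOf sc A" "bulletOf A" "SOf sc A" "ractOf sc A"
    by (rule yd_post_hopf_of_YDPH[OF assms])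
  have mul: "(\<lambda>a b. sum_list (map (\<lambda>(a1,a2). bulletOf A a1 (yact A (SOf sc A a2) b)) (ydelta A a))) = ymul A"
    using Y.m_via_bul unfolding Sw_def by (intro ext) simp
  have antipode: "(\<lambda>a. sum_list (map (\<lambda>(a1,a2). yact A a1 (SOf sc A a2)) (ydelta A a))) = yS A"
    using Y.Sw_act_SA unfolding Sw_def by (intro ext) simp
  have "toYD (toMP sc A) = A"
    unfolding toYD_def toMP_def using mul antipode by (cases A) simp
  then show ?thesis using Y.is_MP_toMP unfolding toMP_def by simp
qed

section \<open>From matched pairs to Yetter--Drinfeld post-Hopf algebras\<close>

locale matched_pair = hopf_alg sc d e mul one T
  for sc :: "'k::field \<Rightarrow> 'h::ab_group_add \<Rightarrow> 'h" and d e mul one T +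
  fixes la ra
  assumes bilin_la: "bilin sc sc la"
    and la_one[simp]: "la one b = b"
    and la_mul: "la (mul a b) c = la a (la b c)"
    and comult_la_teq: "teq2 sc (d (la a b))
          (concat (map (\<lambda>(a1,a2). map (\<lambda>(b1,b2). (la a1 b1, la a2 b2)) (d b)) (d a)))"
    and counit_la: "e (la a b) = e a * e b"
    and la_on_one: "la a one = sc (e a) one"
    and bilin_ra: "bilin sc sc ra"
    and comult_ra_teq: "teq2 sc (d (ra a b))
          (concat (map (\<lambda>(a1,a2). map (\<lambda>(b1,b2). (ra a1 b1, ra a2 b2)) (d b)) (d a)))"
    and counit_ra: "e (ra a b) = e a * e b"
    and la_mul_matched: "la a (mul b c) = Sw d a (\<lambda>a1 a2. Sw d b (\<lambda>b1 b2. mul (la a1 b1) (la (ra a2 b2) c)))"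
    and mul_via_actions: "mul a b = Sw d a (\<lambda>a1 a2. Sw d b (\<lambda>b1 b2. mul (la a1 b1) (ra a2 b2)))"
begin

lemma comult_la: "vector_space s \<Longrightarrow> bilin sc s F \<Longrightarrow> Sw d (la x y) F = Sw d x (\<lambda>x1 x2. Sw d y (\<lambda>y1 y2. F (la x1 y1) (la x2 y2)))"
  by (rule Sw_teq2_concat[where d=d, OF comult_la_teq])
lemma comult_ra: "vector_space s \<Longrightarrow> bilin sc s F \<Longrightarrow> Sw d (ra x y) F = Sw d x (\<lambda>x1 x2. Sw d y (\<lambda>y1 y2. F (ra x1 y1) (ra x2 y2)))"
  by (rule Sw_teq2_concat[where d=d, OF comult_ra_teq])

lemmas mp_linear_core = hopf_linear linear_bilin_left[OF bilin_la] linear_bilin_right[OF bilin_la] linear_bilin_left[OF bilin_ra] linear_bilin_right[OF bilin_ra]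

definition dot where "dot a b = Sw d a (\<lambda>a1 a2. mul a1 (la (T a2) b))"
definition Sdot where "Sdot a = Sw d a (\<lambda>a1 a2. la a1 (T a2))"
definition beta_T where "beta_T x y = la (T x) y"

lemma bilin_dot: "bilin sc sc dot"
  unfolding bilin_def dot_def by (auto intro!: mp_linear_core linear_Sw_arg simp: bilin_def)
lemma linear_Sdot: "Vector_Spaces.linear sc sc Sdot"
  unfolding Sdot_def by (rule linear_Sw_arg[OF vs]) (auto intro!: mp_linear_core simp: bilin_def)
lemma bilin_beta_T: "bilin sc sc beta_T"
  unfolding bilin_def beta_T_def by (auto intro!: mp_linear_core)

lemmas mp_linear = mp_linear_core linear_bilin_left[OF bilin_dot] linear_bilin_right[OF bilin_dot] linear_compose_fun[OF _ linear_Sdot]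
lemmas mp_scale = hopf_scale bilin_scale_left[OF bilin_la] bilin_scale_right[OF bilin_la] bilin_scale_left[OF bilin_ra] bilin_scale_right[OF bilin_ra]
  bilin_scale_left[OF bilin_dot] bilin_scale_right[OF bilin_dot] linear_scaleD[OF linear_Sdot]
lemmas mp_Sw_pull = hopf_Sw_pull Sw_bilin_left[OF bilin_la] Sw_bilin_right[OF bilin_la] Sw_bilin_left[OF bilin_ra] Sw_bilin_right[OF bilin_ra]

lemma la_scaled_one: "la (sc c one) y = sc c y" by (simp add: mp_scale)
lemma mul_scaled_one: "mul (sc c one) y = sc c y" by (simp add: mp_scale)
lemma Sw_antipode_la_left: "Sw d w (\<lambda>a1 p. Sw d v (\<lambda>b1 r. mul (T (la a1 b1)) (la p r))) = sc (e w * e v) one"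
proof -
  have "Sw d w (\<lambda>a1 p. Sw d v (\<lambda>b1 r. mul (T (la a1 b1)) (la p r))) = Sw d (la w v) (\<lambda>X Y. mul (T X) Y)"
    by (rule comult_la[symmetric, OF vs]) (auto intro!: mp_linear simp: bilin_def)
  then show ?thesis by (simp add: antipode_left counit_la)
qed

lemma ra_via_la: "ra x b = Sw d x (\<lambda>x1 x2. Sw d b (\<lambda>b1 b2. mul (mul (T (la x1 b1)) x2) b2))"
proof -
  have "Sw d x (\<lambda>x1 x2. Sw d b (\<lambda>b1 b2. mul (mul (T (la x1 b1)) x2) b2))
      = Sw d x (\<lambda>x1 x2. Sw d b (\<lambda>b1 b2. Sw d x2 (\<lambda>p q. Sw d b2 (\<lambda>r t. mul (T (la x1 b1)) (mul (la p r) (ra q t))))))"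
    by (simp add: mul_assoc mp_Sw_pull mul_via_actions[symmetric])
  also have "\<dots> = Sw d x (\<lambda>x' q. Sw d b (\<lambda>b' t. Sw d x' (\<lambda>x1 p. Sw d b' (\<lambda>b1 r. mul (T (la x1 b1)) (mul (la p r) (ra q t))))))"
    by (rule Sw2_coassoc[OF vs]) (auto simp: multilin_defs intro!: mp_linear)
  also have "\<dots> = Sw d x (\<lambda>x' q. Sw d b (\<lambda>b' t. sc (e x') (sc (e b') (ra q t))))"
    by (simp add: mul_assoc[symmetric] Sw_bilin_left[OF bilin_mul] Sw_antipode_la_left mul_scaled_one vs_scale_scale[OF vs])
  also have "\<dots> = Sw d x (\<lambda>x' q. sc (e x') (ra q b))"
    by (simp add: Sw_scale[OF vs] Sw_counit_left mp_linear)
  also have "\<dots> = ra x b" by (rule Sw_counit_left) (auto intro!: mp_linear)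
  finally show ?thesis by simp
qed

lemma dot_one1: "dot one b = b"
  unfolding dot_def by (subst Sw_one[OF vs]) (auto intro!: mp_linear simp: bilin_def antipode_one)
lemma dot_one2: "dot a one = a"
  unfolding dot_def by (simp add: la_on_one counit_T mp_scale Sw_counit_right[OF linear_ident[OF vs]])

lemma mul_via_dot: "Sw d x (\<lambda>a b. dot a (la b y)) = mul x y"
proof -
  have "Sw d x (\<lambda>a b. dot a (la b y)) = Sw3 d x (\<lambda>a1 a2 b. mul a1 (la (mul (T a2) b) y))"
    by (simp add: Sw3_unfold1 dot_def mp_Sw_pull la_mul)
  also have "\<dots> = Sw d x (\<lambda>a1 w. Sw d w (\<lambda>a2 b. mul a1 (la (mul (T a2) b) y)))"
    by (rule Sw3_unfold2[OF vs]) (auto simp: multilin_defs intro!: mp_linear)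
  also have "\<dots> = Sw d x (\<lambda>a1 w. sc (e w) (mul a1 y))"
    by (simp add: mp_Sw_pull antipode_left la_scaled_one mp_scale)
  also have "\<dots> = mul x y" by (rule Sw_counit_right) (auto intro!: mp_linear)
  finally show ?thesis .
qed

lemma conv_inv_beta_T: "is_conv_inv sc d e la beta_T"
  unfolding is_conv_inv_def
proof (intro conjI allI)
  show "bilinH sc beta_T" using bilin_beta_T unfolding bilinH_eq_bilin .
  fix x y
  show "sum_list (map (\<lambda>(a, b). la a (beta_T b y)) (d x)) = sc (e x) y"
    using antipode_right[of x] unfolding beta_T_def Sw_def[symmetric]
    by (simp add: la_mul[symmetric] Sw_bilin_left[OF bilin_la] la_scaled_one)
  show "sum_list (map (\<lambda>(a, b). beta_T a (la b y)) (d x)) = sc (e x) y"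
    using antipode_left[of x] unfolding beta_T_def Sw_def[symmetric]
    by (simp add: la_mul[symmetric] Sw_bilin_left[OF bilin_la] la_scaled_one)
qed

lemma Sw_beta_T_Sdot: "Sw d x (\<lambda>a b. beta_T a (Sdot b)) = T x"
proof -
  have "Sw d x (\<lambda>a b. beta_T a (Sdot b)) = Sw d x (\<lambda>a b. Sw d b (\<lambda>p q. la (mul (T a) p) (T q)))"
    by (simp add: beta_T_def Sdot_def mp_Sw_pull la_mul)
  also have "\<dots> = Sw3 d x (\<lambda>a p q. la (mul (T a) p) (T q))"
    by (rule Sw3_unfold2[symmetric, OF vs]) (auto simp: multilin_defs intro!: mp_linear)
  also have "\<dots> = Sw d x (\<lambda>w q. sc (e w) (T q))"
    by (simp add: Sw3_unfold1 mp_Sw_pull antipode_left la_scaled_one)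
  also have "\<dots> = T x" by (rule Sw_counit_left[OF linear_T])
  finally show ?thesis .
qed

lemma Sw_la_ra_exchange: assumes K: "bilin sc sc K"
  shows "Sw d x (\<lambda>x1 x2. Sw3 d b (\<lambda>p q t. K (la x1 p) (mul (ra x2 q) (T t))))
       = Sw3 d x (\<lambda>p q x2. Sw d b (\<lambda>b1 b2. K (la p b1) (mul (T (la q b2)) x2)))"
proof -
  note lin = mp_linear linear_bilin_left[OF K] linear_bilin_right[OF K]
  have "Sw3 d x (\<lambda>p q x2. Sw d b (\<lambda>b1 b2. K (la p b1) (mul (T (la q b2)) x2)))
      = Sw3 d x (\<lambda>p q x2. Sw d b (\<lambda>b1 w. Sw d w (\<lambda>b2 v. Sw d v (\<lambda>b3 b4. K (la p b1) (mul (mul (mul (T (la q b2)) x2) b3) (T b4))))))"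
  proof (intro arg_cong[where f="Sw3 d x"] ext Sw_cong)
    fix p q x2 b1 w
    have "Sw d w (\<lambda>b2 v. Sw d v (\<lambda>b3 b4. K (la p b1) (mul (mul (mul (T (la q b2)) x2) b3) (T b4))))
        = K (la p b1) (Sw d w (\<lambda>b2 v. sc (e v) (mul (T (la q b2)) x2)))"
      by (simp add: mul_assoc mp_Sw_pull Sw_bilin_right[OF K] antipode_right mp_scale)
    also have "\<dots> = K (la p b1) (mul (T (la q w)) x2)"
      by (subst Sw_counit_right) (auto intro!: lin)
    finally show "K (la p b1) (mul (T (la q w)) x2) = Sw d w (\<lambda>b2 v. Sw d v (\<lambda>b3 b4. K (la p b1) (mul (mul (mul (T (la q b2)) x2) b3) (T b4))))" by simp
  qed
  also have "\<dots> = Sw3 d x (\<lambda>p q x2. Sw4 d b (\<lambda>b1 b2 b3 b4. K (la p b1) (mul (mul (mul (T (la q b2)) x2) b3) (T b4))))"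
    apply (intro arg_cong[where f="Sw3 d x"] ext)
    apply (subst Sw4_unfold_tail[OF vs]) apply (auto simp: multilin_defs intro!: lin)[1]
    apply (intro Sw_cong) apply (subst Sw3_unfold2[OF vs]) apply (auto simp: multilin_defs intro!: lin)[1]
    by (rule refl)
  also have "\<dots> = Sw3 d x (\<lambda>p q x2. Sw3 d b (\<lambda>b1 b' b4. Sw d b' (\<lambda>b2 b3. K (la p b1) (mul (mul (mul (T (la q b2)) x2) b3) (T b4)))))"
    by (intro arg_cong[where f="Sw3 d x"] ext Sw4_unfold2[OF vs]) (auto simp: multilin_defs intro!: lin)
  also have "\<dots> = Sw d x (\<lambda>p x'. Sw d x' (\<lambda>q x2. Sw3 d b (\<lambda>b1 b' b4. Sw d b' (\<lambda>b2 b3. K (la p b1) (mul (mul (mul (T (la q b2)) x2) b3) (T b4))))))"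
    by (rule Sw3_unfold2[OF vs]) (auto simp: multilin_defs Sw_defs intro!: lin)
  also have "\<dots> = Sw d x (\<lambda>p x'. Sw3 d b (\<lambda>b1 b' b4. Sw d x' (\<lambda>q x2. Sw d b' (\<lambda>b2 b3. K (la p b1) (mul (mul (mul (T (la q b2)) x2) b3) (T b4))))))"
    by (rule Sw_cong, rule Sw3_swap[symmetric])
  also have "\<dots> = Sw d x (\<lambda>p x'. Sw3 d b (\<lambda>b1 b' b4. K (la p b1) (mul (ra x' b') (T b4))))"
    by (simp add: ra_via_la Sw_bilin_right[OF K] Sw_bilin_left[OF bilin_mul])
  finally show ?thesis by simp
qed

lemma la_dot: "la x (dot b c) = Sw d x (\<lambda>x1 x2. dot (la x1 b) (la x2 c))"
proof -
  have K: "bilin sc sc (\<lambda>P Z. mul P (la Z c))" by (auto intro!: mp_linear simp: bilin_def)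
  have "la x (dot b c) = Sw d b (\<lambda>b1 b2. Sw d x (\<lambda>x1 x2. Sw d b1 (\<lambda>p q. mul (la x1 p) (la (mul (ra x2 q) (T b2)) c))))"
    by (simp add: dot_def Sw_bilin_right[OF bilin_la, symmetric] la_mul_matched la_mul)
  also have "\<dots> = Sw d x (\<lambda>x1 x2. Sw3 d b (\<lambda>p q t. mul (la x1 p) (la (mul (ra x2 q) (T t)) c)))"
    by (simp add: Sw3_unfold1 Sw_swap[of d b])
  also have "\<dots> = Sw3 d x (\<lambda>p q x2. Sw d b (\<lambda>b1 b2. mul (la p b1) (la (mul (T (la q b2)) x2) c)))"
    by (rule Sw_la_ra_exchange[OF K])
  also have "\<dots> = Sw d x (\<lambda>x1 x2. dot (la x1 b) (la x2 c))"
    by (simp add: Sw3_unfold1 dot_def la_mul comult_la[OF vs] bilin_def mp_linear)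
  finally show ?thesis .
qed

lemma comult_dot: assumes s: "vector_space s" and F: "bilin sc s F"
  shows "Sw d (dot a b) F = Sw4 d a (\<lambda>a1 a2 a3 a4. Sw d b (\<lambda>b1 b2. F (mul a1 (la (T a4) b1)) (mul a2 (la (T a3) b2))))"
proof -
  note lin = mp_linear linear_bilin_left[OF F] linear_bilin_right[OF F] s
  have "Sw d (dot a b) F = Sw d a (\<lambda>a1 a2. Sw d (mul a1 (la (T a2) b)) F)"
    by (simp add: dot_def linear_Sw[OF linear_Sw_arg[OF s F]])
  also have "\<dots> = Sw d a (\<lambda>a1 a2. Sw d a1 (\<lambda>p q. Sw d a2 (\<lambda>r t. Sw d b (\<lambda>b1 b2. F (mul p (la (T t) b1)) (mul q (la (T r) b2))))))"
  proof (intro Sw_cong)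
    fix a1 a2
    have "Sw d (mul a1 (la (T a2) b)) F = Sw d a1 (\<lambda>p q. Sw d (la (T a2) b) (\<lambda>P Q. F (mul p P) (mul q Q)))"
      by (rule comult_mul[OF s F])
    also have "\<dots> = Sw d a1 (\<lambda>p q. Sw d (T a2) (\<lambda>X Y. Sw d b (\<lambda>b1 b2. F (mul p (la X b1)) (mul q (la Y b2)))))"
      by (intro Sw_cong comult_la[OF s]) (auto intro!: lin simp: bilin_def)
    also have "\<dots> = Sw d a1 (\<lambda>p q. Sw d a2 (\<lambda>r t. Sw d b (\<lambda>b1 b2. F (mul p (la (T t) b1)) (mul q (la (T r) b2)))))"
      by (intro Sw_cong antipode_anti_comult[OF s]) (auto intro!: lin simp: bilin_def)
    finally show "Sw d (mul a1 (la (T a2) b)) F = Sw d a1 (\<lambda>p q. Sw d a2 (\<lambda>r t. Sw d b (\<lambda>b1 b2. F (mul p (la (T t) b1)) (mul q (la (T r) b2)))))" .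
  qed
  also have "\<dots> = Sw3 d a (\<lambda>p q a2. Sw d a2 (\<lambda>r t. Sw d b (\<lambda>b1 b2. F (mul p (la (T t) b1)) (mul q (la (T r) b2)))))"
    by (simp add: Sw3_unfold1)
  also have "\<dots> = Sw4 d a (\<lambda>p q r t. Sw d b (\<lambda>b1 b2. F (mul p (la (T t) b1)) (mul q (la (T r) b2))))"
    by (rule Sw4_unfold3[symmetric, OF s]) (auto simp: multilin_defs intro!: lin)
  finally show ?thesis .
qed

lemma dot_assoc: "dot (dot a b) c = dot a (dot b c)"
proof -
  have "dot (dot a b) c = Sw4 d a (\<lambda>a1 a2 a3 a4. Sw d b (\<lambda>b1 b2. mul (mul a1 (la (T a4) b1)) (la (T (mul a2 (la (T a3) b2))) c)))"
    by (subst (1) dot_def, rule comult_dot[OF vs]) (auto intro!: mp_linear simp: bilin_def)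
  also have "\<dots> = Sw4 d a (\<lambda>a1 a2 a3 a4. Sw d b (\<lambda>b1 b2. mul a1 (mul (la (T a4) b1) (la (T (la (T a3) b2)) (la (T a2) c)))))"
    by (simp add: mul_assoc antipode_anti_mult la_mul)
  also have "\<dots> = Sw3 d a (\<lambda>a1 a2 w. Sw d w (\<lambda>a3 a4. Sw d b (\<lambda>b1 b2. mul a1 (mul (la (T a4) b1) (la (T (la (T a3) b2)) (la (T a2) c))))))"
    by (rule Sw4_unfold3[OF vs]) (auto simp: multilin_defs intro!: mp_linear)
  also have "\<dots> = Sw3 d a (\<lambda>a1 a2 w. mul a1 (dot (la (T w) b) (la (T a2) c)))"
  proof (intro arg_cong[where f="Sw3 d a"] ext)
    fix a1 a2 w
    have "dot (la (T w) b) (la (T a2) c) = Sw d (T w) (\<lambda>X Y. Sw d b (\<lambda>b1 b2. mul (la X b1) (la (T (la Y b2)) (la (T a2) c))))"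
      by (subst dot_def, rule comult_la[OF vs]) (auto intro!: mp_linear simp: bilin_def)
    also have "\<dots> = Sw d w (\<lambda>r t. Sw d b (\<lambda>b1 b2. mul (la (T t) b1) (la (T (la (T r) b2)) (la (T a2) c))))"
      by (rule antipode_anti_comult[OF vs]) (auto intro!: mp_linear simp: bilin_def)
    finally show "Sw d w (\<lambda>a3 a4. Sw d b (\<lambda>b1 b2. mul a1 (mul (la (T a4) b1) (la (T (la (T a3) b2)) (la (T a2) c))))) = mul a1 (dot (la (T w) b) (la (T a2) c))"
      by (simp add: mp_Sw_pull)
  qed
  also have "\<dots> = Sw d a (\<lambda>a1 a2. Sw d a2 (\<lambda>r t. mul a1 (dot (la (T t) b) (la (T r) c))))"
    by (rule Sw3_unfold2[OF vs]) (auto simp: multilin_defs intro!: mp_linear)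
  also have "\<dots> = Sw d a (\<lambda>a1 a2. mul a1 (Sw d (T a2) (\<lambda>X Y. dot (la X b) (la Y c))))"
    by (intro Sw_cong, subst antipode_anti_comult[OF vs]) (auto intro!: mp_linear simp: bilin_def mp_Sw_pull)
  also have "\<dots> = dot a (dot b c)"
    by (simp add: la_dot[symmetric] dot_def[of a])
  finally show ?thesis .
qed

lemma counit_dot: "e (dot a b) = e a * e b"
proof -
  have "e (dot a b) = Sw d a (\<lambda>a1 a2. e a1 * e a2) * e b"
    by (simp add: dot_def linear_Sw[OF linear_e] counit_mul counit_la counit_T Sw_mult_right[symmetric] mult.assoc)
  also have "Sw d a (\<lambda>a1 a2. e a1 * e a2) = e a" using Sw_counit_left[OF linear_e, of a] by simp
  finally show ?thesis .
qed

lemma antipode_Sdot_right: "Sw d x (\<lambda>a b. dot a (Sdot b)) = sc (e x) one"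
proof -
  have "Sw d x (\<lambda>a b. dot a (Sdot b)) = Sw3 d x (\<lambda>a1 a2 b. Sw d b (\<lambda>p q. mul a1 (la (mul (T a2) p) (T q))))"
    by (simp add: Sw3_unfold1 dot_def Sdot_def mp_Sw_pull la_mul)
  also have "\<dots> = Sw4 d x (\<lambda>a1 a2 p q. mul a1 (la (mul (T a2) p) (T q)))"
    by (rule Sw4_unfold3[symmetric, OF vs]) (auto simp: multilin_defs intro!: mp_linear)
  also have "\<dots> = Sw3 d x (\<lambda>a1 w q. Sw d w (\<lambda>a2 p. mul a1 (la (mul (T a2) p) (T q))))"
    by (rule Sw4_unfold2[OF vs]) (auto simp: multilin_defs intro!: mp_linear)
  also have "\<dots> = Sw3 d x (\<lambda>a1 w q. sc (e w) (mul a1 (T q)))"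
    by (simp add: mp_Sw_pull antipode_left la_scaled_one mp_scale)
  also have "\<dots> = Sw d x (\<lambda>a1 v. Sw d v (\<lambda>w q. sc (e w) (mul a1 (T q))))"
    by (rule Sw3_unfold2[OF vs]) (auto simp: multilin_defs intro!: mp_linear)
  also have "\<dots> = Sw d x (\<lambda>a1 v. mul a1 (T v))"
    by (intro Sw_cong Sw_counit_left) (auto intro!: mp_linear)
  finally show ?thesis by (simp add: antipode_right)
qed

lemma antipode_Sdot_left: "Sw d x (\<lambda>a b. dot (Sdot a) b) = sc (e x) one"
proof -
  have "Sw d x (\<lambda>a b. dot (Sdot a) b) = Sw3 d x (\<lambda>x1 x2 x3. dot (la x1 (T x2)) x3)"
    by (simp add: Sw3_unfold1 Sdot_def Sw_bilin_left[OF bilin_dot])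
  also have "\<dots> = Sw4 d x (\<lambda>x1 w x4 x5. sc (e w) (dot (la x1 (T x4)) x5))"
    by (simp only: Sw4_unfold1, intro arg_cong[where f="Sw3 d x"] ext Sw_counit_right[symmetric]) (auto intro!: mp_linear)
  also have "\<dots> = Sw5 d x (\<lambda>x1 x2 x3 x4 x5. dot (la x1 (T x4)) (la x2 (la (T x3) x5)))"
    by (subst Sw5_unfold2[OF vs]) (auto simp: multilin_defs intro!: mp_linear simp: la_mul[symmetric] Sw_bilin_left[OF bilin_la] Sw_bilin_right[OF bilin_dot] antipode_right la_scaled_one mp_scale)
  also have "\<dots> = Sw4 d x (\<lambda>y1 x3 x4 x5. la y1 (dot (T x4) (la (T x3) x5)))"
    by (simp add: Sw5_unfold1 la_dot)
  also have "\<dots> = Sw5 d x (\<lambda>x1 x3 r t x5. la x1 (mul (T t) (la (T (mul x3 (T r))) x5)))"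
  proof (subst Sw5_unfold3[OF vs])
    show "multilin5 sc sc (\<lambda>x1 x3 r t x5. la x1 (mul (T t) (la (T (mul x3 (T r))) x5)))"
      by (auto simp: multilin_defs intro!: mp_linear)
    show "Sw4 d x (\<lambda>y1 x3 x4 x5. la y1 (dot (T x4) (la (T x3) x5))) = Sw4 d x (\<lambda>a1 a2 a3 a4. Sw d a3 (\<lambda>p q. la a1 (mul (T q) (la (T (mul a2 (T p))) a4))))"
    proof (intro arg_cong[where f="Sw4 d x"] ext)
      fix y1 x3 x4 x5
      have "dot (T x4) (la (T x3) x5) = Sw d x4 (\<lambda>r t. mul (T t) (la (T (T r)) (la (T x3) x5)))"
        by (subst dot_def, rule antipode_anti_comult[OF vs]) (auto intro!: mp_linear simp: bilin_def)
      then show "la y1 (dot (T x4) (la (T x3) x5)) = Sw d x4 (\<lambda>p q. la y1 (mul (T q) (la (T (mul x3 (T p))) x5)))"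
        by (simp add: mp_Sw_pull antipode_anti_mult la_mul)
    qed
  qed
  also have "\<dots> = Sw4 d x (\<lambda>x1 w t x5. Sw d w (\<lambda>x3 r. la x1 (mul (T t) (la (T (mul x3 (T r))) x5))))"
    by (rule Sw5_unfold2[OF vs]) (auto simp: multilin_defs intro!: mp_linear)
  also have "\<dots> = Sw4 d x (\<lambda>x1 w t x5. sc (e w) (la x1 (mul (T t) x5)))"
    by (simp add: mp_Sw_pull antipode_right antipode_one mp_scale)
  also have "\<dots> = Sw3 d x (\<lambda>x1 t x5. la x1 (mul (T t) x5))"
    by (simp only: Sw4_unfold1, intro arg_cong[where f="Sw3 d x"] ext Sw_counit_right) (auto intro!: mp_linear)
  also have "\<dots> = Sw d x (\<lambda>x1 v. Sw d v (\<lambda>t x5. la x1 (mul (T t) x5)))"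
    by (rule Sw3_unfold2[OF vs]) (auto simp: multilin_defs intro!: mp_linear)
  also have "\<dots> = Sw d x (\<lambda>x1 v. sc (e v) (la x1 one))"
    by (simp add: mp_Sw_pull antipode_left mp_scale)
  also have "\<dots> = la x one" by (rule Sw_counit_right) (auto intro!: mp_linear)
  finally show ?thesis by (simp add: la_on_one)
qed

lemma comult_dot_P5: assumes s: "vector_space s" and F: "bilin sc s F"
  shows "Sw d (dot x y) F = Sw4 d x (\<lambda>x1 x2 x3 x4. Sw d y (\<lambda>y1 y2. F (dot x1 (la x2 (beta_T x4 y1))) (dot x3 y2)))"
proof -
  note lin = mp_linear linear_bilin_left[OF F] linear_bilin_right[OF F] s
  have "Sw4 d x (\<lambda>x1 x2 x3 x4. Sw d y (\<lambda>y1 y2. F (dot x1 (la x2 (beta_T x4 y1))) (dot x3 y2)))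
      = Sw4 d x (\<lambda>x1 x2 x3 x4. Sw d y (\<lambda>y1 y2. Sw d x1 (\<lambda>p q. F (mul p (la (mul (mul (T q) x2) (T x4)) y1)) (dot x3 y2))))"
    by (simp add: dot_def beta_T_def la_mul Sw_bilin_left[OF F])
  also have "\<dots> = Sw4 d x (\<lambda>x1 x2 x3 x4. Sw d x1 (\<lambda>p q. Sw d y (\<lambda>y1 y2. F (mul p (la (mul (mul (T q) x2) (T x4)) y1)) (dot x3 y2))))"
    by (intro arg_cong[where f="Sw4 d x"] ext, rule Sw_swap)
  also have "\<dots> = Sw5 d x (\<lambda>p q x2 x3 x4. Sw d y (\<lambda>y1 y2. F (mul p (la (mul (mul (T q) x2) (T x4)) y1)) (dot x3 y2)))"
    by (simp add: Sw5_unfold1)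
  also have "\<dots> = Sw4 d x (\<lambda>p w x3 x4. Sw d w (\<lambda>q x2. Sw d y (\<lambda>y1 y2. F (mul p (la (mul (mul (T q) x2) (T x4)) y1)) (dot x3 y2))))"
    by (rule Sw5_unfold2[OF s]) (auto simp: multilin_defs intro!: lin)
  also have "\<dots> = Sw4 d x (\<lambda>p w x3 x4. s (e w) (Sw d y (\<lambda>y1 y2. F (mul p (la (T x4) y1)) (dot x3 y2))))"
    apply (intro arg_cong[where f="Sw4 d x"] ext)
    apply (subst Sw_swap)
    by (simp add: Sw_bilin_left[OF F] Sw_bilin_right[OF bilin_mul] Sw_bilin_left[OF bilin_la] Sw_bilin_left[OF bilin_mul] antipode_left mul_scaled_one mp_scale bilin_scale_left[OF F] Sw_scale[OF s])
  also have "\<dots> = Sw3 d x (\<lambda>p x3 x4. Sw d y (\<lambda>y1 y2. F (mul p (la (T x4) y1)) (dot x3 y2)))"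
    by (simp only: Sw4_unfold1, intro arg_cong[where f="Sw3 d x"] ext Sw_counit_right) (auto intro!: lin)
  also have "\<dots> = Sw4 d x (\<lambda>p a2 a3 x4. Sw d y (\<lambda>y1 y2. F (mul p (la (T x4) y1)) (mul a2 (la (T a3) y2))))"
    apply (subst Sw4_unfold2[OF s]) apply (auto simp: multilin_defs intro!: lin)[1]
    apply (intro arg_cong[where f="Sw3 d x"] ext)
    apply (subst Sw_swap)
    by (simp add: dot_def Sw_bilin_right[OF F])
  also have "\<dots> = Sw d (dot x y) F" by (rule comult_dot[symmetric, OF s F])
  finally show ?thesis by simp
qed

lemma Sw_antipode_la_right: "Sw d w (\<lambda>a1 p. Sw d v (\<lambda>b1 r. mul (la a1 b1) (T (la p r)))) = sc (e w * e v) one"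
proof -
  have "Sw d w (\<lambda>a1 p. Sw d v (\<lambda>b1 r. mul (la a1 b1) (T (la p r)))) = Sw d (la w v) (\<lambda>X Y. mul X (T Y))"
    by (rule comult_la[symmetric, OF vs]) (auto intro!: mp_linear simp: bilin_def)
  then show ?thesis by (simp add: antipode_right counit_la)
qed

lemma Sw_antipode_ra_right: "Sw d w (\<lambda>a1 p. Sw d v (\<lambda>b1 r. mul (ra a1 b1) (T (ra p r)))) = sc (e w * e v) one"
proof -
  have "Sw d w (\<lambda>a1 p. Sw d v (\<lambda>b1 r. mul (ra a1 b1) (T (ra p r)))) = Sw d (ra w v) (\<lambda>X Y. mul X (T Y))"
    by (rule comult_ra[symmetric, OF vs]) (auto intro!: mp_linear simp: bilin_def)
  then show ?thesis by (simp add: antipode_right counit_ra)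
qed

lemma comult_ra_expanded: assumes s: "vector_space s" and F: "bilin sc s F"
  shows "Sw d x (\<lambda>x1 x2. Sw d y (\<lambda>y1 y2. F (ra x1 y1) (ra x2 y2)))
       = Sw3 d x (\<lambda>x1 x2 x3. Sw3 d y (\<lambda>y1 y2 y3. F (ra x2 y2) (mul (mul (T (la x1 y1)) x3) y3)))"
proof -
  note lin = mp_linear linear_bilin_left[OF F] linear_bilin_right[OF F] s
  have "Sw d x (\<lambda>x1 x2. Sw d y (\<lambda>y1 y2. F (ra x1 y1) (ra x2 y2))) = Sw d (ra x y) F"
    by (rule comult_ra[symmetric, OF s F])
  also have "\<dots> = Sw d x (\<lambda>a b. Sw d y (\<lambda>c f. Sw d (mul (mul (T (la a c)) b) f) F))"
    by (subst ra_via_la) (simp add: linear_Sw[OF linear_Sw_arg[OF s F]])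
  also have "\<dots> = Sw d x (\<lambda>a b. Sw d y (\<lambda>c f. Sw d a (\<lambda>a1 a2. Sw d c (\<lambda>c1 c2. Sw d b (\<lambda>b1 b2. Sw d f (\<lambda>f1 f2.
          F (mul (mul (T (la a2 c2)) b1) f1) (mul (mul (T (la a1 c1)) b2) f2)))))))"
  proof (intro Sw_cong)
    fix a b c f
    have "Sw d (mul (mul (T (la a c)) b) f) F = Sw d (mul (T (la a c)) b) (\<lambda>P Q. Sw d f (\<lambda>f1 f2. F (mul P f1) (mul Q f2)))"
      by (rule comult_mul[OF s F])
    also have "\<dots> = Sw d (T (la a c)) (\<lambda>P1 P2. Sw d b (\<lambda>b1 b2. Sw d f (\<lambda>f1 f2. F (mul (mul P1 b1) f1) (mul (mul P2 b2) f2))))"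
      by (rule comult_mul[OF s]) (auto intro!: lin simp: bilin_def)
    also have "\<dots> = Sw d (la a c) (\<lambda>L1 L2. Sw d b (\<lambda>b1 b2. Sw d f (\<lambda>f1 f2. F (mul (mul (T L2) b1) f1) (mul (mul (T L1) b2) f2))))"
      by (rule antipode_anti_comult[OF s]) (auto intro!: lin simp: bilin_def)
    also have "\<dots> = Sw d a (\<lambda>a1 a2. Sw d c (\<lambda>c1 c2. Sw d b (\<lambda>b1 b2. Sw d f (\<lambda>f1 f2.
          F (mul (mul (T (la a2 c2)) b1) f1) (mul (mul (T (la a1 c1)) b2) f2)))))"
      by (rule comult_la[OF s]) (auto intro!: lin simp: bilin_def)
    finally show "Sw d (mul (mul (T (la a c)) b) f) F = Sw d a (\<lambda>a1 a2. Sw d c (\<lambda>c1 c2. Sw d b (\<lambda>b1 b2. Sw d f (\<lambda>f1 f2.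
          F (mul (mul (T (la a2 c2)) b1) f1) (mul (mul (T (la a1 c1)) b2) f2)))))" .
  qed
  also have "\<dots> = Sw d x (\<lambda>z t. Sw d y (\<lambda>z' q. Sw d z (\<lambda>g w. Sw d z' (\<lambda>g' v. Sw d w (\<lambda>h r. Sw d v (\<lambda>h' p.
          F (mul (mul (T (la h h')) r) p) (mul (mul (T (la g g')) t) q)))))))"
    by (rule Sw2_coassoc4[OF s]) (auto simp: multilin_defs intro!: lin)
  also have "\<dots> = Sw d x (\<lambda>z t. Sw d y (\<lambda>z' q. Sw d z (\<lambda>g w. Sw d z' (\<lambda>g' v. F (ra w v) (mul (mul (T (la g g')) t) q)))))"
    by (simp add: ra_via_la Sw_bilin_left[OF F])
  also have "\<dots> = Sw d x (\<lambda>z t. Sw d z (\<lambda>g w. Sw d y (\<lambda>z' q. Sw d z' (\<lambda>g' v. F (ra w v) (mul (mul (T (la g g')) t) q)))))"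
    by (rule Sw_cong, rule Sw_swap)
  also have "\<dots> = Sw3 d x (\<lambda>x1 x2 x3. Sw3 d y (\<lambda>y1 y2 y3. F (ra x2 y2) (mul (mul (T (la x1 y1)) x3) y3)))"
    by (simp add: Sw3_unfold1)
  finally show ?thesis .
qed

lemma Sw3_ra_mul_actions: assumes s: "vector_space s" and H: "bilin sc s H"
  shows "Sw3 d x (\<lambda>x1 x2 x3. Sw3 d y (\<lambda>y1 y2 y3. H (ra x1 y1) (mul (la x2 y2) (ra x3 y3))))
       = Sw d x (\<lambda>p q. Sw d y (\<lambda>r t. H (ra p r) (mul q t)))"
proof -
  note lin = mp_linear linear_bilin_left[OF H] linear_bilin_right[OF H] s
  have "Sw3 d x (\<lambda>x1 x2 x3. Sw3 d y (\<lambda>y1 y2 y3. H (ra x1 y1) (mul (la x2 y2) (ra x3 y3))))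
      = Sw d x (\<lambda>x1 X. Sw d X (\<lambda>x2 x3. Sw d y (\<lambda>y1 Y. Sw d Y (\<lambda>y2 y3. H (ra x1 y1) (mul (la x2 y2) (ra x3 y3))))))"
    apply (subst Sw3_unfold2[OF s]) apply (auto simp: multilin_defs Sw_defs intro!: lin)[1]
    apply (intro Sw_cong)
    apply (subst Sw3_unfold2[OF s]) apply (auto simp: multilin_defs Sw_defs intro!: lin)[1]
    by (rule refl)
  also have "\<dots> = Sw d x (\<lambda>x1 X. Sw d y (\<lambda>y1 Y. Sw d X (\<lambda>x2 x3. Sw d Y (\<lambda>y2 y3. H (ra x1 y1) (mul (la x2 y2) (ra x3 y3))))))"
    by (rule Sw_cong, rule Sw_swap)
  also have "\<dots> = Sw d x (\<lambda>p q. Sw d y (\<lambda>r t. H (ra p r) (mul q t)))" by (simp add: Sw_bilin_right[OF H] mul_via_actions[symmetric])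
  finally show ?thesis .
qed

lemma Sw4_la_antipode_la_cancel: assumes s: "vector_space s" and H: "bilin sc s H"
  shows "Sw4 d x (\<lambda>x0 X1 X2 X3. Sw4 d y (\<lambda>y0 Y1 Y2 Y3.
        H (ra X2 Y2) (mul (mul (mul (la x0 y0) (T (la X1 Y1))) X3) Y3)))
       = Sw d x (\<lambda>p q. Sw d y (\<lambda>r t. H (ra p r) (mul q t)))"
proof -
  note lin = mp_linear linear_bilin_left[OF H] linear_bilin_right[OF H] s
  have "Sw4 d x (\<lambda>x0 X1 X2 X3. Sw4 d y (\<lambda>y0 Y1 Y2 Y3.
        H (ra X2 Y2) (mul (mul (mul (la x0 y0) (T (la X1 Y1))) X3) Y3)))
      = Sw3 d x (\<lambda>w X2 X3. Sw3 d y (\<lambda>v Y2 Y3. Sw d w (\<lambda>x0 X1. Sw d v (\<lambda>y0 Y1.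
        H (ra X2 Y2) (mul (mul (mul (la x0 y0) (T (la X1 Y1))) X3) Y3)))))"
    by (simp add: Sw4_unfold1 Sw3_swap)
  also have "\<dots> = Sw3 d x (\<lambda>w X2 X3. Sw3 d y (\<lambda>v Y2 Y3. s (e w) (s (e v) (H (ra X2 Y2) (mul X3 Y3)))))"
    by (simp add: Sw_bilin_right[OF H] Sw_bilin_left[OF bilin_mul] Sw_antipode_la_right mul_scaled_one mp_scale bilin_scale_right[OF H] vs_scale_scale[OF s] mult.commute)
  also have "\<dots> = Sw d x (\<lambda>X2 X3. Sw3 d y (\<lambda>v Y2 Y3. s (e v) (H (ra X2 Y2) (mul X3 Y3))))"
    unfolding Sw3_unfold1[of d x] Sw3_def[of d y] Sw_scale[OF s]
    by (intro Sw_cong Sw_counit_left) (auto intro!: lin)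
  also have "\<dots> = Sw d x (\<lambda>p q. Sw d y (\<lambda>r t. H (ra p r) (mul q t)))"
    unfolding Sw3_unfold1[of d y]
    by (intro Sw_cong Sw_counit_left) (auto intro!: lin)
  finally show ?thesis .
qed

lemma Sw3_ra_mul_actions_swapped: assumes s: "vector_space s" and H: "bilin sc s H"
  shows "Sw3 d x (\<lambda>x1 x2 x3. Sw3 d y (\<lambda>y1 y2 y3. H (ra x2 y2) (mul (la x1 y1) (ra x3 y3))))
       = Sw d x (\<lambda>p q. Sw d y (\<lambda>r t. H (ra p r) (mul q t)))"
proof -
  note lin = mp_linear linear_bilin_left[OF H] linear_bilin_right[OF H] s
  have "Sw3 d x (\<lambda>x1 x2 x3. Sw3 d y (\<lambda>y1 y2 y3. H (ra x2 y2) (mul (la x1 y1) (ra x3 y3))))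
      = Sw d x (\<lambda>x0 X. Sw d X (\<lambda>x1 x2. Sw d y (\<lambda>y0 Y. Sw d Y (\<lambda>y1 y2. H (ra x1 y1) (mul (la x0 y0) (ra x2 y2))))))"
    apply (subst Sw3_unfold2[OF s]) apply (auto simp: multilin_defs Sw_defs intro!: lin)[1]
    apply (intro Sw_cong)
    apply (subst Sw3_unfold2[OF s]) apply (auto simp: multilin_defs Sw_defs intro!: lin)[1]
    by (rule refl)
  also have "\<dots> = Sw d x (\<lambda>x0 X. Sw d y (\<lambda>y0 Y. Sw d X (\<lambda>x1 x2. Sw d Y (\<lambda>y1 y2. H (ra x1 y1) (mul (la x0 y0) (ra x2 y2))))))"
    by (rule Sw_cong, rule Sw_swap)
  also have "\<dots> = Sw d x (\<lambda>x0 X. Sw d y (\<lambda>y0 Y. Sw3 d X (\<lambda>X1 X2 X3. Sw3 d Y (\<lambda>Y1 Y2 Y3.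
        H (ra X2 Y2) (mul (mul (mul (la x0 y0) (T (la X1 Y1))) X3) Y3)))))"
  proof (intro Sw_cong)
    fix x0 X y0 Y
    have "Sw d X (\<lambda>x1 x2. Sw d Y (\<lambda>y1 y2. (\<lambda>P Q. H P (mul (la x0 y0) Q)) (ra x1 y1) (ra x2 y2)))
      = Sw3 d X (\<lambda>x1 x2 x3. Sw3 d Y (\<lambda>y1 y2 y3. (\<lambda>P Q. H P (mul (la x0 y0) Q)) (ra x2 y2) (mul (mul (T (la x1 y1)) x3) y3)))"
      by (rule comult_ra_expanded[OF s]) (auto intro!: lin simp: bilin_def)
    then show "Sw d X (\<lambda>x1 x2. Sw d Y (\<lambda>y1 y2. H (ra x1 y1) (mul (la x0 y0) (ra x2 y2)))) =
        Sw3 d X (\<lambda>X1 X2 X3. Sw3 d Y (\<lambda>Y1 Y2 Y3. H (ra X2 Y2) (mul (mul (mul (la x0 y0) (T (la X1 Y1))) X3) Y3)))"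
      by (simp add: mul_assoc)
  qed
  also have "\<dots> = Sw d x (\<lambda>x0 X. Sw3 d X (\<lambda>X1 X2 X3. Sw d y (\<lambda>y0 Y. Sw3 d Y (\<lambda>Y1 Y2 Y3.
        H (ra X2 Y2) (mul (mul (mul (la x0 y0) (T (la X1 Y1))) X3) Y3)))))"
    by (rule Sw_cong, rule Sw3_swap[symmetric])
  also have "\<dots> = Sw4 d x (\<lambda>x0 X1 X2 X3. Sw4 d y (\<lambda>y0 Y1 Y2 Y3.
        H (ra X2 Y2) (mul (mul (mul (la x0 y0) (T (la X1 Y1))) X3) Y3)))"
    apply (subst Sw4_unfold_tail[OF s]) apply (auto simp: multilin_defs Sw_defs intro!: lin)[1]
    apply (intro Sw_cong arg_cong[where f="Sw3 d _"] ext)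
    apply (subst Sw4_unfold_tail[OF s]) apply (auto simp: multilin_defs Sw_defs intro!: lin)[1]
    by (rule refl)
  also have "\<dots> = Sw d x (\<lambda>p q. Sw d y (\<lambda>r t. H (ra p r) (mul q t)))"
    by (rule Sw4_la_antipode_la_cancel[OF s H])
  finally show ?thesis .
qed

lemma Sw3_scale: assumes "vector_space s" shows "Sw3 d y (\<lambda>a b c. s k (F a b c)) = s k (Sw3 d y F)"
  by (simp add: Sw3_def Sw_scale[OF assms])

lemma Sw4_ra_antipode_collapse: assumes s: "vector_space s"
  and K1: "\<And>b c f Z. Vector_Spaces.linear sc s (\<lambda>a. K a b c f Z)"
  and K2: "\<And>a c f Z. Vector_Spaces.linear sc s (\<lambda>b. K a b c f Z)"
  and K3: "\<And>a b f Z. Vector_Spaces.linear sc s (\<lambda>c. K a b c f Z)"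
  and K4: "\<And>a b c Z. Vector_Spaces.linear sc s (\<lambda>f. K a b c f Z)"
  and K5: "\<And>a b c f. Vector_Spaces.linear sc s (K a b c f)"
  shows "Sw4 d x (\<lambda>x1 x2 x3 x4. Sw4 d y (\<lambda>y1 y2 y3 y4. K x1 x2 y1 y2 (mul (ra x3 y3) (T (ra x4 y4)))))
       = Sw d x (\<lambda>x1 x2. Sw d y (\<lambda>y1 y2. K x1 x2 y1 y2 one))"
proof -
  note lin = mp_linear s K1 K2 K3 K4 K5 linear_compose_fun[OF _ K5]
  have "Sw4 d x (\<lambda>x1 x2 x3 x4. Sw4 d y (\<lambda>y1 y2 y3 y4. K x1 x2 y1 y2 (mul (ra x3 y3) (T (ra x4 y4)))))
      = Sw3 d x (\<lambda>x1 x2 w. Sw3 d y (\<lambda>y1 y2 v. Sw d w (\<lambda>x3 x4. Sw d v (\<lambda>y3 y4. K x1 x2 y1 y2 (mul (ra x3 y3) (T (ra x4 y4)))))))"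
    apply (subst Sw4_unfold3[OF s]) apply (auto simp: multilin_defs Sw_defs intro!: lin)[1]
    apply (intro arg_cong[where f="Sw3 d x"] ext)
    apply (subst Sw4_unfold3[OF s]) apply (auto simp: multilin_defs intro!: lin)[1]
    by (rule Sw3_swap[symmetric])
  also have "\<dots> = Sw3 d x (\<lambda>x1 x2 w. Sw3 d y (\<lambda>y1 y2 v. s (e w) (s (e v) (K x1 x2 y1 y2 one))))"
    by (simp add: Sw_linear[OF K5] Sw_bilin_right[OF bilin_mul] Sw_bilin_left[OF bilin_mul] Sw_antipode_ra_right linear_scaleD[OF K5] vs_scale_scale[OF s] mult.commute)
  also have "\<dots> = Sw d x (\<lambda>x1 x2. Sw3 d y (\<lambda>y1 y2 v. s (e v) (K x1 x2 y1 y2 one)))"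
    apply (simp only: Sw3_scale[OF s])
    apply (subst Sw3_unfold2[OF s]) apply (auto simp: multilin_defs Sw_defs intro!: lin)[1]
    by (intro Sw_cong Sw_counit_right) (auto simp: Sw_defs intro!: lin)
  also have "\<dots> = Sw d x (\<lambda>x1 x2. Sw d y (\<lambda>y1 y2. K x1 x2 y1 y2 one))"
    apply (intro Sw_cong)
    apply (subst Sw3_unfold2[OF s]) apply (auto simp: multilin_defs Sw_defs intro!: lin)[1]
    by (intro Sw_cong Sw_counit_right) (auto intro!: lin)
  finally show ?thesis .
qed

text \<open>Both sides are multiplied by \<open>(x\<^sub>3 \<leftharpoonup> y\<^sub>3) T(x\<^sub>4 \<leftharpoonup> y\<^sub>4) = \<epsilon>(x\<^sub>3) \<epsilon>(y\<^sub>3)\<close>;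
  the resulting sums agree because both collapse to the same sum by \<open>a \<bullet> b = (a\<^sub>1 \<rightharpoonup> b\<^sub>1) \<bullet> (a\<^sub>2 \<leftharpoonup> b\<^sub>2)\<close>.\<close>

lemma Sw_la_ra_swap: assumes s: "vector_space s" and G: "bilin sc s G"
  shows "Sw d x (\<lambda>x1 x2. Sw d y (\<lambda>y1 y2. G (la x1 y1) (ra x2 y2))) = Sw d x (\<lambda>x1 x2. Sw d y (\<lambda>y1 y2. G (la x2 y2) (ra x1 y1)))"
proof -
  note lin = mp_linear linear_bilin_left[OF G] linear_bilin_right[OF G] s
  have "Sw d x (\<lambda>x1 x2. Sw d y (\<lambda>y1 y2. G (la x1 y1) (ra x2 y2)))
      = Sw4 d x (\<lambda>x1 x2 x3 x4. Sw4 d y (\<lambda>y1 y2 y3 y4. (\<lambda>x1 x2 y1 y2 Z. G (mul (la x1 y1) Z) (ra x2 y2)) x1 x2 y1 y2 (mul (ra x3 y3) (T (ra x4 y4)))))"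
    by (subst Sw4_ra_antipode_collapse[OF s]) (auto intro!: lin)
  also have "\<dots> = Sw d x (\<lambda>X x4. Sw d y (\<lambda>Y y4. Sw3 d X (\<lambda>x1 x2 x3. Sw3 d Y (\<lambda>y1 y2 y3.
      (\<lambda>P Q. G (mul Q (T (ra x4 y4))) P) (ra x2 y2) (mul (la x1 y1) (ra x3 y3))))))"
    by (simp add: Sw4_def mul_assoc Sw3_swap)
  also have "\<dots> = Sw d x (\<lambda>X x4. Sw d y (\<lambda>Y y4. Sw3 d X (\<lambda>x1 x2 x3. Sw3 d Y (\<lambda>y1 y2 y3.
      (\<lambda>P Q. G (mul Q (T (ra x4 y4))) P) (ra x1 y1) (mul (la x2 y2) (ra x3 y3))))))"
    by (intro Sw_cong trans[OF Sw3_ra_mul_actions_swapped[OF s] Sw3_ra_mul_actions[OF s, symmetric]]) (auto intro!: lin simp: bilin_def)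
  also have "\<dots> = Sw4 d x (\<lambda>x1 x2 x3 x4. Sw4 d y (\<lambda>y1 y2 y3 y4. (\<lambda>x1 x2 y1 y2 Z. G (mul (la x2 y2) Z) (ra x1 y1)) x1 x2 y1 y2 (mul (ra x3 y3) (T (ra x4 y4)))))"
    by (simp add: Sw4_def mul_assoc Sw3_swap)
  also have "\<dots> = Sw d x (\<lambda>x1 x2. Sw d y (\<lambda>y1 y2. G (la x2 y2) (ra x1 y1)))"
    by (subst Sw4_ra_antipode_collapse[OF s]) (auto intro!: lin)
  finally show ?thesis .
qed

definition mp_struct where "mp_struct = \<lparr>bmul = mul, bone = one, bdelta = d, beps = e, bT = T, lact = la, ract = ra\<rparr>"

lemma ymul_eq: "ymul (toYD mp_struct) = dot"
  by (simp add: mp_struct_def toYD_def dot_def Sw_def fun_eq_iff)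
lemma yS_eq: "yS (toYD mp_struct) = Sdot"
  by (simp add: mp_struct_def toYD_def Sdot_def Sw_def fun_eq_iff)
lemma y_simps: "yone (toYD mp_struct) = one" "ydelta (toYD mp_struct) = d" "yeps (toYD mp_struct) = e" "yact (toYD mp_struct) = la"
  by (simp_all add: mp_struct_def toYD_def)

lemma betaOf_eq: "betaOf sc (toYD mp_struct) = beta_T"
proof -
  have ex: "is_conv_inv sc d e la beta_T" by (rule conv_inv_beta_T)
  have "is_conv_inv sc d e la (betaOf sc (toYD mp_struct))"
    unfolding betaOf_def y_simps by (rule someI[where P="\<lambda>b. is_conv_inv sc d e la b", OF ex])
  then show ?thesis using conv_inv_unique[OF bilin_la _ ex] by blast
qed

lemma bulletOf_eq: "bulletOf (toYD mp_struct) = mul"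
  using mul_via_dot by (simp add: bulletOf_def ymul_eq y_simps Sw_def fun_eq_iff)
lemma SOf_eq: "SOf sc (toYD mp_struct) = T"
  using Sw_beta_T_Sdot by (simp add: SOf_def betaOf_eq yS_eq y_simps Sw_def fun_eq_iff)
lemma ractOf_eq: "ractOf sc (toYD mp_struct) = ra"
  using ra_via_la by (simp add: ractOf_def bulletOf_eq SOf_eq y_simps Sw_concat[where d=d] fun_eq_iff)

lemma YDPH_toYD: "is_YDPH sc (toYD mp_struct)"
  unfolding is_YDPH_def Let_def ymul_eq yS_eq y_simps betaOf_eq bulletOf_eq SOf_eq ractOf_eq
proof (intro conjI allI)
  show "is_algebra sc dot one" unfolding is_algebra_def bilinH_eq_bilin
    using vs bilin_dot dot_assoc dot_one1 dot_one2 by blast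
  show "is_coalgebra sc d e" by (rule coalgebra)
  show "is_antipode sc dot one d e Sdot" unfolding is_antipode_def
    using linear_Sdot antipode_Sdot_right antipode_Sdot_left unfolding Sw_def by blast
  show "bilinH sc la" using bilin_la unfolding bilinH_eq_bilin .
  show "\<exists>b. is_conv_inv sc d e la b" using conv_inv_beta_T by blast
  show "e one = 1" by simp
  show "teq2 sc (d one) [(one, one)]" using hopf unfolding is_hopf_def is_bialgebra_def by blast
  fix x y z
  show "teq2 sc (d (la x y)) (concat (map (\<lambda>(x1, x2). map (\<lambda>(y1, y2). (la x1 y1, la x2 y2)) (d y)) (d x)))"
    using comult_la_teq by blast
  show "e (la x y) = e x * e y" by (rule counit_la)
  show "la x (dot y z) = sum_list (map (\<lambda>(x1, x2). dot (la x1 y) (la x2 z)) (d x))"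
    using la_dot unfolding Sw_def .
  show "la x (la y z) = la (mul x y) z" by (simp add: la_mul)
  show "e (dot x y) = e x * e y" by (rule counit_dot)
  show "teq2 sc (d (dot x y)) (concat (map (\<lambda>(x1, x2, x3, x4). map (\<lambda>(y1, y2). (dot x1 (la x2 (beta_T x4 y1)), dot x3 y2)) (d y)) (sw4 d x)))"
    by (intro teq2I, drule comult_dot_P5[OF vector_space_field, where x=x and y=y])
      (simp add: Sw_def Sw_defs sw4_def sw3_def sum_list_concat map_concat o_def case_prod_beta')
  show "teq2 sc (d (T x)) (map (\<lambda>(x1, x2). (T x2, T x1)) (d x))"
    by (intro teq2I, drule antipode_anti_comult[OF vector_space_field, where x=x])
      (simp add: Sw_def o_def case_prod_beta')
  show "teq2 sc (concat (map (\<lambda>(x1, x2). map (\<lambda>(y1, y2). (la x1 y1, ra x2 y2)) (d y)) (d x)))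
                (concat (map (\<lambda>(x1, x2). map (\<lambda>(y1, y2). (la x2 y2, ra x1 y1)) (d y)) (d x)))"
    by (intro teq2I, drule Sw_la_ra_swap[OF vector_space_field, where x=x and y=y])
      (simp add: Sw_def sum_list_concat map_concat o_def case_prod_beta')
qed

lemma toMP_toYD: "toMP sc (toYD mp_struct) = mp_struct"
  by (simp add: toMP_def bulletOf_eq SOf_eq ractOf_eq y_simps) (simp add: mp_struct_def)

end

lemma matched_pair_of_MP: assumes "is_MP sc M"
  shows "matched_pair sc (bdelta M) (beps M) (bmul M) (bone M) (bT M) (lact M) (ract M)"
proof -
  have H: "is_hopf sc (bmul M) (bone M) (bdelta M) (beps M) (bT M)" using assms unfolding is_MP_def Let_def by blast
  have C: "is_coalgebra sc (bdelta M) (beps M)" using H unfolding is_hopf_def is_bialgebra_def by blast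
  note M = assms[unfolded is_MP_def Let_def bilinH_eq_bilin Sw_concat[where d="bdelta M"]]
  show ?thesis
    unfolding matched_pair_def matched_pair_axioms_def hopf_alg_def hopf_alg_axioms_def coalgebra_def
    by (insert H C M, elim conjE, intro conjI; assumption)
qed

theorem toYD_correct: assumes "is_MP sc M" shows "is_YDPH sc (toYD M) \<and> toMP sc (toYD M) = M"
proof -
  interpret X: matched_pair sc "bdelta M" "beps M" "bmul M" "bone M" "bT M" "lact M" "ract M"
    by (rule matched_pair_of_MP[OF assms])
  have mp_struct_eq: "X.mp_struct = M" unfolding X.mp_struct_def by (cases M) simp
  show ?thesis using X.YDPH_toYD X.toMP_toYD unfolding mp_struct_eq by simp
qed

section \<open>Morphisms\<close>

locale coalgebra_map = C1: coalgebra sc d e + C2: coalgebra sc' d' e'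
  for sc :: "'k::field \<Rightarrow> 'h::ab_group_add \<Rightarrow> 'h" and d e
  and sc' :: "'k \<Rightarrow> 'g::ab_group_add \<Rightarrow> 'g" and d' e' +
  fixes f :: "'h \<Rightarrow> 'g"
  assumes linear_f: "Vector_Spaces.linear sc sc' f"
    and comult_f: "\<forall>x. teq2 sc' (d' (f x)) (map (\<lambda>(a,b). (f a, f b)) (d x))"
    and counit_f: "e' (f x) = e x"
begin

lemma Sw_map: "vector_space s \<Longrightarrow> bilin sc' s G \<Longrightarrow> Sw d' (f x) G = Sw d x (\<lambda>a b. G (f a) (f b))"
  using teq2_bilin_sums[OF comult_f[rule_format]] unfolding Sw_def by (simp add: o_def case_prod_beta')

end

locale hopf_hom = H1: hopf_alg sc d e mul one T + H2: hopf_alg sc' d' e' mul' one' T'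
    + coalgebra_map sc d e sc' d' e' f
  for sc :: "'k::field \<Rightarrow> 'h::ab_group_add \<Rightarrow> 'h" and d e mul one T
  and sc' :: "'k \<Rightarrow> 'g::ab_group_add \<Rightarrow> 'g" and d' e' mul' one' T' and f +
  assumes mul_f: "f (mul x y) = mul' (f x) (f y)"
    and one_f: "f one = one'"
begin

lemma antipode_f: "f (T x) = T' (f x)"
proof -
  note lin = H1.hopf_linear H2.hopf_linear linear_compose_fun[OF _ linear_f]
    linear_bilin_left[OF H2.bilin_mul] linear_bilin_right[OF H2.bilin_mul] linear_compose_fun[OF _ H2.linear_T]
  have "f (T x) = Sw d x (\<lambda>a b. sc' (e b) (f (T a)))"
    by (rule H1.Sw_counit_right[symmetric]) (auto intro!: lin)
  also have "\<dots> = Sw d x (\<lambda>a b. mul' (f (T a)) (Sw d' (f b) (\<lambda>p q. mul' p (T' q))))"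
    by (simp add: H2.antipode_right counit_f H2.hopf_scale)
  also have "\<dots> = Sw d x (\<lambda>a b. Sw d b (\<lambda>p q. mul' (f (mul (T a) p)) (T' (f q))))"
    by (intro Sw_cong, subst Sw_map[OF H2.vs])
      (auto intro!: lin simp: bilin_def H2.hopf_Sw_pull mul_f H2.mul_assoc)
  also have "\<dots> = Sw3 d x (\<lambda>a p q. mul' (f (mul (T a) p)) (T' (f q)))"
    by (rule H1.Sw3_unfold2[symmetric, OF H2.vs]) (auto simp: multilin_defs intro!: lin)
  also have "\<dots> = Sw d x (\<lambda>w q. sc' (e w) (T' (f q)))"
    by (simp add: Sw3_unfold1 Sw_bilin_left[OF H2.bilin_mul] Sw_linear[OF linear_f] H1.antipode_left
        linear_scaleD[OF linear_f] one_f H2.hopf_scale)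
  also have "\<dots> = T' (f x)" by (rule H1.Sw_counit_left) (auto intro!: lin)
  finally show ?thesis .
qed

end

locale yd_post_hopf_map = Y: yd_post_hopf sc d e m u S act beta bul SA ra
    + Y': yd_post_hopf sc' d' e' m' u' S' act' beta' bul' SA' ra'
    + coalgebra_map sc d e sc' d' e' f
  for sc :: "'k::field \<Rightarrow> 'h::ab_group_add \<Rightarrow> 'h" and d e m u S act beta bul SA ra
  and sc' :: "'k \<Rightarrow> 'g::ab_group_add \<Rightarrow> 'g" and d' e' m' u' S' act' beta' bul' SA' ra' and f +
  assumes unit_f: "f u = u'"
    and act_f: "f (act x y) = act' (f x) (f y)"
begin

lemma bul_f:
  assumes m_f: "\<And>x y. f (m x y) = m' (f x) (f y)"
  shows "f (bul x y) = bul' (f x) (f y)"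
proof -
  have "f (bul x y) = Sw d x (\<lambda>a b. m' (f a) (act' (f b) (f y)))"
    by (simp add: Y.bul_def linear_Sw[OF linear_f] m_f act_f)
  also have "\<dots> = Sw d' (f x) (\<lambda>a b. m' a (act' b (f y)))"
    by (rule Sw_map[symmetric, OF Y'.vs]) (auto intro!: Y'.yd_linear simp: bilin_def)
  finally show ?thesis by (simp add: Y'.bul_def)
qed

lemma hopf_hom_bul:
  assumes "\<And>x y. f (bul x y) = bul' (f x) (f y)"
  shows "hopf_hom sc d e bul u SA sc' d' e' bul' u' SA' f"
  unfolding hopf_hom_def hopf_hom_axioms_def hopf_alg_def hopf_alg_axioms_def
  using Y.coalgebra_axioms Y'.coalgebra_axioms Y.hopf_bul Y'.hopf_bul coalgebra_map_axioms assms unit_f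
  by blast

lemma m_f:
  assumes bul_f: "\<And>x y. f (bul x y) = bul' (f x) (f y)"
  shows "f (m x y) = m' (f x) (f y)"
proof -
  interpret hopf_hom sc d e bul u SA sc' d' e' bul' u' SA' f by (rule hopf_hom_bul[OF bul_f])
  have "f (m x y) = Sw d x (\<lambda>a b. bul' (f a) (act' (SA' (f b)) (f y)))"
    by (subst Y.m_via_bul) (simp add: linear_Sw[OF linear_f] bul_f act_f antipode_f)
  also have "\<dots> = Sw d' (f x) (\<lambda>a b. bul' a (act' (SA' b) (f y)))"
    by (rule Sw_map[symmetric, OF Y'.vs]) (auto intro!: Y'.yd_linear simp: bilin_def)
  finally show ?thesis by (simp add: Y'.m_via_bul[symmetric])
qed

lemma ra_f:
  assumes bul_f: "\<And>x y. f (bul x y) = bul' (f x) (f y)"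
  shows "f (ra x y) = ra' (f x) (f y)"
proof -
  interpret hopf_hom sc d e bul u SA sc' d' e' bul' u' SA' f by (rule hopf_hom_bul[OF bul_f])
  have "f (ra x y) = Sw d x (\<lambda>x1 x2. Sw d y (\<lambda>y1 y2. bul' (bul' (SA' (act' (f x1) (f y1))) (f x2)) (f y2)))"
    by (simp add: Y.ra_unfold linear_Sw[OF linear_f] act_f bul_f antipode_f)
  also have "\<dots> = Sw d' (f x) (\<lambda>x1 x2. Sw d' (f y) (\<lambda>y1 y2. bul' (bul' (SA' (act' x1 y1)) x2) y2))"
    by (subst Sw_map[OF Y'.vs], auto intro!: Y'.yd_linear simp: bilin_def,
        intro Sw_cong, subst Sw_map[OF Y'.vs], auto intro!: Y'.yd_linear simp: bilin_def)
  finally show ?thesis by (simp add: Y'.ra_unfold)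
qed

end

locale matched_pair_map = X: matched_pair sc d e mul one T la ra
    + X': matched_pair sc' d' e' mul' one' T' la' ra'
    + coalgebra_map sc d e sc' d' e' f
  for sc :: "'k::field \<Rightarrow> 'h::ab_group_add \<Rightarrow> 'h" and d e mul one T la ra
  and sc' :: "'k \<Rightarrow> 'g::ab_group_add \<Rightarrow> 'g" and d' e' mul' one' T' la' ra' and f +
  assumes one_f: "f one = one'"
    and la_f: "f (la x y) = la' (f x) (f y)"
begin

lemma hopf_hom_mul:
  assumes "\<And>x y. f (mul x y) = mul' (f x) (f y)"
  shows "hopf_hom sc d e mul one T sc' d' e' mul' one' T' f"
  unfolding hopf_hom_def hopf_hom_axioms_def
  using X.hopf_alg_axioms X'.hopf_alg_axioms coalgebra_map_axioms assms one_f by blast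

lemma dot_f:
  assumes mul_f: "\<And>x y. f (mul x y) = mul' (f x) (f y)"
  shows "f (X.dot x y) = X'.dot (f x) (f y)"
proof -
  interpret hopf_hom sc d e mul one T sc' d' e' mul' one' T' f by (rule hopf_hom_mul[OF mul_f])
  have "f (X.dot x y) = Sw d x (\<lambda>a1 a2. mul' (f a1) (la' (T' (f a2)) (f y)))"
    by (simp add: X.dot_def linear_Sw[OF linear_f] mul_f la_f antipode_f)
  also have "\<dots> = Sw d' (f x) (\<lambda>a1 a2. mul' a1 (la' (T' a2) (f y)))"
    by (rule Sw_map[symmetric, OF X'.vs]) (auto intro!: X'.mp_linear simp: bilin_def)
  finally show ?thesis by (simp add: X'.dot_def)
qed

lemma mul_f:
  assumes dot_f: "\<And>x y. f (X.dot x y) = X'.dot (f x) (f y)"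
  shows "f (mul x y) = mul' (f x) (f y)"
proof -
  have "f (mul x y) = Sw d x (\<lambda>a b. X'.dot (f a) (la' (f b) (f y)))"
    by (subst X.mul_via_dot[symmetric]) (simp add: linear_Sw[OF linear_f] dot_f la_f)
  also have "\<dots> = Sw d' (f x) (\<lambda>a b. X'.dot a (la' b (f y)))"
    by (rule Sw_map[symmetric, OF X'.vs]) (auto intro!: X'.mp_linear simp: bilin_def)
  finally show ?thesis by (simp add: X'.mul_via_dot)
qed

lemma ra_f:
  assumes mul_f: "\<And>x y. f (mul x y) = mul' (f x) (f y)"
  shows "f (ra x y) = ra' (f x) (f y)"
proof -
  interpret hopf_hom sc d e mul one T sc' d' e' mul' one' T' f by (rule hopf_hom_mul[OF mul_f])
  have "f (ra x y) = Sw d x (\<lambda>x1 x2. Sw d y (\<lambda>y1 y2. mul' (mul' (T' (la' (f x1) (f y1))) (f x2)) (f y2)))"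
    by (subst X.ra_via_la) (simp add: linear_Sw[OF linear_f] mul_f la_f antipode_f)
  also have "\<dots> = Sw d' (f x) (\<lambda>x1 x2. Sw d' (f y) (\<lambda>y1 y2. mul' (mul' (T' (la' x1 y1)) x2) y2))"
    by (subst Sw_map[OF X'.vs], auto intro!: X'.mp_linear simp: bilin_def,
        intro Sw_cong, subst Sw_map[OF X'.vs], auto intro!: X'.mp_linear simp: bilin_def)
  finally show ?thesis by (simp add: X'.ra_via_la[symmetric])
qed

end

theorem YD_hom_iff_MP_hom:
  fixes sc :: "'k::field \<Rightarrow> 'h::ab_group_add \<Rightarrow> 'h" and sc' :: "'k \<Rightarrow> 'g::ab_group_add \<Rightarrow> 'g"
  assumes A: "is_YDPH sc A" and A': "is_YDPH sc' A'"
  shows "is_YD_hom sc sc' f A A' \<longleftrightarrow> is_MP_hom sc sc' f (toMP sc A) (toMP sc' A')"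
proof -
  let ?Y = "yd_post_hopf_map sc (ydelta A) (yeps A) (ymul A) (yone A) (yS A) (yact A) (betaOf sc A)
      (bulletOf A) (SOf sc A) (ractOf sc A) sc' (ydelta A') (yeps A') (ymul A') (yone A') (yS A')
      (yact A') (betaOf sc' A') (bulletOf A') (SOf sc' A') (ractOf sc' A') f"
  have Y: ?Y if "is_YD_hom sc sc' f A A' \<or> is_MP_hom sc sc' f (toMP sc A) (toMP sc' A')"
    using that yd_post_hopf_of_YDPH[OF A] yd_post_hopf_of_YDPH[OF A']
    unfolding yd_post_hopf_map_def yd_post_hopf_map_axioms_def coalgebra_map_def coalgebra_map_axioms_def
      yd_post_hopf_def is_YD_hom_def is_MP_hom_def toMP_def
    by auto
  show ?thesis
    using yd_post_hopf_map.bul_f[OF Y] yd_post_hopf_map.m_f[OF Y] yd_post_hopf_map.ra_f[OF Y]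
    unfolding is_YD_hom_def is_MP_hom_def toMP_def mpair.simps by blast
qed

theorem MP_hom_iff_YD_hom:
  fixes sc :: "'k::field \<Rightarrow> 'h::ab_group_add \<Rightarrow> 'h" and sc' :: "'k \<Rightarrow> 'g::ab_group_add \<Rightarrow> 'g"
  assumes M: "is_MP sc M" and M': "is_MP sc' M'"
  shows "is_MP_hom sc sc' f M M' \<longleftrightarrow> is_YD_hom sc sc' f (toYD M) (toYD M')"
proof -
  interpret X: matched_pair sc "bdelta M" "beps M" "bmul M" "bone M" "bT M" "lact M" "ract M"
    by (rule matched_pair_of_MP[OF M])
  interpret X': matched_pair sc' "bdelta M'" "beps M'" "bmul M'" "bone M'" "bT M'" "lact M'" "ract M'"
    by (rule matched_pair_of_MP[OF M'])
  let ?X = "matched_pair_map sc (bdelta M) (beps M) (bmul M) (bone M) (bT M) (lact M) (ract M)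
      sc' (bdelta M') (beps M') (bmul M') (bone M') (bT M') (lact M') (ract M') f"
  have "X.mp_struct = M" unfolding X.mp_struct_def by (cases M) simp
  moreover have "X'.mp_struct = M'" unfolding X'.mp_struct_def by (cases M') simp
  ultimately have toYD: "toYD M = toYD X.mp_struct" "toYD M' = toYD X'.mp_struct" by simp_all
  have X: ?X if "is_MP_hom sc sc' f M M' \<or> is_YD_hom sc sc' f (toYD M) (toYD M')"
    using that X.matched_pair_axioms X'.matched_pair_axioms
    unfolding matched_pair_map_def matched_pair_map_axioms_def coalgebra_map_def coalgebra_map_axioms_def
      matched_pair_def hopf_alg_def is_YD_hom_def is_MP_hom_def toYD X.y_simps X'.y_simps
    by auto
  note eqs = is_YD_hom_def is_MP_hom_def toYD X.y_simps X'.y_simps X.ymul_eq X'.ymul_eq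
  show ?thesis
  proof
    assume h: "is_MP_hom sc sc' f M M'"
    with X have "?X" by blast
    from matched_pair_map.dot_f[OF this] h show "is_YD_hom sc sc' f (toYD M) (toYD M')"
      unfolding eqs by blast
  next
    assume h: "is_YD_hom sc sc' f (toYD M) (toYD M')"
    with X have "?X" by blast
    from matched_pair_map.mul_f[OF this] matched_pair_map.ra_f[OF this] h show "is_MP_hom sc sc' f M M'"
      unfolding eqs by blast
  qed
qed

theorem corollary3:
  fixes sc :: "'k::field \<Rightarrow> 'h::ab_group_add \<Rightarrow> 'h"
    and sc' :: "'k \<Rightarrow> 'g::ab_group_add \<Rightarrow> 'g"
  shows
   "(\<forall>A. is_YDPH sc A \<longrightarrow> is_MP sc (toMP sc A) \<and> toYD (toMP sc A) = A)
  \<and> (\<forall>M. is_MP sc M \<longrightarrow> is_YDPH sc (toYD M) \<and> toMP sc (toYD M) = M)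
  \<and> (\<forall>(A :: ('k, 'h) ydph) (A' :: ('k, 'g) ydph) f. is_YDPH sc A \<and> is_YDPH sc' A' \<longrightarrow>
        (is_YD_hom sc sc' f A A' \<longleftrightarrow> is_MP_hom sc sc' f (toMP sc A) (toMP sc' A')))
  \<and> (\<forall>(M :: ('k, 'h) mpair) (M' :: ('k, 'g) mpair) f. is_MP sc M \<and> is_MP sc' M' \<longrightarrow>
        (is_MP_hom sc sc' f M M' \<longleftrightarrow> is_YD_hom sc sc' f (toYD M) (toYD M')))"
  using toMP_correct toYD_correct YD_hom_iff_MP_hom MP_hom_iff_YD_hom by blast

end
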